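(* Consider the smart-metering model described in the context, with a finite horizon $T$. Define $V_{T+1}\equiv 0$ on $\mathcal P_{X,S}$ and, for $t=T,T-1,\dots,1$, $$V_t(\pi)=\min_{a\in\mathcal A}\,[\mathscr B_a V_{t+1}](\pi),\qquad \pi\in\mathcal P_{X,S}.$$ Then: (1) each $V_t$ is continuous and concave on $\mathcal P_{X,S}$ (and the minimum is attained); (2) if $f_t^*(\pi)$ denotes a minimizer of the right-hand side, then the policy $\mathbf q^*$ given by $q^*_t(y\mid x^t,s^t,y^{t-1})=a_t(y\mid x_t,s_t)$ with $a_t=f^*_t(\pi_t)$, where $\pi_t$ is the belief state (computed by $\pi_1(x,s)=P_{X_1}(x)P_{S_1}(s)$ and $\pi_{t+1}=\varphi(\pi_t,y_t,a_t)$), is optimal, i.e. it minimizes $L_T$ over $\mathcal Q_A$; in particular there is no loss of optimality in restricting attention to policies of the form $q_t(y_t\mid x_t,s_t,\pi_t)$; (3) the optimal finite-horizon leakage rate $\min_{\mathbf q\in\mathcal Q_A}L_T(\mathbf q)$ equals $V_1(\pi_1)/T$ where $\pi_1(x,s)=P_{X_1}(x)P_{S_1}(s)$.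
   Context: Let $\mathcal X=\{0,\dots,m_x\}$, $\mathcal Y=\{0,\dots,m_y\}$, $\mathcal S=\{0,\dots,m_s\}$ with $m_x\le m_y$. The demand $\{X_t\}_{t\ge1}$ is a time-homogeneous first-order Markov chain on $\mathcal X$ with irreducible aperiodic transition matrix $Q(x'\mid x)$ and initial pmf $P_{X_1}$; the initial battery charge $S_1\in\mathcal S$ has pmf $P_{S_1}$ and is independent of $\{X_t\}$. For an integer $w$ let $\mathcal Y_\circ(w)=\{y\in\mathcal Y: w+y\in\mathcal S\}$. A charging policy $\mathbf q=(q_1,q_2,\dots)$ is a sequence of conditional pmfs $q_t(y\mid x^t,s^t,y^{t-1})$ on $\mathcal Y$ satisfying $\sum_{y\in\mathcal Y_\circ(s_t-x_t)}q_t(y\mid x^t,s^t,y^{t-1})=1$; $\mathcal Q_A$ denotes the set of all such policies. A policy induces the joint law $P^{\mathbf q}(s^T,x^T,y^T)=P_{S_1}(s_1)P_{X_1}(x_1)q_1(y_1|x_1,s_1)\prod_{t=2}^T\mathbf 1\{s_t=s_{t-1}-x_{t-1}+y_{t-1}\}Q(x_t|x_{t-1})q_t(y_t|x^t,s^t,y^{t-1})$ (so $S_{t+1}=S_t+Y_t-X_t$). The leakage rate is $L_T(\mathbf q)=\frac1T I^{\mathbf q}(X^T,S_1;Y^T)$. $\mathcal P_{X,S}$ is the set of pmfs on $\mathcal X\times\mathcal S$ and $\mathcal A$ is the set of conditional pmfs $a(y\mid x,s)$ from $\mathcal X\times\mathcal S$ to $\mathcal Y$ with $a(\mathcal Y_\circ(s-x)\mid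 x,s)=1$ for all $(x,s)$. For $a\in\mathcal A$, $\pi\in\mathcal P_{X,S}$, $I(a;\pi)$ is the mutual information between $(X,S)\sim\pi$ and $Y$ with $P(Y=y\mid X=x,S=s)=a(y\mid x,s)$. The filter is $$\varphi(\pi,y,a)(x',s')=\frac{\sum_{x\in\mathcal X}Q(x'\mid x)\,a(y\mid x,s'+x-y)\,\pi(x,s'+x-y)}{\sum_{(x,s)\in\mathcal X\times\mathcal S}a(y\mid x,s)\pi(x,s)}$$ (terms with $s'+x-y\notin\mathcal S$ are zero; if the denominator is zero, $\varphi$ is an arbitrary pmf). For $V:\mathcal P_{X,S}\to\mathbb R$, the Bellman operator is $[\mathscr B_aV](\pi)=I(a;\pi)+\sum_{x,s,y}\pi(x,s)a(y\mid x,s)V(\varphi(\pi,y,a))$. The belief state under a policy is $\pi_t(x,s)=P^{\mathbf q}(X_t=x,S_t=s\mid Y^{t-1}=y^{t-1})$. *)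

theory Defs
  imports "HOL-Analysis.Analysis"
begin

text \<open>Elements are integers; X = {0..mx}, Y = {0..my}, S = {0..ms}.
  A pmf on X x S is a function p :: int => int => real (p x s).
  A transition matrix is Q :: int => int => real with Q x x' = Q(x' | x).
  A conditional pmf a in the set A is a :: int => int => int => real with a x s y = a(y | x, s).
  A policy q is q :: nat => int list => int list => int list => int => real with
  q t xs ss ys y = q_t(y | x^t, s^t, y^(t-1)); lists are 0-indexed, so xs!0 = x_1.\<close>

type_synonym belief = "int \<Rightarrow> int \<Rightarrow> real"
type_synonym action = "int \<Rightarrow> int \<Rightarrow> int \<Rightarrow> real"
type_synonym policy = "nat \<Rightarrow> int list \<Rightarrow> int list \<Rightarrow> int list \<Rightarrow> int \<Rightarrow> real"

definition Yo :: "int \<Rightarrow> int \<Rightarrow> int \<Rightarrow> int set" where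
  "Yo my ms w = {y \<in> {0..my}. w + y \<in> {0..ms}}"

definition seqs :: "nat \<Rightarrow> 'a set \<Rightarrow> 'a list set" where
  "seqs n A = {l. length l = n \<and> set l \<subseteq> A}"

definition mutinf :: "'u set \<Rightarrow> 'v set \<Rightarrow> ('u \<Rightarrow> 'v \<Rightarrow> real) \<Rightarrow> real" where
  "mutinf U V p =
     (\<Sum>u\<in>U. \<Sum>v\<in>V. if p u v = 0 then 0
        else p u v * ln (p u v / ((\<Sum>v'\<in>V. p u v') * (\<Sum>u'\<in>U. p u' v))))"

definition stochastic :: "int \<Rightarrow> (int \<Rightarrow> int \<Rightarrow> real) \<Rightarrow> bool" where
  "stochastic mx Q \<longleftrightarrow> (\<forall>x\<in>{0..mx}. (\<forall>x'\<in>{0..mx}. Q x x' \<ge> 0) \<and> (\<Sum>x'\<in>{0..mx}. Q x x') = 1)"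

primrec Qpow :: "int \<Rightarrow> (int \<Rightarrow> int \<Rightarrow> real) \<Rightarrow> nat \<Rightarrow> int \<Rightarrow> int \<Rightarrow> real" where
  "Qpow mx Q 0 x x' = (if x = x' then 1 else 0)"
| "Qpow mx Q (Suc n) x x' = (\<Sum>z\<in>{0..mx}. Qpow mx Q n x z * Q z x')"

definition irreducible_chain :: "int \<Rightarrow> (int \<Rightarrow> int \<Rightarrow> real) \<Rightarrow> bool" where
  "irreducible_chain mx Q \<longleftrightarrow> (\<forall>x\<in>{0..mx}. \<forall>x'\<in>{0..mx}. \<exists>n>0. Qpow mx Q n x x' > 0)"

definition aperiodic_chain :: "int \<Rightarrow> (int \<Rightarrow> int \<Rightarrow> real) \<Rightarrow> bool" where
  "aperiodic_chain mx Q \<longleftrightarrow> (\<forall>x\<in>{0..mx}. Gcd {n::nat. n > 0 \<and> Qpow mx Q n x x > 0} = 1)"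

definition is_pmf_on :: "int set \<Rightarrow> (int \<Rightarrow> real) \<Rightarrow> bool" where
  "is_pmf_on A p \<longleftrightarrow> (\<forall>u\<in>A. p u \<ge> 0) \<and> (\<Sum>u\<in>A. p u) = 1"

definition PXS :: "int \<Rightarrow> int \<Rightarrow> belief set" where
  "PXS mx ms = {p. (\<forall>x s. p x s \<ge> 0) \<and> (\<forall>x s. (x, s) \<notin> {0..mx} \<times> {0..ms} \<longrightarrow> p x s = 0)
                    \<and> (\<Sum>x\<in>{0..mx}. \<Sum>s\<in>{0..ms}. p x s) = 1}"

definition Aset :: "int \<Rightarrow> int \<Rightarrow> int \<Rightarrow> action set" where
  "Aset mx my ms = {a. \<forall>x\<in>{0..mx}. \<forall>s\<in>{0..ms}.
      (\<forall>y\<in>{0..my}. a x s y \<ge> 0) \<and> (\<Sum>y\<in>{0..my}. a x s y) = 1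
      \<and> (\<Sum>y\<in>Yo my ms (s - x). a x s y) = 1}"

definition Ia :: "int \<Rightarrow> int \<Rightarrow> int \<Rightarrow> action \<Rightarrow> belief \<Rightarrow> real" where
  "Ia mx my ms a p = mutinf ({0..mx} \<times> {0..ms}) {0..my} (\<lambda>(x, s) y. p x s * a x s y)"

text \<open>The filter phi; when the denominator vanishes we (arbitrarily) return the point mass at (0,0).\<close>
definition filt :: "int \<Rightarrow> int \<Rightarrow> (int \<Rightarrow> int \<Rightarrow> real) \<Rightarrow> belief \<Rightarrow> int \<Rightarrow> action \<Rightarrow> belief" where
  "filt mx ms Q p y a = (\<lambda>x' s'.
     (let den = (\<Sum>x\<in>{0..mx}. \<Sum>s\<in>{0..ms}. a x s y * p x s) in
      if den = 0 then (if x' = 0 \<and> s' = 0 then 1 else 0)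
      else if x' \<in> {0..mx} \<and> s' \<in> {0..ms} then
        (\<Sum>x\<in>{0..mx}. if s' + x - y \<in> {0..ms}
             then Q x x' * a x (s' + x - y) y * p x (s' + x - y) else 0) / den
      else 0))"

definition bellman :: "int \<Rightarrow> int \<Rightarrow> int \<Rightarrow> (int \<Rightarrow> int \<Rightarrow> real) \<Rightarrow> action \<Rightarrow> (belief \<Rightarrow> real) \<Rightarrow> belief \<Rightarrow> real" where
  "bellman mx my ms Q a V p = Ia mx my ms a p
     + (\<Sum>x\<in>{0..mx}. \<Sum>s\<in>{0..ms}. \<Sum>y\<in>{0..my}. p x s * a x s y * V (filt mx ms Q p y a))"

text \<open>Value with k steps to go: W 0 = 0, W (k+1) = min_a B_a (W k).\<close>
primrec Wval :: "int \<Rightarrow> int \<Rightarrow> int \<Rightarrow> (int \<Rightarrow> int \<Rightarrow> real) \<Rightarrow> nat \<Rightarrow> belief \<Rightarrow> real" where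
  "Wval mx my ms Q 0 = (\<lambda>p. 0)"
| "Wval mx my ms Q (Suc k) = (\<lambda>p. INF a\<in>Aset mx my ms. bellman mx my ms Q a (Wval mx my ms Q k) p)"

definition Vfun :: "int \<Rightarrow> int \<Rightarrow> int \<Rightarrow> (int \<Rightarrow> int \<Rightarrow> real) \<Rightarrow> nat \<Rightarrow> nat \<Rightarrow> belief \<Rightarrow> real" where
  "Vfun mx my ms Q T t = Wval mx my ms Q (T + 1 - t)"

definition concave_fun_on :: "belief set \<Rightarrow> (belief \<Rightarrow> real) \<Rightarrow> bool" where
  "concave_fun_on P V \<longleftrightarrow> (\<forall>p1\<in>P. \<forall>p2\<in>P. \<forall>l::real. 0 \<le> l \<and> l \<le> 1 \<longrightarrow>
       l * V p1 + (1 - l) * V p2 \<le> V (\<lambda>x s. l * p1 x s + (1 - l) * p2 x s))"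

definition policies :: "int \<Rightarrow> int \<Rightarrow> int \<Rightarrow> policy set" where
  "policies mx my ms = {q. \<forall>t\<ge>1. \<forall>xs\<in>seqs t {0..mx}. \<forall>ss\<in>seqs t {0..ms}. \<forall>ys\<in>seqs (t - 1) {0..my}.
      (\<forall>y\<in>{0..my}. q t xs ss ys y \<ge> 0) \<and> (\<Sum>y\<in>{0..my}. q t xs ss ys y) = 1
      \<and> (\<Sum>y\<in>Yo my ms (last ss - last xs). q t xs ss ys y) = 1}"

definition joint :: "(int \<Rightarrow> real) \<Rightarrow> (int \<Rightarrow> real) \<Rightarrow> (int \<Rightarrow> int \<Rightarrow> real) \<Rightarrow> policy \<Rightarrow> nat
                      \<Rightarrow> int list \<Rightarrow> int list \<Rightarrow> int list \<Rightarrow> real" where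
  "joint PX1 PS1 Q q T ss xs ys =
     (\<Prod>i<T. (if i = 0 then PS1 (ss ! 0) * PX1 (xs ! 0)
              else (if ss ! i = ss ! (i - 1) - xs ! (i - 1) + ys ! (i - 1) then 1 else 0)
                   * Q (xs ! (i - 1)) (xs ! i))
            * q (Suc i) (take (Suc i) xs) (take (Suc i) ss) (take i ys) (ys ! i))"

definition leakage :: "int \<Rightarrow> int \<Rightarrow> int \<Rightarrow> (int \<Rightarrow> real) \<Rightarrow> (int \<Rightarrow> real) \<Rightarrow> (int \<Rightarrow> int \<Rightarrow> real)
                        \<Rightarrow> nat \<Rightarrow> policy \<Rightarrow> real" where
  "leakage mx my ms PX1 PS1 Q T q =
     mutinf (seqs T {0..mx} \<times> {0..ms}) (seqs T {0..my})
        (\<lambda>(xs, s1) ys. \<Sum>ss\<in>{ss\<in>seqs T {0..ms}. ss ! 0 = s1}. joint PX1 PS1 Q q T ss xs ys) / real T"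

definition pi1 :: "int \<Rightarrow> int \<Rightarrow> (int \<Rightarrow> real) \<Rightarrow> (int \<Rightarrow> real) \<Rightarrow> belief" where
  "pi1 mx ms PX1 PS1 = (\<lambda>x s. if x \<in> {0..mx} \<and> s \<in> {0..ms} then PX1 x * PS1 s else 0)"

text \<open>Belief recursion along the observed y's: beliefs ... ys n = pi_{n+1},
  pi_{n+1} = phi(pi_n, y_n, f_n(pi_n)).\<close>
primrec beliefs :: "int \<Rightarrow> int \<Rightarrow> (int \<Rightarrow> int \<Rightarrow> real) \<Rightarrow> (nat \<Rightarrow> belief \<Rightarrow> action) \<Rightarrow> belief
                     \<Rightarrow> int list \<Rightarrow> nat \<Rightarrow> belief" where
  "beliefs mx ms Q f p1 ys 0 = p1"
| "beliefs mx ms Q f p1 ys (Suc n) =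
     filt mx ms Q (beliefs mx ms Q f p1 ys n) (ys ! n) (f (Suc n) (beliefs mx ms Q f p1 ys n))"

text \<open>A fixed admissible action used after the horizon (irrelevant for L_T):
  charge exactly the deficit max(0, x - s).\<close>
definition a_default :: action where
  "a_default x s y = (if y = max 0 (x - s) then 1 else 0)"

definition qstar :: "int \<Rightarrow> int \<Rightarrow> (int \<Rightarrow> int \<Rightarrow> real) \<Rightarrow> nat \<Rightarrow> (nat \<Rightarrow> belief \<Rightarrow> action) \<Rightarrow> belief \<Rightarrow> policy" where
  "qstar mx ms Q T f p1 t xs ss ys y =
     (if t \<le> T then f t (beliefs mx ms Q f p1 ys (t - 1)) else a_default) (last xs) (last ss) y"

end

theory Submission
  imports Defs "HOL-Real_Asymp.Real_Asymp"
begin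

text \<open>Concavity of the value functions is proved by backward induction.  For a fixed action a,
  the information term I(a; \<pi>) is the entropy of the output law, which is concave in \<pi>, minus
  a term linear in \<pi>; and \<pi> \<mapsto> \<Sum>y. P(y) V(\<phi>(\<pi>, y, a)) is the perspective of the
  concave function V, hence concave; an infimum of concave functions is concave.  Continuity
  follows from the same induction: B_a V is continuous in (\<pi>, a), which makes the infimum upper
  semicontinuous, while concavity and nonnegativity give V(\<pi>') \<ge> (1 - \<lambda>) V(\<pi>) whenever
  \<pi>' \<ge> (1 - \<lambda>) \<pi> pointwise, which yields lower semicontinuity.  The infimum is attained since
  the set of actions is compact.

  For optimality, fix any policy q, let \<pi>_n be the law of (X_(n+1), S_(n+1)) given Y^n and a_n
  the law of Y_(n+1) given (X_(n+1), S_(n+1), Y^n) under q.  The chain rule writes T L_T(q) as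
  \<Sum>n. E[I(a_n; \<pi>_n)] plus Kullback-Leibler divergences of q from a_n, which are nonnegative,
  while \<pi>_(n+1) = \<phi>(\<pi>_n, Y_(n+1), a_n) gives
  E[V_(n+1)(\<pi>_n)] \<le> E[I(a_n; \<pi>_n)] + E[V_(n+2)(\<pi>_(n+1))].  Telescoping yields
  V_1(\<pi>_1) \<le> T L_T(q), with equality for the policy built from minimisers, for which the
  divergences vanish.\<close>

lemma sum_shift_if:
  fixes c :: int and A :: "int set"
  assumes "finite A"
  shows "(\<Sum>s'\<in>A. if s' + c \<in> A then f (s' + c) else (0::real)) = (\<Sum>s\<in>A. if s - c \<in> A then f s else 0)"
proof -
  have "(\<Sum>s'\<in>A. if s' + c \<in> A then f (s' + c) else (0::real)) = (\<Sum>s'\<in>{s'\<in>A. s' + c \<in> A}. f (s' + c))"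
    using assms by (simp add: sum.inter_filter)
  also have "\<dots> = (\<Sum>s\<in>(\<lambda>s'. s' + c) ` {s'\<in>A. s' + c \<in> A}. f s)"
    by (subst sum.reindex) (auto simp: inj_on_def)
  also have "(\<lambda>s'. s' + c) ` {s'\<in>A. s' + c \<in> A} = {s\<in>A. s - c \<in> A}"
    by (auto simp: image_iff) (metis diff_add_cancel)
  also have "(\<Sum>s\<in>{s\<in>A. s - c \<in> A}. f s) = (\<Sum>s\<in>A. if s - c \<in> A then f s else 0)"
    using assms by (simp add: sum.inter_filter)
  finally show ?thesis .
qed

lemma sum_indicator_mult:
  assumes "finite A" "v \<in> A"
  shows "(\<Sum>s\<in>A. (if s = v then 1 else 0) * f s) = (f v :: real)"
proof -
  have "(\<Sum>s\<in>A. (if s = v then 1 else 0) * f s) = (\<Sum>s\<in>A. if s = v then f v else 0)"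
    by (rule sum.cong) auto
  then show ?thesis using assms by simp
qed

lemma sum_indicator_shift:
  fixes x y s' :: int and A :: "int set"
  assumes "finite A"
  shows "(\<Sum>s\<in>A. f s * ((if s' = s - x + y then 1 else 0) * c)) = (if s' + x - y \<in> A then f (s' + x - y) * c else (0::real))"
proof -
  have e: "\<And>s. (s' = s - x + y) = (s = s' + x - y)" by (auto simp: algebra_simps)
  have "(\<Sum>s\<in>A. f s * ((if s' = s - x + y then 1 else 0) * c)) = (\<Sum>s\<in>A. if s = s' + x - y then f s * c else 0)"
    by (rule sum.cong) (simp_all add: e)
  then show ?thesis using assms by (simp add: sum.delta)
qed

lemma sum_swap3: "(\<Sum>a\<in>A. \<Sum>b\<in>B. \<Sum>c\<in>C. f a b c) = (\<Sum>c\<in>C. \<Sum>a\<in>A. \<Sum>b\<in>B. f a b c)"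
proof -
  have "(\<Sum>a\<in>A. \<Sum>b\<in>B. \<Sum>c\<in>C. f a b c) = (\<Sum>a\<in>A. \<Sum>c\<in>C. \<Sum>b\<in>B. f a b c)"
    by (rule sum.cong[OF refl], rule sum.swap)
  also have "\<dots> = (\<Sum>c\<in>C. \<Sum>a\<in>A. \<Sum>b\<in>B. f a b c)" by (rule sum.swap)
  finally show ?thesis .
qed

lemma sum_swap4:
  "(\<Sum>a\<in>A. \<Sum>b\<in>B. \<Sum>c\<in>C. \<Sum>d\<in>D. f a b c d)
      = (\<Sum>c\<in>C. \<Sum>d\<in>D. \<Sum>a\<in>A. \<Sum>b\<in>B. f a b c d)"
proof -
  have "(\<Sum>a\<in>A. \<Sum>b\<in>B. \<Sum>c\<in>C. \<Sum>d\<in>D. f a b c d)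
      = (\<Sum>c\<in>C. \<Sum>a\<in>A. \<Sum>b\<in>B. \<Sum>d\<in>D. f a b c d)"
    by (rule sum_swap3)
  also have "\<dots> = (\<Sum>c\<in>C. \<Sum>d\<in>D. \<Sum>a\<in>A. \<Sum>b\<in>B. f a b c d)"
    by (rule sum.cong[OF refl], rule sum_swap3)
  finally show ?thesis .
qed

lemma sum_cartesian5:
  "(\<Sum>(a,b,c,d,e)\<in>A \<times> B \<times> C \<times> D \<times> E. f a b c d e)
   = (\<Sum>a\<in>A. \<Sum>b\<in>B. \<Sum>c\<in>C. \<Sum>d\<in>D. \<Sum>e\<in>E. f a b c d e)"
  by (simp add: sum.cartesian_product split_beta)

lemma member_le_sum2:
  fixes f :: "'a \<Rightarrow> 'b \<Rightarrow> real"
  assumes "finite A" "finite B" "a \<in> A" "b \<in> B" "\<And>a b. a \<in> A \<Longrightarrow> b \<in> B \<Longrightarrow> 0 \<le> f a b"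
  shows "f a b \<le> (\<Sum>a\<in>A. \<Sum>b\<in>B. f a b)"
proof -
  have "f a b \<le> (\<Sum>b\<in>B. f a b)" using assms by (intro member_le_sum) auto
  also have "\<dots> \<le> (\<Sum>a\<in>A. \<Sum>b\<in>B. f a b)"
    using assms by (intro member_le_sum[where f = "\<lambda>a. \<Sum>b\<in>B. f a b"] sum_nonneg) auto
  finally show ?thesis .
qed

lemma sum_nonneg_eq_0D:
  fixes f :: "'a \<Rightarrow> real"
  shows "finite A \<Longrightarrow> (\<And>x. x \<in> A \<Longrightarrow> 0 \<le> f x) \<Longrightarrow> sum f A = 0
    \<Longrightarrow> x \<in> A \<Longrightarrow> f x = 0"
  by (metis sum_nonneg_eq_0_iff)

lemma sum_subset_eq_1_imp_0:
  fixes g :: "'a \<Rightarrow> real"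
  assumes "finite B" "C \<subseteq> B" "\<forall>y\<in>B. g y \<ge> 0" "sum g B = 1" "sum g C = 1" "y \<in> B" "y \<notin> C"
  shows "g y = 0"
proof -
  have "sum g B = sum g C + sum g (B - C)" using assms
    by (metis add.commute finite_subset sum.subset_diff)
  then have "sum g (B - C) = 0" using assms by simp
  then show ?thesis using assms by (intro sum_nonneg_eq_0D[of "B - C" g]) auto
qed

lemma sum_single_nonzero_apply:
  fixes f :: "'a \<Rightarrow> real"
  assumes fin: "finite A" and u: "\<And>a b. a \<in> A \<Longrightarrow> b \<in> A \<Longrightarrow> f a \<noteq> 0
      \<Longrightarrow> f b \<noteq> 0 \<Longrightarrow> a = b"
    and g0: "g 0 = 0"
  shows "g (sum f A) = (\<Sum>a\<in>A. g (f a))"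
proof (cases "\<exists>a\<in>A. f a \<noteq> 0")
  case False
  then show ?thesis using g0 by simp
next
  case True
  then obtain a where a: "a \<in> A" "f a \<noteq> 0" by blast
  have z: "\<And>b. b \<in> A - {a} \<Longrightarrow> f b = 0" using u a by blast
  have "sum f A = f a" using fin a z by (simp add: sum.remove)
  moreover have "(\<Sum>a\<in>A. g (f a)) = g (f a)" using fin a z g0 by (simp add: sum.remove)
  ultimately show ?thesis by simp
qed

definition xlog_ratio :: "real \<Rightarrow> real \<Rightarrow> real" where
  "xlog_ratio z c = (if z = 0 then 0 else z * ln (z / c))"

lemma mutinf_eq_sum_xlog_ratio:
  "mutinf U V p = (\<Sum>u\<in>U. \<Sum>v\<in>V. xlog_ratio (p u v) ((\<Sum>v'\<in>V. p u v') * (\<Sum>u'\<in>U. p u' v)))"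
  by (simp add: mutinf_def xlog_ratio_def)

lemma mutinf_cong:
  assumes "\<And>u v. u \<in> U \<Longrightarrow> v \<in> V \<Longrightarrow> f u v = g u v"
  shows "mutinf U V f = mutinf U V g"
proof -
  have "\<And>u. u \<in> U \<Longrightarrow> (\<Sum>v'\<in>V. f u v') = (\<Sum>v'\<in>V. g u v')"
    and "\<And>v. v \<in> V \<Longrightarrow> (\<Sum>u'\<in>U. f u' v) = (\<Sum>u'\<in>U. g u' v)"
    by (auto intro!: sum.cong simp: assms)
  then show ?thesis unfolding mutinf_def by (intro sum.cong refl) (simp add: assms)
qed

lemma diff_le_mult_ln_diff:
  fixes u v :: real
  assumes "0 \<le> u" "0 < v"
  shows "u - v \<le> u * (ln u - ln v)"
proof (cases "u = 0")
  case False
  then have "ln (v / u) \<le> v / u - 1" using assms by (intro ln_le_minus_one) simp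
  then have "u * ln (v / u) \<le> u * (v / u - 1)" using assms by (intro mult_left_mono) auto
  then show ?thesis using assms False by (simp add: ln_div algebra_simps)
qed (use assms in simp)

lemma convex_comb_xlnx_le:
  fixes u v l :: real
  assumes "0 \<le> u" "0 \<le> v" "0 \<le> l" "l \<le> 1"
  shows "(l * u + (1-l) * v) * ln (l * u + (1-l) * v) \<le> l * (u * ln u) + (1-l) * (v * ln v)"
proof -
  define z where "z = l * u + (1-l) * v"
  have z0: "z \<ge> 0" using assms by (simp add: z_def)
  show ?thesis
  proof (cases "z = 0")
    case True
    then have "l * u = 0" "(1-l) * v = 0" using assms unfolding z_def
      by (smt (verit) mult_nonneg_nonneg)+
    then have "l * (u * ln u) = 0" "(1-l) * (v * ln v) = 0" by (simp_all add: mult.assoc[symmetric])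
    moreover have "(l * u + (1-l) * v) * ln (l * u + (1-l) * v) = 0" using True by (simp add: z_def)
    ultimately show ?thesis by linarith
  next
    case False
    then have zp: "z > 0" using z0 by simp
    have "u * ln u \<ge> u * ln z + u - z" "v * ln v \<ge> v * ln z + v - z"
      using diff_le_mult_ln_diff[OF assms(1) zp] diff_le_mult_ln_diff[OF assms(2) zp]
      by (simp_all add: algebra_simps)
    then have "l * (u * ln u) + (1-l) * (v * ln v) \<ge> l * (u * ln z + u - z) + (1-l) * (v * ln z + v - z)"
      using assms by (intro add_mono mult_left_mono) auto
    also have "l * (u * ln z + u - z) + (1-l) * (v * ln z + v - z) = z * ln z"
      by (simp add: z_def algebra_simps)
    finally show ?thesis by (simp add: z_def)
  qed
qed

lemma neg_xlnx_le_1: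
  fixes t :: real
  assumes "0 \<le> t"
  shows "- (t * ln t) \<le> 1"
  using diff_le_mult_ln_diff[OF assms, of 1] assms by simp

lemma continuous_on_xlnx: "continuous_on {0..} (\<lambda>x::real. x * ln x)"
  unfolding continuous_on_eq_continuous_within
proof
  fix x :: real assume x: "x \<in> {0..}"
  show "continuous (at x within {0..}) (\<lambda>x. x * ln x)"
  proof (cases "x = 0")
    case True
    have e: "at (0::real) within {0 ..} = at_right 0"
      by (auto simp: filter_eq_iff eventually_at_filter le_less)
    have "((\<lambda>x::real. x * ln x) \<longlongrightarrow> 0) (at_right 0)" by real_asymp
    then show ?thesis using True by (simp add: continuous_within e)
  next
    case False
    then have "((\<lambda>x. x * ln x) \<longlongrightarrow> x * ln x) (at x within {0..})"
      by (intro tendsto_intros) auto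
    then show ?thesis by (simp add: continuous_within)
  qed
qed

lemma tendsto_xlnx:
  fixes f :: "'c \<Rightarrow> real"
  assumes "(f \<longlongrightarrow> t) F" "\<forall>\<^sub>F n in F. f n \<ge> 0" "t \<ge> 0"
  shows "((\<lambda>n. f n * ln (f n)) \<longlongrightarrow> t * ln t) F"
  using continuous_on_tendsto_compose[OF continuous_on_xlnx assms(1)] assms(2,3) by auto

lemma tendsto_fun_iff:
  "((f :: 'c \<Rightarrow> 'a \<Rightarrow> 'b::topological_space) \<longlongrightarrow> l) F \<longleftrightarrow>
      (\<forall>i. ((\<lambda>c. f c i) \<longlongrightarrow> l i) F)"
  using limitin_componentwise[of "\<lambda>_. euclidean" UNIV f l F]
  by (simp add: euclidean_product_topology)

lemma tendsto_belief_iff: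
  "((P :: 'c \<Rightarrow> int \<Rightarrow> int \<Rightarrow> real) \<longlongrightarrow> p) F
      \<longleftrightarrow> (\<forall>x s. ((\<lambda>n. P n x s) \<longlongrightarrow> p x s) F)"
  by (simp add: tendsto_fun_iff)

lemma tendsto_action_iff:
  "((A :: 'c \<Rightarrow> int \<Rightarrow> int \<Rightarrow> int \<Rightarrow> real) \<longlongrightarrow> a) F
      \<longleftrightarrow> (\<forall>x s y. ((\<lambda>n. A n x s y) \<longlongrightarrow> a x s y) F)"
  by (simp add: tendsto_fun_iff)

lemma compact_funcset_UNIV:
  assumes "compact S"
  shows "compact {f :: 'a \<Rightarrow> 'b::topological_space. \<forall>i. f i \<in> S}"
proof -
  have e: "{f :: 'a \<Rightarrow> 'b. \<forall>i. f i \<in> S} = PiE UNIV (\<lambda>_. S)"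
    by (auto simp: PiE_UNIV_domain Pi_def)
  have "compactin (product_topology (\<lambda>_. euclidean) UNIV) (PiE UNIV (\<lambda>_. S::'b set))"
    using assms by (simp add: compactin_PiE)
  then show ?thesis unfolding e by (simp add: euclidean_product_topology)
qed

lemma seqs_0: "seqs 0 A = {[]}"
  by (auto simp: seqs_def)

lemma seqs_Suc: "seqs (Suc n) A = (\<lambda>(l, a). l @ [a]) ` (seqs n A \<times> A)"
proof (intro set_eqI iffI)
  fix l assume "l \<in> seqs (Suc n) A"
  then have l: "length l = Suc n" "set l \<subseteq> A" by (auto simp: seqs_def)
  then have "l = butlast l @ [last l]" by (metis append_butlast_last_id list.size(3) nat.distinct(1))
  moreover have "butlast l \<in> seqs n A" using l by (auto simp: seqs_def dest: in_set_butlastD)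
  moreover have "last l \<in> A" using l by (metis last_in_set list.size(3) nat.distinct(1) subset_code(1))
  ultimately show "l \<in> (\<lambda>(l, a). l @ [a]) ` (seqs n A \<times> A)"
    by (auto intro!: image_eqI[where x="(butlast l, last l)"])
qed (auto simp: seqs_def)

lemma finite_seqs: "finite A \<Longrightarrow> finite (seqs n A)"
  by (induction n) (auto simp: seqs_0 seqs_Suc)

lemma sum_seqs_Suc:
  assumes "finite A"
  shows "(\<Sum>l\<in>seqs (Suc n) A. f l) = (\<Sum>l\<in>seqs n A. \<Sum>a\<in>A. f (l @ [a]))"
proof -
  have inj: "inj_on (\<lambda>(l, a). l @ [a]) (seqs n A \<times> A)" by (auto simp: inj_on_def)
  have "(\<Sum>l\<in>seqs (Suc n) A. f l) = (\<Sum>p\<in>seqs n A \<times> A. f ((\<lambda>(l, a). l @ [a]) p))"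
    unfolding seqs_Suc by (rule sum.reindex[OF inj, unfolded o_def])
  also have "\<dots> = (\<Sum>l\<in>seqs n A. \<Sum>a\<in>A. f (l @ [a]))"
    by (simp add: sum.cartesian_product split_beta)
  finally show ?thesis .
qed

lemma sum_seqs_1: "finite A \<Longrightarrow> (\<Sum>l\<in>seqs (Suc 0) A. F l) = (\<Sum>a\<in>A. F [a])"
  by (simp add: sum_seqs_Suc seqs_0)

lemma snoc_in_seqs_iff: "l @ [a] \<in> seqs (Suc n) A \<longleftrightarrow> l \<in> seqs n A \<and> a \<in> A"
  by (auto simp: seqs_def)

lemma seqs_SucE:
  assumes "l \<in> seqs (Suc n) A"
  obtains l0 a where "l = l0 @ [a]" "l0 \<in> seqs n A" "a \<in> A"
  using assms unfolding seqs_Suc by auto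

lemma seqs_nth: "l \<in> seqs n A \<Longrightarrow> i < n \<Longrightarrow> l ! i \<in> A"
  by (auto simp: seqs_def)

lemma sum_seqs_group_first:
  assumes "finite A"
  shows "(\<Sum>a\<in>A. \<Sum>l\<in>{l \<in> seqs (Suc n) A. l ! 0 = a}. F l) = (\<Sum>l\<in>seqs (Suc n) A. F l)"
  using assms by (intro sum.group) (auto simp: finite_seqs intro: seqs_nth)

lemma seqs_last: "l \<in> seqs (Suc n) A \<Longrightarrow> last l \<in> A"
  by (erule seqs_SucE) simp

lemma Yo_support:
  fixes g :: "int \<Rightarrow> real"
  assumes "\<forall>y\<in>{0..my}. g y \<ge> 0" "(\<Sum>y\<in>{0..my}. g y) = 1" "(\<Sum>y\<in>Yo my ms w. g y) = 1"
    and "y \<in> {0..my}" "g y \<noteq> 0"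
  shows "w + y \<in> {0..ms}"
proof (rule ccontr)
  assume "w + y \<notin> {0..ms}"
  then have "g y = 0"
    using assms by (intro sum_subset_eq_1_imp_0[of "{0..my}" "Yo my ms w" g]) (auto simp: Yo_def)
  then show False using assms(5) by simp
qed

locale smart_meter =
  fixes mx my ms :: int and Q :: "int \<Rightarrow> int \<Rightarrow> real"
  assumes mx0: "0 \<le> mx" and mxy: "mx \<le> my" and ms0: "0 \<le> ms" and stoch: "stochastic mx Q"
begin

lemma Q_nonneg: "x \<in> {0..mx} \<Longrightarrow> x' \<in> {0..mx} \<Longrightarrow> Q x x' \<ge> 0"
  using stoch by (auto simp: stochastic_def)
lemma Q_row_sum: "x \<in> {0..mx} \<Longrightarrow> (\<Sum>x'\<in>{0..mx}. Q x x') = 1"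
  using stoch by (auto simp: stochastic_def)

lemma Aset_nonneg: "a \<in> Aset mx my ms \<Longrightarrow> x \<in> {0..mx} \<Longrightarrow> s \<in> {0..ms}
    \<Longrightarrow> y \<in> {0..my} \<Longrightarrow> a x s y \<ge> 0"
  by (auto simp: Aset_def)
lemma Aset_sum: "a \<in> Aset mx my ms \<Longrightarrow> x \<in> {0..mx} \<Longrightarrow> s \<in> {0..ms}
    \<Longrightarrow> (\<Sum>y\<in>{0..my}. a x s y) = 1"
  by (auto simp: Aset_def)

lemma Aset_charge_in_range:
  assumes "a \<in> Aset mx my ms" "x \<in> {0..mx}" "s \<in> {0..ms}" "y \<in> {0..my}" "a x s y \<noteq> 0"
  shows "s - x + y \<in> {0..ms}"
  using Yo_support[where my = my and ms = ms and g = "a x s" and w = "s - x"] assms by (auto simp: Aset_def)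

lemma a_default_Aset: "a_default \<in> Aset mx my ms"
  unfolding Aset_def
proof (intro CollectI ballI conjI)
  fix x s assume xs: "x \<in> {0..mx}" "s \<in> {0..ms}"
  show "\<And>y. 0 \<le> a_default x s y" by (simp add: a_default_def)
  have "max 0 (x - s) \<in> {0..my}" using xs mxy by auto
  then show "(\<Sum>y\<in>{0..my}. a_default x s y) = 1" by (simp add: a_default_def)
  have "finite (Yo my ms (s - x))" by (rule finite_subset[of _ "{0..my}"]) (auto simp: Yo_def)
  moreover have "max 0 (x - s) \<in> Yo my ms (s - x)" using xs mxy ms0 by (auto simp: Yo_def)
  ultimately show "(\<Sum>y\<in>Yo my ms (s - x). a_default x s y) = 1" by (simp add: a_default_def)
qed

lemma PXS_nonneg: "p \<in> PXS mx ms \<Longrightarrow> p x s \<ge> 0" by (simp add: PXS_def)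
lemma PXS_outside: "p \<in> PXS mx ms \<Longrightarrow> \<not> (x \<in> {0..mx} \<and> s \<in> {0..ms})
    \<Longrightarrow> p x s = 0" by (auto simp: PXS_def)
lemma PXS_sum: "p \<in> PXS mx ms \<Longrightarrow> (\<Sum>x\<in>{0..mx}. \<Sum>s\<in>{0..ms}. p x s) = 1" by (simp add: PXS_def)

definition out_prob :: "belief \<Rightarrow> action \<Rightarrow> int \<Rightarrow> real" where
  "out_prob p a y = (\<Sum>x\<in>{0..mx}. \<Sum>s\<in>{0..ms}. a x s y * p x s)"

lemma out_prob_nonneg: "p \<in> PXS mx ms \<Longrightarrow> a \<in> Aset mx my ms \<Longrightarrow> y \<in> {0..my}
    \<Longrightarrow> out_prob p a y \<ge> 0"
  unfolding out_prob_def by (intro sum_nonneg mult_nonneg_nonneg) (auto simp: Aset_nonneg PXS_nonneg)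

lemma out_prob_sum: assumes "p \<in> PXS mx ms" "a \<in> Aset mx my ms" shows "(\<Sum>y\<in>{0..my}. out_prob p a y) = 1"
proof -
  have "(\<Sum>y\<in>{0..my}. out_prob p a y) = (\<Sum>x\<in>{0..mx}. \<Sum>s\<in>{0..ms}. (\<Sum>y\<in>{0..my}. a x s y) * p x s)"
    unfolding out_prob_def by (simp add: sum.swap[of _ "{0..my}"] sum_distrib_right)
  also have "\<dots> = (\<Sum>x\<in>{0..mx}. \<Sum>s\<in>{0..ms}. p x s)"
    by (intro sum.cong refl) (simp add: Aset_sum assms)
  finally show ?thesis using PXS_sum assms by simp
qed

lemma out_prob_zero_terms:
  assumes "p \<in> PXS mx ms" "a \<in> Aset mx my ms" "y \<in> {0..my}" "out_prob p a y = 0"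
    "x \<in> {0..mx}" "s \<in> {0..ms}"
  shows "a x s y * p x s = 0"
proof -
  have nn: "\<And>x s. x \<in> {0..mx} \<Longrightarrow> s \<in> {0..ms} \<Longrightarrow> a x s y * p x s \<ge> 0"
    using assms by (auto simp: Aset_nonneg PXS_nonneg)
  have z: "(\<Sum>s\<in>{0..ms}. a x s y * p x s) = 0"
    using assms(4,5) nn unfolding out_prob_def
    by (intro sum_nonneg_eq_0D[of "{0..mx}" "\<lambda>x. \<Sum>s\<in>{0..ms}. a x s y * p x s" x]) (auto intro!: sum_nonneg)
  show ?thesis
    by (rule sum_nonneg_eq_0D[of "{0..ms}" "\<lambda>s. a x s y * p x s" s]) (use assms nn z in auto)
qed

definition filt_num :: "belief \<Rightarrow> action \<Rightarrow> int \<Rightarrow> belief" where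
  "filt_num p a y = (\<lambda>x' s'. if x' \<in> {0..mx} \<and> s' \<in> {0..ms} then
      (\<Sum>x\<in>{0..mx}. if s' + x - y \<in> {0..ms} then Q x x' * a x (s' + x - y) y * p x (s' + x - y) else 0) else 0)"

lemma filt_eq_normalized: "filt mx ms Q p y a = (if out_prob p a y = 0 then (\<lambda>x' s'. if x' = 0 \<and> s' = 0 then 1 else 0)
   else (\<lambda>x' s'. filt_num p a y x' s' / out_prob p a y))"
  by (auto simp: filt_def out_prob_def filt_num_def Let_def fun_eq_iff)

lemma filt_num_nonneg: "p \<in> PXS mx ms \<Longrightarrow> a \<in> Aset mx my ms \<Longrightarrow> y \<in> {0..my}
    \<Longrightarrow> filt_num p a y x' s' \<ge> 0"
  unfolding filt_num_def
  by (auto intro!: sum_nonneg mult_nonneg_nonneg simp: Q_nonneg Aset_nonneg PXS_nonneg)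

lemma filt_num_sum:
  assumes "p \<in> PXS mx ms" "a \<in> Aset mx my ms" "y \<in> {0..my}"
  shows "(\<Sum>x'\<in>{0..mx}. \<Sum>s'\<in>{0..ms}. filt_num p a y x' s') = out_prob p a y"
proof -
  define g where "g x s' = (if s' + x - y \<in> {0..ms} then a x (s' + x - y) y * p x (s' + x - y) else 0)" for x s'
  have e1: "filt_num p a y x' s' = (\<Sum>x\<in>{0..mx}. Q x x' * g x s')" if "x' \<in> {0..mx}" "s' \<in> {0..ms}" for x' s'
    using that unfolding filt_num_def g_def by (auto intro!: sum.cong)
  have "(\<Sum>x'\<in>{0..mx}. \<Sum>s'\<in>{0..ms}. filt_num p a y x' s')
     = (\<Sum>x'\<in>{0..mx}. \<Sum>s'\<in>{0..ms}. \<Sum>x\<in>{0..mx}. Q x x' * g x s')"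
    by (intro sum.cong refl e1) auto
  also have "\<dots> = (\<Sum>x\<in>{0..mx}. \<Sum>x'\<in>{0..mx}. \<Sum>s'\<in>{0..ms}. Q x x' * g x s')"
    by (rule sum_swap3)
  also have "\<dots> = (\<Sum>x\<in>{0..mx}. \<Sum>s'\<in>{0..ms}. (\<Sum>x'\<in>{0..mx}. Q x x') * g x s')"
    by (rule sum.cong[OF refl], subst sum.swap) (simp add: sum_distrib_right)
  also have "\<dots> = (\<Sum>x\<in>{0..mx}. \<Sum>s'\<in>{0..ms}. (\<Sum>x'\<in>{0..mx}. Q x x')
      * (if s' + x - y \<in> {0..ms} then a x (s' + x - y) y * p x (s' + x - y) else 0))"
    by (simp add: g_def)
  also have "\<dots> = (\<Sum>x\<in>{0..mx}. \<Sum>s'\<in>{0..ms}.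
      (if s' + (x - y) \<in> {0..ms} then a x (s' + (x - y)) y * p x (s' + (x - y)) else 0))"
    by (intro sum.cong refl) (simp add: Q_row_sum algebra_simps)
  also have "\<dots> = (\<Sum>x\<in>{0..mx}. \<Sum>s\<in>{0..ms}. (if s - (x - y) \<in> {0..ms} then a x s y * p x s else 0))"
    by (intro sum.cong refl sum_shift_if) simp
  also have "\<dots> = (\<Sum>x\<in>{0..mx}. \<Sum>s\<in>{0..ms}. a x s y * p x s)"
    using Aset_charge_in_range[OF assms(2) _ _ assms(3)] by (intro sum.cong refl) (auto simp: algebra_simps)
  finally show ?thesis by (simp add: out_prob_def)
qed

lemma filt_num_zero:
  assumes "p \<in> PXS mx ms" "a \<in> Aset mx my ms" "y \<in> {0..my}" "out_prob p a y = 0"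
  shows "filt_num p a y x' s' = 0"
proof -
  have "\<And>x. x \<in> {0..mx} \<Longrightarrow> s' + x - y \<in> {0..ms} \<Longrightarrow> a x (s' + x - y) y * p x (s' + x - y) = 0"
    using out_prob_zero_terms[OF assms] by auto
  then show ?thesis unfolding filt_num_def by (auto intro!: sum.neutral)
qed

lemma point_mass_PXS: "(\<lambda>x' s'. if x' = 0 \<and> s' = 0 then 1 else 0) \<in> PXS mx ms"
proof -
  have h: "\<And>x. (\<Sum>s'\<in>{0..ms}. if x = 0 \<and> s' = 0 then 1 else (0::real)) = (if x = 0 then 1 else 0)"
    using ms0 by (auto simp: sum.delta)
  have "(\<Sum>x\<in>{0..mx}. \<Sum>s'\<in>{0..ms}. if x = 0 \<and> s' = 0 then 1 else (0::real))
      = (\<Sum>x\<in>{0..mx}. if x = 0 then 1 else (0::real))"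
    by (simp only: h)
  also have "\<dots> = 1" using mx0 by (simp add: sum.delta)
  finally have "(\<Sum>x\<in>{0..mx}. \<Sum>s'\<in>{0..ms}. if x = 0 \<and> s' = 0 then 1 else (0::real)) = 1" .
  then show ?thesis using mx0 ms0 by (auto simp: PXS_def)
qed

lemma filt_PXS:
  assumes "p \<in> PXS mx ms" "a \<in> Aset mx my ms" "y \<in> {0..my}"
  shows "filt mx ms Q p y a \<in> PXS mx ms"
proof (cases "out_prob p a y = 0")
  case True then show ?thesis by (simp add: filt_eq_normalized point_mass_PXS)
next
  case False
  then have pos: "out_prob p a y > 0" using out_prob_nonneg[OF assms] by simp
  show ?thesis using False pos filt_num_nonneg[OF assms] filt_num_sum[OF assms]
    by (auto simp: filt_eq_normalized PXS_def filt_num_def sum_divide_distrib[symmetric] simp del: sum_divide_distrib)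
qed

lemma Aset_le_1:
  assumes "a \<in> Aset mx my ms" "x \<in> {0..mx}" "s \<in> {0..ms}" "y \<in> {0..my}"
  shows "a x s y \<le> 1"
proof -
  have "a x s y \<le> (\<Sum>y\<in>{0..my}. a x s y)" using assms
    by (intro member_le_sum) (auto simp: Aset_nonneg)
  then show ?thesis using Aset_sum assms by simp
qed

lemma out_prob_ge_term:
  assumes "p \<in> PXS mx ms" "a \<in> Aset mx my ms" "y \<in> {0..my}" "x \<in> {0..mx}" "s \<in> {0..ms}"
  shows "a x s y * p x s \<le> out_prob p a y"
  unfolding out_prob_def using assms
  by (intro member_le_sum2[where f = "\<lambda>x s. a x s y * p x s"]) (auto simp: Aset_nonneg PXS_nonneg)

definition info_term :: "belief \<Rightarrow> action \<Rightarrow> int \<Rightarrow> int \<Rightarrow> int \<Rightarrow> real" where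
  "info_term p a x s y = (if a x s y * p x s = 0 then 0 else a x s y * p x s * (ln (a x s y) - ln (out_prob p a y)))"

lemma Ia_eq_sum_info_term:
  assumes "p \<in> PXS mx ms" "a \<in> Aset mx my ms"
  shows "Ia mx my ms a p = (\<Sum>x\<in>{0..mx}. \<Sum>s\<in>{0..ms}. \<Sum>y\<in>{0..my}. info_term p a x s y)"
proof -
  have m1: "(\<Sum>y'\<in>{0..my}. p x s * a x s y') = p x s" if "x \<in> {0..mx}" "s \<in> {0..ms}" for x s
    using Aset_sum[OF assms(2) that] by (simp add: sum_distrib_left[symmetric])
  have m2: "(\<Sum>u'\<in>{0..mx} \<times> {0..ms}. (case u' of (x, s) \<Rightarrow> \<lambda>y. p x s * a x s y) y) = out_prob p a y" for y
  proof -
    have "(\<Sum>u'\<in>{0..mx} \<times> {0..ms}. (case u' of (x, s) \<Rightarrow> \<lambda>y. p x s * a x s y) y)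
        = (\<Sum>(x,s)\<in>{0..mx} \<times> {0..ms}. a x s y * p x s)"
      by (rule sum.cong) (auto simp: mult.commute)
    also have "\<dots> = out_prob p a y" unfolding out_prob_def by (simp add: sum.cartesian_product)
    finally show ?thesis .
  qed
  have "Ia mx my ms a p = (\<Sum>u\<in>{0..mx} \<times> {0..ms}. \<Sum>y\<in>{0..my}. (case u of (x, s) \<Rightarrow> info_term p a x s y))"
    unfolding Ia_def mutinf_def m2
  proof (intro sum.cong refl, clarify)
    fix x s y assume xs: "x \<in> {0..mx}" "s \<in> {0..ms}" and y: "y \<in> {0..my}"
    show "(if p x s * a x s y = 0 then 0 else p x s * a x s y * ln (p x s * a x s y /
          ((\<Sum>v'\<in>{0..my}. p x s * a x s v') * out_prob p a y))) = info_term p a x s y"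
    proof (cases "a x s y * p x s = 0")
      case True then show ?thesis by (simp add: info_term_def mult.commute)
    next
      case False
      have pp: "p x s > 0" "a x s y > 0" using False PXS_nonneg[OF assms(1)] Aset_nonneg[OF assms(2) xs y]
        by (auto simp: less_le)
      have py: "out_prob p a y > 0" using out_prob_ge_term[OF assms y xs] pp by (smt (verit) mult_pos_pos)
      have "ln (p x s * a x s y / (p x s * out_prob p a y)) = ln (a x s y) - ln (out_prob p a y)"
        using pp py by (simp add: ln_div ln_mult)
      then show ?thesis using False m1[OF xs] by (simp add: info_term_def mult.commute)
    qed
  qed
  also have "\<dots> = (\<Sum>(x,s)\<in>{0..mx} \<times> {0..ms}. \<Sum>y\<in>{0..my}. info_term p a x s y)"
    by (rule sum.cong) auto
  also have "\<dots> = (\<Sum>x\<in>{0..mx}. \<Sum>s\<in>{0..ms}. \<Sum>y\<in>{0..my}. info_term p a x s y)"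
    by (rule sum.cartesian_product[symmetric])
  finally show ?thesis .
qed

lemma Ia_nonneg:
  assumes "p \<in> PXS mx ms" "a \<in> Aset mx my ms"
  shows "Ia mx my ms a p \<ge> 0"
proof -
  have t: "info_term p a x s y \<ge> a x s y * p x s - p x s * out_prob p a y"
    if xs: "x \<in> {0..mx}" "s \<in> {0..ms}" and y: "y \<in> {0..my}" for x s y
  proof (cases "a x s y * p x s = 0")
    case True
    have "p x s * out_prob p a y \<ge> 0" using PXS_nonneg[OF assms(1)] out_prob_nonneg[OF assms y] by simp
    then show ?thesis unfolding info_term_def True by simp
  next
    case False
    have pp: "p x s > 0" "a x s y > 0" using False PXS_nonneg[OF assms(1)] Aset_nonneg[OF assms(2) xs y]
      by (auto simp: less_le)
    have py: "out_prob p a y > 0" using out_prob_ge_term[OF assms y xs] pp by (smt (verit) mult_pos_pos)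
    have "a x s y * p x s * (ln (a x s y * p x s) - ln (p x s * out_prob p a y)) \<ge> a x s y * p x s - p x s * out_prob p a y"
      using pp py by (intro diff_le_mult_ln_diff) auto
    then show ?thesis using False pp py by (simp add: info_term_def ln_mult algebra_simps)
  qed
  have "0 = (\<Sum>x\<in>{0..mx}. \<Sum>s\<in>{0..ms}. \<Sum>y\<in>{0..my}. a x s y * p x s - p x s * out_prob p a y)"
  proof -
    have "(\<Sum>x\<in>{0..mx}. \<Sum>s\<in>{0..ms}. \<Sum>y\<in>{0..my}. a x s y * p x s - p x s * out_prob p a y)
      = (\<Sum>x\<in>{0..mx}. \<Sum>s\<in>{0..ms}. p x s * (\<Sum>y\<in>{0..my}. a x s y) - p x s * (\<Sum>y\<in>{0..my}. out_prob p a y))"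
      by (simp add: sum_subtractf sum_distrib_left sum_distrib_right mult.commute)
    also have "\<dots> = (\<Sum>x\<in>{0..mx}. \<Sum>s\<in>{0..ms}. 0)"
      by (intro sum.cong refl) (simp add: Aset_sum[OF assms(2)] out_prob_sum[OF assms])
    finally show ?thesis by simp
  qed
  also have "\<dots> \<le> (\<Sum>x\<in>{0..mx}. \<Sum>s\<in>{0..ms}. \<Sum>y\<in>{0..my}. info_term p a x s y)"
    by (intro sum_mono t) auto
  finally show ?thesis using Ia_eq_sum_info_term[OF assms] by simp
qed

lemma Ia_eq_entropy_diff:
  assumes "p \<in> PXS mx ms" "a \<in> Aset mx my ms"
  shows "Ia mx my ms a p = (\<Sum>x\<in>{0..mx}. \<Sum>s\<in>{0..ms}. \<Sum>y\<in>{0..my}. p x s * (a x s y * ln (a x s y)))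
      - (\<Sum>y\<in>{0..my}. out_prob p a y * ln (out_prob p a y))"
proof -
  have t: "info_term p a x s y = p x s * (a x s y * ln (a x s y)) - a x s y * p x s * ln (out_prob p a y)"
    if xs: "x \<in> {0..mx}" "s \<in> {0..ms}" and y: "y \<in> {0..my}" for x s y
    by (cases "a x s y * p x s = 0") (auto simp: info_term_def algebra_simps)
  have out: "(\<Sum>x\<in>{0..mx}. \<Sum>s\<in>{0..ms}. \<Sum>y\<in>{0..my}. a x s y * p x s * ln (out_prob p a y))
      = (\<Sum>y\<in>{0..my}. out_prob p a y * ln (out_prob p a y))"
    unfolding out_prob_def by (subst sum_swap3) (simp add: sum_distrib_right)
  have "(\<Sum>x\<in>{0..mx}. \<Sum>s\<in>{0..ms}. \<Sum>y\<in>{0..my}. info_term p a x s y)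
     = (\<Sum>x\<in>{0..mx}. \<Sum>s\<in>{0..ms}. \<Sum>y\<in>{0..my}. p x s * (a x s y * ln (a x s y)) - a x s y * p x s * ln (out_prob p a y))"
    by (intro sum.cong refl t) auto
  also have "\<dots> = (\<Sum>x\<in>{0..mx}. \<Sum>s\<in>{0..ms}. \<Sum>y\<in>{0..my}. p x s * (a x s y * ln (a x s y)))
     - (\<Sum>x\<in>{0..mx}. \<Sum>s\<in>{0..ms}. \<Sum>y\<in>{0..my}. a x s y * p x s * ln (out_prob p a y))"
    by (simp add: sum_subtractf)
  finally show ?thesis using Ia_eq_sum_info_term[OF assms] out by simp
qed

lemma Ia_le_card:
  assumes "p \<in> PXS mx ms" "a \<in> Aset mx my ms"
  shows "Ia mx my ms a p \<le> real (card {0..my})"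
proof -
  have "(\<Sum>x\<in>{0..mx}. \<Sum>s\<in>{0..ms}. \<Sum>y\<in>{0..my}. p x s * (a x s y * ln (a x s y))) \<le> 0"
  proof (intro sum_nonpos)
    fix x s y assume "x \<in> {0..mx}" "s \<in> {0..ms}" "y \<in> {0..my}"
    then have "0 \<le> a x s y" "a x s y \<le> 1" using assms Aset_nonneg Aset_le_1 by auto
    then have "a x s y * ln (a x s y) \<le> 0"
    proof (cases "a x s y = 0")
      case False
      then have "ln (a x s y) \<le> 0" using \<open>0 \<le> a x s y\<close> \<open>a x s y \<le> 1\<close> ln_le_minus_one[of "a x s y"] by auto
      then show ?thesis using \<open>0 \<le> a x s y\<close> by (rule mult_nonneg_nonpos[rotated])
    qed simp
    then show "p x s * (a x s y * ln (a x s y)) \<le> 0"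
      by (rule mult_nonneg_nonpos[OF PXS_nonneg[OF assms(1)]])
  qed
  moreover have "- (\<Sum>y\<in>{0..my}. out_prob p a y * ln (out_prob p a y)) \<le> (\<Sum>y\<in>{0..my}. 1)"
    unfolding sum_negf[symmetric] by (intro sum_mono neg_xlnx_le_1 out_prob_nonneg assms)
  ultimately show ?thesis using Ia_eq_entropy_diff[OF assms] by simp
qed

section \<open>Concavity of the value functions\<close>

definition mixture :: "real \<Rightarrow> belief \<Rightarrow> belief \<Rightarrow> belief" where
  "mixture l p1 p2 = (\<lambda>x s. l * p1 x s + (1 - l) * p2 x s)"

lemma mixture_PXS:
  assumes "p1 \<in> PXS mx ms" "p2 \<in> PXS mx ms" "0 \<le> l" "l \<le> 1"
  shows "mixture l p1 p2 \<in> PXS mx ms"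
  using assms unfolding PXS_def mixture_def
  by (auto simp: sum.distrib sum_distrib_left[symmetric] intro!: add_nonneg_nonneg mult_nonneg_nonneg)

lemma out_prob_mixture: "out_prob (mixture l p1 p2) a y = l * out_prob p1 a y + (1 - l) * out_prob p2 a y"
proof -
  have "out_prob (mixture l p1 p2) a y = (\<Sum>x\<in>{0..mx}. \<Sum>s\<in>{0..ms}. l * (a x s y * p1 x s) + (1 - l) * (a x s y * p2 x s))"
    unfolding out_prob_def mixture_def by (intro sum.cong refl) (simp add: algebra_simps)
  also have "\<dots> = l * out_prob p1 a y + (1 - l) * out_prob p2 a y"
    unfolding out_prob_def by (simp add: sum.distrib sum_distrib_left)
  finally show ?thesis .
qed

lemma filt_num_mixture: "filt_num (mixture l p1 p2) a y x' s' = l * filt_num p1 a y x' s' + (1 - l) * filt_num p2 a y x' s'"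
proof -
  have "filt_num (mixture l p1 p2) a y x' s' = (if x' \<in> {0..mx} \<and> s' \<in> {0..ms} then
      (\<Sum>x\<in>{0..mx}. l * (if s' + x - y \<in> {0..ms} then Q x x' * a x (s' + x - y) y * p1 x (s' + x - y) else 0)
       + (1 - l) * (if s' + x - y \<in> {0..ms} then Q x x' * a x (s' + x - y) y * p2 x (s' + x - y) else 0)) else 0)"
    unfolding filt_num_def mixture_def by (auto intro!: sum.cong simp: algebra_simps)
  also have "\<dots> = l * filt_num p1 a y x' s' + (1 - l) * filt_num p2 a y x' s'"
    unfolding filt_num_def by (simp add: sum.distrib sum_distrib_left)
  finally show ?thesis .
qed

lemma Ia_concave:
  assumes "p1 \<in> PXS mx ms" "p2 \<in> PXS mx ms" "0 \<le> l" "l \<le> 1" "a \<in> Aset mx my ms"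
  shows "l * Ia mx my ms a p1 + (1 - l) * Ia mx my ms a p2 \<le> Ia mx my ms a (mixture l p1 p2)"
proof -
  have mP: "mixture l p1 p2 \<in> PXS mx ms" using mixture_PXS assms by auto
  have lin: "(\<Sum>x\<in>{0..mx}. \<Sum>s\<in>{0..ms}. \<Sum>y\<in>{0..my}. mixture l p1 p2 x s * (a x s y * ln (a x s y)))
    = l * (\<Sum>x\<in>{0..mx}. \<Sum>s\<in>{0..ms}. \<Sum>y\<in>{0..my}. p1 x s * (a x s y * ln (a x s y)))
      + (1 - l) * (\<Sum>x\<in>{0..mx}. \<Sum>s\<in>{0..ms}. \<Sum>y\<in>{0..my}. p2 x s * (a x s y * ln (a x s y)))"
  proof -
    have "(\<Sum>x\<in>{0..mx}. \<Sum>s\<in>{0..ms}. \<Sum>y\<in>{0..my}. mixture l p1 p2 x s * (a x s y * ln (a x s y)))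
     = (\<Sum>x\<in>{0..mx}. \<Sum>s\<in>{0..ms}. \<Sum>y\<in>{0..my}. l * (p1 x s * (a x s y
         * ln (a x s y))) + (1 - l) * (p2 x s * (a x s y * ln (a x s y))))"
      unfolding mixture_def by (intro sum.cong refl) (simp add: algebra_simps)
    also have "\<dots> = l * (\<Sum>x\<in>{0..mx}. \<Sum>s\<in>{0..ms}. \<Sum>y\<in>{0..my}. p1 x s * (a x s y * ln (a x s y)))
      + (1 - l) * (\<Sum>x\<in>{0..mx}. \<Sum>s\<in>{0..ms}. \<Sum>y\<in>{0..my}. p2 x s * (a x s y * ln (a x s y)))"
      by (simp add: sum.distrib sum_distrib_left)
    finally show ?thesis .
  qed
  have cv: "(\<Sum>y\<in>{0..my}. out_prob (mixture l p1 p2) a y * ln (out_prob (mixture l p1 p2) a y))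
     \<le> l * (\<Sum>y\<in>{0..my}. out_prob p1 a y * ln (out_prob p1 a y)) + (1 - l)
         * (\<Sum>y\<in>{0..my}. out_prob p2 a y * ln (out_prob p2 a y))"
    unfolding out_prob_mixture sum_distrib_left sum.distrib[symmetric]
    by (intro sum_mono convex_comb_xlnx_le out_prob_nonneg assms) 
  show ?thesis
    unfolding Ia_eq_entropy_diff[OF assms(1,5)] Ia_eq_entropy_diff[OF assms(2,5)]
      Ia_eq_entropy_diff[OF mP assms(5)] lin
    using cv by (simp only: right_diff_distrib)
qed

lemma bellman_eq_sum_out_prob:
  "bellman mx my ms Q a V p = Ia mx my ms a p + (\<Sum>y\<in>{0..my}. out_prob p a y * V (filt mx ms Q p y a))"
proof -
  have "(\<Sum>x\<in>{0..mx}. \<Sum>s\<in>{0..ms}. \<Sum>y\<in>{0..my}. p x s * a x s y * V (filt mx ms Q p y a))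
     = (\<Sum>y\<in>{0..my}. \<Sum>x\<in>{0..mx}. \<Sum>s\<in>{0..ms}. p x s * a x s y * V (filt mx ms Q p y a))"
    by (rule sum_swap3)
  also have "\<dots> = (\<Sum>y\<in>{0..my}. out_prob p a y * V (filt mx ms Q p y a))"
    unfolding out_prob_def by (simp add: sum_distrib_right sum_distrib_left mult_ac)
  finally show ?thesis by (simp add: bellman_def)
qed

lemma filt_mixture:
  assumes p: "p1 \<in> PXS mx ms" "p2 \<in> PXS mx ms" and a: "a \<in> Aset mx my ms" and y: "y \<in> {0..my}"
    and nz: "out_prob (mixture l p1 p2) a y \<noteq> 0"
  shows "filt mx ms Q (mixture l p1 p2) y a
    = mixture (l * out_prob p1 a y / out_prob (mixture l p1 p2) a y) (filt mx ms Q p1 y a) (filt mx ms Q p2 y a)"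
proof -
  define c where "c = out_prob (mixture l p1 p2) a y"
  have omu: "1 - l * out_prob p1 a y / c = (1 - l) * out_prob p2 a y / c"
    using nz by (simp add: c_def out_prob_mixture field_simps)
  have e1: "l * out_prob p1 a y / c * filt mx ms Q p1 y a x s = l * filt_num p1 a y x s / c" for x s
    using filt_num_zero[OF p(1) a y] by (cases "out_prob p1 a y = 0") (simp_all add: filt_eq_normalized)
  have e2: "(1 - l) * out_prob p2 a y / c * filt mx ms Q p2 y a x s = (1 - l) * filt_num p2 a y x s / c" for x s
    using filt_num_zero[OF p(2) a y] by (cases "out_prob p2 a y = 0") (simp_all add: filt_eq_normalized)
  have "filt mx ms Q (mixture l p1 p2) y a x s
      = l * out_prob p1 a y / c * filt mx ms Q p1 y a x s + (1 - l * out_prob p1 a y / c) * filt mx ms Q p2 y a x s"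
    for x s
    unfolding omu e1 e2 using nz
    by (simp add: filt_eq_normalized c_def filt_num_mixture add_divide_distrib)
  then show ?thesis by (simp add: mixture_def c_def fun_eq_iff)
qed

lemma weighted_value_concave:
  assumes V: "concave_fun_on (PXS mx ms) V"
    and p: "p1 \<in> PXS mx ms" "p2 \<in> PXS mx ms" and l: "0 \<le> l" "l \<le> 1"
    and a: "a \<in> Aset mx my ms" and y: "y \<in> {0..my}"
  shows "l * (out_prob p1 a y * V (filt mx ms Q p1 y a)) + (1 - l) * (out_prob p2 a y * V (filt mx ms Q p2 y a))
     \<le> out_prob (mixture l p1 p2) a y * V (filt mx ms Q (mixture l p1 p2) y a)"
proof -
  define c1 where "c1 = l * out_prob p1 a y"
  define c2 where "c2 = (1 - l) * out_prob p2 a y"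
  define f1 where "f1 = filt mx ms Q p1 y a"
  define f2 where "f2 = filt mx ms Q p2 y a"
  have c1: "c1 \<ge> 0" using l out_prob_nonneg[OF p(1) a y] by (simp add: c1_def)
  have c2: "c2 \<ge> 0" using l out_prob_nonneg[OF p(2) a y] by (simp add: c2_def)
  have cm: "out_prob (mixture l p1 p2) a y = c1 + c2" by (simp add: out_prob_mixture c1_def c2_def)
  show ?thesis
  proof (cases "c1 + c2 = 0")
    case True
    then have "c1 = 0" "c2 = 0" using c1 c2 by auto
    then show ?thesis using cm by (auto simp: c1_def c2_def)
  next
    case False
    then have cp: "c1 + c2 > 0" using c1 c2 by simp
    define mu where "mu = c1 / (c1 + c2)"
    have mu: "0 \<le> mu" "mu \<le> 1" using c1 c2 cp by (auto simp: mu_def field_simps)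
    have "mu * V f1 + (1 - mu) * V f2 \<le> V (mixture mu f1 f2)"
      using V filt_PXS[OF p(1) a y] filt_PXS[OF p(2) a y] mu
      unfolding concave_fun_on_def mixture_def f1_def f2_def by blast
    also have "mixture mu f1 f2 = filt mx ms Q (mixture l p1 p2) y a"
      using filt_mixture[OF p a y] False cm by (simp add: mu_def c1_def f1_def f2_def)
    finally have "(c1 + c2) * (mu * V f1 + (1 - mu) * V f2) \<le> (c1 + c2) * V (filt mx ms Q (mixture l p1 p2) y a)"
      using cp by (intro mult_left_mono) auto
    moreover have "(c1 + c2) * (mu * V f1 + (1 - mu) * V f2) = c1 * V f1 + c2 * V f2"
    proof -
      have "(c1 + c2) * mu = c1" "(c1 + c2) * (1 - mu) = c2" using cp by (simp_all add: mu_def field_simps)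
      moreover have "(c1 + c2) * (mu * V f1 + (1 - mu) * V f2)
          = ((c1 + c2) * mu) * V f1 + ((c1 + c2) * (1 - mu)) * V f2"
        by (simp add: algebra_simps)
      ultimately show ?thesis by simp
    qed
    ultimately show ?thesis using cm by (simp add: c1_def c2_def f1_def f2_def mult.assoc)
  qed
qed

lemma bellman_concave:
  assumes V: "concave_fun_on (PXS mx ms) V"
    and p: "p1 \<in> PXS mx ms" "p2 \<in> PXS mx ms" and l: "0 \<le> l" "l \<le> 1"
    and a: "a \<in> Aset mx my ms"
  shows "l * bellman mx my ms Q a V p1 + (1 - l) * bellman mx my ms Q a V p2 \<le> bellman mx my ms Q a V (mixture l p1 p2)"
proof -
  have "l * (\<Sum>y\<in>{0..my}. out_prob p1 a y * V (filt mx ms Q p1 y a)) + (1 - l)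
      * (\<Sum>y\<in>{0..my}. out_prob p2 a y * V (filt mx ms Q p2 y a))
    \<le> (\<Sum>y\<in>{0..my}. out_prob (mixture l p1 p2) a y * V (filt mx ms Q (mixture l p1 p2) y a))"
    unfolding sum_distrib_left sum.distrib[symmetric]
    by (intro sum_mono weighted_value_concave[OF V p l a]) auto
  moreover have "l * Ia mx my ms a p1 + (1 - l) * Ia mx my ms a p2 \<le> Ia mx my ms a (mixture l p1 p2)"
    by (rule Ia_concave[OF p l a])
  ultimately show ?thesis unfolding bellman_eq_sum_out_prob by (simp add: algebra_simps)
qed

lemma bellman_nonneg:
  assumes "p \<in> PXS mx ms" "a \<in> Aset mx my ms" "\<And>p. p \<in> PXS mx ms \<Longrightarrow> V p \<ge> 0"
  shows "bellman mx my ms Q a V p \<ge> 0"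
proof -
  have "\<forall>y\<in>{0..my}. V (filt mx ms Q p y a) \<ge> 0" using assms(3) filt_PXS[OF assms(1,2)] by auto
  then show ?thesis unfolding bellman_eq_sum_out_prob using assms
    by (intro add_nonneg_nonneg Ia_nonneg sum_nonneg mult_nonneg_nonneg out_prob_nonneg) auto
qed

lemma bellman_le:
  assumes "p \<in> PXS mx ms" "a \<in> Aset mx my ms" "\<And>p. p \<in> PXS mx ms \<Longrightarrow> V p \<le> M"
  shows "bellman mx my ms Q a V p \<le> real (card {0..my}) + M"
proof -
  have "(\<Sum>y\<in>{0..my}. out_prob p a y * V (filt mx ms Q p y a)) \<le> (\<Sum>y\<in>{0..my}. out_prob p a y * M)"
    using assms filt_PXS[OF assms(1,2)] by (intro sum_mono mult_left_mono out_prob_nonneg) auto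
  also have "\<dots> = M" using out_prob_sum[OF assms(1,2)] by (simp add: sum_distrib_right[symmetric])
  finally show ?thesis unfolding bellman_eq_sum_out_prob using Ia_le_card[OF assms(1,2)] by simp
qed

abbreviation "W \<equiv> Wval mx my ms Q"

lemma Aset_ne: "Aset mx my ms \<noteq> {}" using a_default_Aset by auto

lemma W_nonneg_le: "p \<in> PXS mx ms \<Longrightarrow> 0 \<le> W k p \<and> W k p \<le> real k * real (card {0..my})"
proof (induction k arbitrary: p)
  case 0 then show ?case by simp
next
  case (Suc k)
  have nn: "\<And>a. a \<in> Aset mx my ms \<Longrightarrow> bellman mx my ms Q a (W k) p \<ge> 0"
    using Suc by (intro bellman_nonneg) auto
  have bdd: "bdd_below ((\<lambda>a. bellman mx my ms Q a (W k) p) ` Aset mx my ms)"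
    using nn by (intro bdd_belowI[of _ 0]) auto
  have "0 \<le> W (Suc k) p" using nn Aset_ne by (simp add: cINF_greatest)
  moreover have "W (Suc k) p \<le> bellman mx my ms Q a_default (W k) p"
    using cINF_lower[OF bdd a_default_Aset] by simp
  moreover have "bellman mx my ms Q a_default (W k) p \<le> real (card {0..my}) + real k * real (card {0..my})"
    using Suc a_default_Aset by (intro bellman_le) auto
  ultimately show ?case by (simp add: algebra_simps)
qed

lemma bellman_bdd_below:
  assumes "p \<in> PXS mx ms"
  shows "bdd_below ((\<lambda>a. bellman mx my ms Q a (W k) p) ` Aset mx my ms)"
proof -
  have "\<And>a. a \<in> Aset mx my ms \<Longrightarrow> bellman mx my ms Q a (W k) p \<ge> 0"
    using assms W_nonneg_le by (intro bellman_nonneg) auto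
  then show ?thesis by (intro bdd_belowI[of _ 0]) auto
qed

lemma W_le_bellman:
  assumes "p \<in> PXS mx ms" "a \<in> Aset mx my ms"
  shows "W (Suc k) p \<le> bellman mx my ms Q a (W k) p"
  using cINF_lower[OF bellman_bdd_below[OF assms(1)] assms(2)] by simp

lemma W_concave: "concave_fun_on (PXS mx ms) (W k)"
proof (induction k)
  case 0 then show ?case by (simp add: concave_fun_on_def)
next
  case (Suc k)
  show ?case unfolding concave_fun_on_def
  proof (intro ballI allI impI)
    fix p1 p2 and l :: real assume p: "p1 \<in> PXS mx ms" "p2 \<in> PXS mx ms" and l: "0 \<le> l \<and> l \<le> 1"
    have mP: "mixture l p1 p2 \<in> PXS mx ms" using mixture_PXS p l by auto
    have "l * W (Suc k) p1 + (1 - l) * W (Suc k) p2 \<le> W (Suc k) (mixture l p1 p2)"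
    proof -
      have "l * W (Suc k) p1 + (1 - l) * W (Suc k) p2 \<le> bellman mx my ms Q a (W k) (mixture l p1 p2)"
        if a: "a \<in> Aset mx my ms" for a
      proof -
        have "l * W (Suc k) p1 + (1 - l) * W (Suc k) p2 \<le> l * bellman mx my ms Q a (W k) p1 + (1 - l) * bellman mx my ms Q a (W k) p2"
          using l W_le_bellman[OF p(1) a] W_le_bellman[OF p(2) a] by (intro add_mono mult_left_mono) auto
        also have "\<dots> \<le> bellman mx my ms Q a (W k) (mixture l p1 p2)"
          using bellman_concave[OF Suc p _ _ a] l by auto
        finally show ?thesis .
      qed
      then show ?thesis using Aset_ne by (simp add: cINF_greatest)
    qed
    then show "l * W (Suc k) p1 + (1 - l) * W (Suc k) p2 \<le> W (Suc k) (\<lambda>x s. l * p1 x s + (1 - l) * p2 x s)"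
      by (simp add: mixture_def)
  qed
qed

section \<open>Continuity of the value functions and attainment of the minimum\<close>

lemma out_prob_tendsto:
  assumes "\<And>x s. ((\<lambda>n. P n x s) \<longlongrightarrow> p x s) F" "\<And>x s y. ((\<lambda>n. A n x s y)
      \<longlongrightarrow> a x s y) F"
  shows "((\<lambda>n. out_prob (P n) (A n) y) \<longlongrightarrow> out_prob p a y) F"
  unfolding out_prob_def by (intro tendsto_intros assms)

lemma filt_num_tendsto:
  assumes "\<And>x s. ((\<lambda>n. P n x s) \<longlongrightarrow> p x s) F" "\<And>x s y. ((\<lambda>n. A n x s y)
      \<longlongrightarrow> a x s y) F"
  shows "((\<lambda>n. filt_num (P n) (A n) y x' s') \<longlongrightarrow> filt_num p a y x' s') F"
proof -
  have "((\<lambda>n. if s' + x - y \<in> {0..ms} then Q x x' * A n x (s' + x - y) y * P n x (s' + x - y) else 0)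
     \<longlongrightarrow> (if s' + x - y \<in> {0..ms} then Q x x' * a x (s' + x - y) y * p x (s' + x - y) else 0)) F" for x
    by (cases "s' + x - y \<in> {0..ms}") (auto intro!: tendsto_intros assms)
  then show ?thesis unfolding filt_num_def
    by (cases "x' \<in> {0..mx} \<and> s' \<in> {0..ms}") (auto intro!: tendsto_sum)
qed

lemma Ia_tendsto:
  assumes hP: "\<And>x s. ((\<lambda>n. P n x s) \<longlongrightarrow> p x s) F" and hA: "\<And>x s y.
      ((\<lambda>n. A n x s y) \<longlongrightarrow> a x s y) F"
    and hPin: "\<And>n. P n \<in> PXS mx ms" and hAin: "\<And>n. A n \<in> Aset mx my ms"
    and hp: "p \<in> PXS mx ms" and ha: "a \<in> Aset mx my ms"
  shows "((\<lambda>n. Ia mx my ms (A n) (P n)) \<longlongrightarrow> Ia mx my ms a p) F"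
proof -
  have l1: "((\<lambda>n. A n x s y * ln (A n x s y)) \<longlongrightarrow> a x s y * ln (a x s y)) F"
    if "x \<in> {0..mx}" "s \<in> {0..ms}" "y \<in> {0..my}" for x s y
    using that by (intro tendsto_xlnx hA always_eventually allI Aset_nonneg[OF hAin] Aset_nonneg[OF ha])
  have l2: "((\<lambda>n. out_prob (P n) (A n) y * ln (out_prob (P n) (A n) y)) \<longlongrightarrow> out_prob p a y * ln (out_prob p a y)) F"
    if "y \<in> {0..my}" for y
    using that by (intro tendsto_xlnx out_prob_tendsto hP hA always_eventually allI out_prob_nonneg hPin hAin hp ha)
  have "((\<lambda>n. (\<Sum>x\<in>{0..mx}. \<Sum>s\<in>{0..ms}. \<Sum>y\<in>{0..my}. P n x s * (A n x s y * ln (A n x s y)))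
      - (\<Sum>y\<in>{0..my}. out_prob (P n) (A n) y * ln (out_prob (P n) (A n) y)))
    \<longlongrightarrow> (\<Sum>x\<in>{0..mx}. \<Sum>s\<in>{0..ms}. \<Sum>y\<in>{0..my}. p x s * (a x s y * ln (a x s y)))
      - (\<Sum>y\<in>{0..my}. out_prob p a y * ln (out_prob p a y))) F"
    by (intro tendsto_intros hP l1 l2) auto
  then show ?thesis using Ia_eq_entropy_diff[OF hPin hAin] Ia_eq_entropy_diff[OF hp ha] by simp
qed

lemma filt_tendsto:
  assumes P: "\<And>x s. ((\<lambda>n. P n x s) \<longlongrightarrow> p x s) sequentially"
    and A: "\<And>x s y. ((\<lambda>n. A n x s y) \<longlongrightarrow> a x s y) sequentially"
    and nz: "out_prob p a y \<noteq> 0"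
  shows "((\<lambda>n. filt mx ms Q (P n) y (A n)) \<longlongrightarrow> filt mx ms Q p y a) sequentially"
  unfolding tendsto_belief_iff
proof (intro allI)
  fix x s
  have Pyt: "((\<lambda>n. out_prob (P n) (A n) y) \<longlongrightarrow> out_prob p a y) sequentially"
    by (rule out_prob_tendsto[OF P A])
  have "((\<lambda>n. filt_num (P n) (A n) y x s / out_prob (P n) (A n) y) \<longlongrightarrow> filt_num p a y x s
      / out_prob p a y) sequentially"
    using nz by (intro tendsto_intros filt_num_tendsto[OF P A] Pyt)
  moreover have "\<forall>\<^sub>F n in sequentially. out_prob (P n) (A n) y \<noteq> 0"
    using tendsto_imp_eventually_ne[OF Pyt nz] .
  then have "\<forall>\<^sub>F n in sequentially. filt_num (P n) (A n) y x s / out_prob (P n) (A n) y = filt mx ms Q (P n) y (A n) x s"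
    by eventually_elim (simp add: filt_eq_normalized)
  ultimately show "((\<lambda>n. filt mx ms Q (P n) y (A n) x s) \<longlongrightarrow> filt mx ms Q p y a x s) sequentially"
    using nz by (simp add: filt_eq_normalized tendsto_cong)
qed

lemma weighted_value_tendsto:
  assumes P: "\<And>x s. ((\<lambda>n. P n x s) \<longlongrightarrow> p x s) sequentially"
    and A: "\<And>x s y. ((\<lambda>n. A n x s y) \<longlongrightarrow> a x s y) sequentially"
    and Pin: "\<And>n. P n \<in> PXS mx ms" and Ain: "\<And>n. A n \<in> Aset mx my ms"
    and p: "p \<in> PXS mx ms" and a: "a \<in> Aset mx my ms" and y: "y \<in> {0..my}"
    and V: "continuous_on (PXS mx ms) V" and Vb: "\<And>p. p \<in> PXS mx ms \<Longrightarrow> 0 \<le> V p \<and> V p \<le> M"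
  shows "((\<lambda>n. out_prob (P n) (A n) y * V (filt mx ms Q (P n) y (A n)))
    \<longlongrightarrow> out_prob p a y * V (filt mx ms Q p y a)) sequentially"
proof (cases "out_prob p a y = 0")
  case True
  \<comment> \<open>the bounded factor V(\<phi>(\<dots>)) may jump, but it is multiplied by a vanishing probability\<close>
  have "((\<lambda>n. out_prob (P n) (A n) y * V (filt mx ms Q (P n) y (A n))) \<longlongrightarrow> 0) sequentially"
  proof (rule Lim_null_comparison)
    show "\<forall>\<^sub>F n in sequentially. norm (out_prob (P n) (A n) y * V (filt mx ms Q (P n) y (A n)))
        \<le> out_prob (P n) (A n) y * M"
      using Vb[OF filt_PXS[OF Pin Ain y]] out_prob_nonneg[OF Pin Ain y]
      by (intro always_eventually allI) (simp add: abs_mult mult_left_mono)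
    show "((\<lambda>n. out_prob (P n) (A n) y * M) \<longlongrightarrow> 0) sequentially"
      using out_prob_tendsto[where P=P and A=A and p=p and a=a and y=y, OF P A] True
      by (auto intro!: tendsto_eq_intros)
  qed
  then show ?thesis using True by simp
next
  case False
  have "((\<lambda>n. V (filt mx ms Q (P n) y (A n))) \<longlongrightarrow> V (filt mx ms Q p y a)) sequentially"
    by (rule continuous_on_tendsto_compose[OF V filt_tendsto[OF P A False]])
      (auto intro!: filt_PXS Pin Ain p a y always_eventually)
  then show ?thesis by (intro tendsto_intros out_prob_tendsto[OF P A])
qed

lemma bellman_tendsto:
  assumes P: "\<And>x s. ((\<lambda>n. P n x s) \<longlongrightarrow> p x s) sequentially" and A: "\<And>x s y.
      ((\<lambda>n. A n x s y) \<longlongrightarrow> a x s y) sequentially"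
    and Pin: "\<And>n. P n \<in> PXS mx ms" and Ain: "\<And>n. A n \<in> Aset mx my ms"
    and p: "p \<in> PXS mx ms" and a: "a \<in> Aset mx my ms"
    and V: "continuous_on (PXS mx ms) V" and Vb: "\<And>p. p \<in> PXS mx ms \<Longrightarrow> 0 \<le> V p \<and> V p \<le> M"
  shows "((\<lambda>n. bellman mx my ms Q (A n) V (P n)) \<longlongrightarrow> bellman mx my ms Q a V p) sequentially"
  unfolding bellman_eq_sum_out_prob
  by (intro tendsto_intros Ia_tendsto[OF P A Pin Ain p a] weighted_value_tendsto[OF P A Pin Ain p a _ V Vb])

lemma W_ge_scaled:
  assumes p: "p \<in> PXS mx ms" and q: "q \<in> PXS mx ms" and lam: "0 < lam" "lam \<le> 1"
    and ge: "\<And>x s. q x s \<ge> (1 - lam) * p x s"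
  shows "W k q \<ge> (1 - lam) * W k p"
proof -
  define r where "r = (\<lambda>x s. (q x s - (1 - lam) * p x s) / lam)"
  have rP: "r \<in> PXS mx ms"
  proof -
    have "(\<Sum>x\<in>{0..mx}. \<Sum>s\<in>{0..ms}. r x s)
        = ((\<Sum>x\<in>{0..mx}. \<Sum>s\<in>{0..ms}. q x s) - (1 - lam) * (\<Sum>x\<in>{0..mx}. \<Sum>s\<in>{0..ms}. p x s)) / lam"
      unfolding r_def by (simp add: sum_divide_distrib[symmetric] sum_subtractf sum_distrib_left)
    also have "\<dots> = 1" using PXS_sum[OF p] PXS_sum[OF q] lam by simp
    finally have "(\<Sum>x\<in>{0..mx}. \<Sum>s\<in>{0..ms}. r x s) = 1" .
    moreover have "r x s \<ge> 0" for x s using ge[of x s] lam by (simp add: r_def)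
    moreover have "r x s = 0" if "(x, s) \<notin> {0..mx} \<times> {0..ms}" for x s
      using PXS_outside[OF p] PXS_outside[OF q] that by (simp add: r_def)
    ultimately show ?thesis by (simp add: PXS_def)
  qed
  have mq: "mixture lam r p = q" using lam by (simp add: mixture_def r_def fun_eq_iff)
  have "lam * W k r + (1 - lam) * W k p \<le> W k (mixture lam r p)"
    using W_concave[of k] rP p lam unfolding concave_fun_on_def mixture_def by auto
  moreover have "W k r \<ge> 0" using W_nonneg_le[OF rP] by simp
  ultimately show ?thesis using mq lam by (smt (verit) mult_nonneg_nonneg)
qed

lemma eventually_ge_scaled:
  assumes u: "\<And>n. u n \<in> PXS mx ms" and p: "p \<in> PXS mx ms"
    and lim: "\<And>x s. (\<lambda>n. u n x s) \<longlonglongrightarrow> p x s" and lam: "0 < lam"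
  shows "\<forall>\<^sub>F n in sequentially. \<forall>x s. (1 - lam) * p x s \<le> u n x s"
proof -
  have "\<forall>\<^sub>F n in sequentially. \<forall>xs\<in>{0..mx} \<times> {0..ms}.
      (1 - lam) * p (fst xs) (snd xs) \<le> u n (fst xs) (snd xs)"
  proof (rule eventually_ball_finite, simp, rule ballI)
    fix xs :: "int \<times> int"
    show "\<forall>\<^sub>F n in sequentially. (1 - lam) * p (fst xs) (snd xs) \<le> u n (fst xs) (snd xs)"
    proof (cases "p (fst xs) (snd xs) = 0")
      case True then show ?thesis using u by (auto intro!: always_eventually PXS_nonneg)
    next
      case False
      then have "(1 - lam) * p (fst xs) (snd xs) < p (fst xs) (snd xs)"
        using PXS_nonneg[OF p] lam by (simp add: less_le)
      from order_tendstoD(1)[OF lim this] show ?thesis by eventually_elim simp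
    qed
  qed
  then show ?thesis
  proof eventually_elim
    case (elim n)
    show ?case
    proof (intro allI)
      fix x s
      show "(1 - lam) * p x s \<le> u n x s"
        using elim PXS_outside[OF p, of x s] PXS_nonneg[OF u[of n], of x s] by (cases "x \<in> {0..mx} \<and> s \<in> {0..ms}") auto
    qed
  qed
qed

lemma eventually_W_Suc_less:
  assumes V: "continuous_on (PXS mx ms) (W k)"
    and u: "\<And>n. u n \<in> PXS mx ms" and p: "p \<in> PXS mx ms"
    and lim: "\<And>x s. (\<lambda>n. u n x s) \<longlonglongrightarrow> p x s" and e: "e > 0"
  shows "\<forall>\<^sub>F n in sequentially. W (Suc k) (u n) < W (Suc k) p + e"
proof -
  obtain a where a: "a \<in> Aset mx my ms" and ba: "bellman mx my ms Q a (W k) p < W (Suc k) p + e"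
    using cINF_less_iff[OF Aset_ne bellman_bdd_below[OF p, of k], where a="W (Suc k) p + e"] e by auto
  have "(\<lambda>n. bellman mx my ms Q a (W k) (u n)) \<longlonglongrightarrow> bellman mx my ms Q a (W k) p"
    using W_nonneg_le by (intro bellman_tendsto[OF lim _ u _ p a V]) (auto simp: a)
  from order_tendstoD(2)[OF this ba] show ?thesis
    by eventually_elim (meson W_le_bellman[OF u a] le_less_trans)
qed

lemma W_continuous: "continuous_on (PXS mx ms) (W k)"
proof (induction k)
  case (Suc k)
  show ?case
  proof (rule continuous_on_sequentiallyI)
    fix u p assume "\<forall>n. u n \<in> PXS mx ms" and p: "p \<in> PXS mx ms" and "u \<longlonglongrightarrow> p"
    then have u: "\<And>n. u n \<in> PXS mx ms" and lim: "\<And>x s. (\<lambda>n. u n x s) \<longlonglongrightarrow> p x s"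
      by (simp_all add: tendsto_belief_iff)
    have Wp: "W (Suc k) p \<ge> 0" using W_nonneg_le[OF p] by blast
    show "(\<lambda>n. W (Suc k) (u n)) \<longlonglongrightarrow> W (Suc k) p"
    proof (rule tendstoI)
      fix e :: real assume e: "e > 0"
      define lam where "lam = min 1 (e / (W (Suc k) p + 1))"
      have lam: "0 < lam" "lam \<le> 1" using e Wp by (auto simp: lam_def)
      have "lam * W (Suc k) p \<le> e / (W (Suc k) p + 1) * W (Suc k) p"
        using Wp by (intro mult_right_mono) (auto simp: lam_def)
      also have "\<dots> < e" using e Wp by (simp add: field_simps)
      finally have small: "lam * W (Suc k) p < e" .
      have "\<forall>\<^sub>F n in sequentially. W (Suc k) (u n) > W (Suc k) p - e"
        using eventually_ge_scaled[OF u p lim lam(1)]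
      proof eventually_elim
        case (elim n)
        then have "W (Suc k) (u n) \<ge> (1 - lam) * W (Suc k) p"
          by (intro W_ge_scaled[OF p u lam]) auto
        then show ?case using small by (simp add: algebra_simps)
      qed
      moreover have "\<forall>\<^sub>F n in sequentially. W (Suc k) (u n) < W (Suc k) p + e"
        by (rule eventually_W_Suc_less[OF Suc u p lim e])
      ultimately show "\<forall>\<^sub>F n in sequentially. dist (W (Suc k) (u n)) (W (Suc k) p) < e"
        by eventually_elim (simp add: dist_real_def abs_less_iff)
    qed
  qed
qed simp

definition restrict_action :: "action \<Rightarrow> action" where
  "restrict_action a = (\<lambda>x s y. if x \<in> {0..mx} \<and> s \<in> {0..ms} \<and> y \<in> {0..my} then a x s y else 0)"

lemma filt_supp_cong:
  assumes "\<And>x s. x \<in> {0..mx} \<Longrightarrow> s \<in> {0..ms} \<Longrightarrow> a x s y * p x s = a' x s y * p x s"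
  shows "filt mx ms Q p y a = filt mx ms Q p y a'"
proof -
  have "(if s' + x - y \<in> {0..ms} then Q x x' * a x (s' + x - y) y * p x (s' + x - y) else 0)
      = (if s' + x - y \<in> {0..ms} then Q x x' * a' x (s' + x - y) y * p x (s' + x - y) else 0)"
    if "x \<in> {0..mx}" for x x' s'
    using assms[OF that, of "s' + x - y"] by (auto simp: mult.assoc)
  then have N: "filt_num p a y = filt_num p a' y" unfolding filt_num_def by (intro ext) (auto intro!: sum.cong)
  have P: "out_prob p a y = out_prob p a' y" unfolding out_prob_def by (intro sum.cong refl) (simp add: assms)
  show ?thesis by (simp add: filt_eq_normalized N P)
qed

lemma bellman_supp_cong:
  assumes "\<And>x s y. x \<in> {0..mx} \<Longrightarrow> s \<in> {0..ms} \<Longrightarrow> y \<in> {0..my}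
      \<Longrightarrow> a x s y * p x s = a' x s y * p x s"
  shows "bellman mx my ms Q a V p = bellman mx my ms Q a' V p"
proof -
  have i: "Ia mx my ms a p = Ia mx my ms a' p"
    unfolding Ia_def using assms by (intro mutinf_cong) (auto simp: mult.commute)
  have f: "filt mx ms Q p y a = filt mx ms Q p y a'" if "y \<in> {0..my}" for y
    by (rule filt_supp_cong) (use assms that in auto)
  have "p x s * a x s y * V (filt mx ms Q p y a) = p x s * a' x s y * V (filt mx ms Q p y a')"
    if "x \<in> {0..mx}" "s \<in> {0..ms}" "y \<in> {0..my}" for x s y
    using assms[OF that] f[OF that(3)] by (simp add: mult.commute)
  then show ?thesis unfolding bellman_def i by (intro arg_cong2[where f="(+)"] refl sum.cong) auto
qed

lemma restrict_action_Aset: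
  assumes a: "a \<in> Aset mx my ms" shows "restrict_action a \<in> Aset mx my ms"
proof -
  have "(\<forall>y\<in>{0..my}. restrict_action a x s y \<ge> 0) \<and> (\<Sum>y\<in>{0..my}. restrict_action a x s y) = 1
      \<and> (\<Sum>y\<in>Yo my ms (s - x). restrict_action a x s y) = 1" if xs: "x \<in> {0..mx}" "s \<in> {0..ms}" for x s
  proof -
    have e: "\<forall>y\<in>{0..my}. restrict_action a x s y = a x s y" using xs by (simp add: restrict_action_def)
    have sub: "Yo my ms (s - x) \<subseteq> {0..my}" by (auto simp: Yo_def)
    have "(\<Sum>y\<in>{0..my}. restrict_action a x s y) = (\<Sum>y\<in>{0..my}. a x s y)" using e by (intro sum.cong) auto
    moreover have "(\<Sum>y\<in>Yo my ms (s - x). restrict_action a x s y) = (\<Sum>y\<in>Yo my ms (s - x). a x s y)"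
      using e sub by (intro sum.cong) auto
    ultimately show ?thesis using a xs e by (auto simp: Aset_def)
  qed
  then show ?thesis by (simp add: Aset_def)
qed

lemma restrict_action_bellman: "bellman mx my ms Q (restrict_action a) V p = bellman mx my ms Q a V p"
  by (rule bellman_supp_cong) (simp add: restrict_action_def)

lemma Aset_subseq_limit:
  fixes A :: "nat \<Rightarrow> action"
  assumes A: "\<And>n. A n \<in> Aset mx my ms"
  obtains l r where "l \<in> Aset mx my ms" "strict_mono r"
    "\<And>x s y. (\<lambda>n. restrict_action (A (r n)) x s y) \<longlonglongrightarrow> l x s y"
proof -
  define K where "K = {a :: action. \<forall>x. a x \<in> {f. \<forall>s. f s \<in> {g. \<forall>y. g y \<in> {0..(1::real)}}}}"
  have "compact K" unfolding K_def by (intro compact_funcset_UNIV compact_Icc)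
  moreover have "restrict_action (A n) \<in> K" for n
    using Aset_nonneg[OF A] Aset_le_1[OF A] by (auto simp: K_def restrict_action_def)
  ultimately obtain l r where lK: "l \<in> K" and r: "strict_mono r"
    and "(\<lambda>n. restrict_action (A (r n))) \<longlonglongrightarrow> l"
    using seq_compactE[OF compact_imp_seq_compact, of K "\<lambda>n. restrict_action (A n)"] by (auto simp: o_def)
  then have lim: "\<And>x s y. (\<lambda>n. restrict_action (A (r n)) x s y) \<longlonglongrightarrow> l x s y"
    by (simp add: tendsto_action_iff)
  have RA: "restrict_action (A n) \<in> Aset mx my ms" for n by (rule restrict_action_Aset[OF A])
  have "l \<in> Aset mx my ms"
    unfolding Aset_def
  proof (intro CollectI ballI conjI)
    fix x s assume xs: "x \<in> {0..mx}" "s \<in> {0..ms}"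
    show "\<And>y. y \<in> {0..my} \<Longrightarrow> l x s y \<ge> 0" using lK by (auto simp: K_def)
    have "(\<lambda>n. \<Sum>y\<in>{0..my}. restrict_action (A (r n)) x s y) \<longlonglongrightarrow> (\<Sum>y\<in>{0..my}. l x s y)"
      by (intro tendsto_intros lim)
    moreover have "(\<lambda>n. \<Sum>y\<in>{0..my}. restrict_action (A (r n)) x s y) = (\<lambda>n. 1)"
      using Aset_sum[OF RA xs] by simp
    ultimately show "(\<Sum>y\<in>{0..my}. l x s y) = 1" using LIMSEQ_unique tendsto_const by metis
    have "(\<lambda>n. \<Sum>y\<in>Yo my ms (s - x). restrict_action (A (r n)) x s y) \<longlonglongrightarrow>
        (\<Sum>y\<in>Yo my ms (s - x). l x s y)"
      by (intro tendsto_intros lim)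
    moreover have "(\<lambda>n. \<Sum>y\<in>Yo my ms (s - x). restrict_action (A (r n)) x s y) = (\<lambda>n. 1)"
      using RA xs by (simp add: Aset_def)
    ultimately show "(\<Sum>y\<in>Yo my ms (s - x). l x s y) = 1" using LIMSEQ_unique tendsto_const by metis
  qed
  then show thesis by (rule that[OF _ r lim])
qed

lemma W_attained:
  assumes p: "p \<in> PXS mx ms"
  shows "\<exists>a\<in>Aset mx my ms. bellman mx my ms Q a (W k) p = W (Suc k) p"
proof -
  have "\<exists>a\<in>Aset mx my ms. bellman mx my ms Q a (W k) p < W (Suc k) p + inverse (real (Suc n))" for n
  proof -
    have "W (Suc k) p < W (Suc k) p + inverse (real (Suc n))" by simp
    then show ?thesis
      using cINF_less_iff[OF Aset_ne bellman_bdd_below[OF p, of k],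
          where a = "W (Suc k) p + inverse (real (Suc n))"] by simp
  qed
  then obtain A where A: "\<And>n. A n \<in> Aset mx my ms"
    and Ab: "\<And>n. bellman mx my ms Q (A n) (W k) p < W (Suc k) p + inverse (real (Suc n))"
    by metis
  obtain l r where lA: "l \<in> Aset mx my ms" and r: "strict_mono r"
    and lim: "\<And>x s y. (\<lambda>n. restrict_action (A (r n)) x s y) \<longlonglongrightarrow> l x s y"
    using Aset_subseq_limit[of A, OF A] by blast
  define B where "B n = bellman mx my ms Q (restrict_action (A (r n))) (W k) p" for n
  have "B \<longlonglongrightarrow> bellman mx my ms Q l (W k) p"
    unfolding B_def using W_nonneg_le restrict_action_Aset[OF A] p
    by (intro bellman_tendsto[OF _ lim _ _ p lA W_continuous]) auto
  moreover have "B \<longlonglongrightarrow> W (Suc k) p"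
  proof (rule tendsto_sandwich[of "\<lambda>n. W (Suc k) p" _ _ "\<lambda>n. W (Suc k) p + inverse (real (Suc n))"])
    show "\<forall>\<^sub>F n in sequentially. W (Suc k) p \<le> B n"
      using W_le_bellman[OF p restrict_action_Aset[OF A]] by (simp add: B_def)
    have "inverse (real (Suc (r n))) \<le> inverse (real (Suc n))" for n
      using seq_suble[OF r, of n] by (simp add: field_simps)
    then show "\<forall>\<^sub>F n in sequentially. B n \<le> W (Suc k) p + inverse (real (Suc n))"
      using Ab by (intro always_eventually allI) (smt (verit) B_def restrict_action_bellman)
    show "(\<lambda>n. W (Suc k) p + inverse (real (Suc n))) \<longlonglongrightarrow> W (Suc k) p"
      using tendsto_add[OF tendsto_const LIMSEQ_inverse_real_of_nat, of "W (Suc k) p"] by simp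
  qed simp
  ultimately have "bellman mx my ms Q l (W k) p = W (Suc k) p" by (rule LIMSEQ_unique)
  then show ?thesis using lA by blast
qed

end

locale smart_meter_policy = smart_meter +
  fixes PX1 PS1 :: "int \<Rightarrow> real" and q :: policy
  assumes PX1: "is_pmf_on {0..mx} PX1" and PS1: "is_pmf_on {0..ms} PS1"
    and qpol: "q \<in> policies mx my ms"
begin

abbreviation "LX n \<equiv> seqs n {0..mx}"
abbreviation "LS n \<equiv> seqs n {0..ms}"
abbreviation "LY n \<equiv> seqs n {0..my}"

lemma PX1_nonneg: "x \<in> {0..mx} \<Longrightarrow> PX1 x \<ge> 0" using PX1 by (auto simp: is_pmf_on_def)
lemma PS1_nonneg: "s \<in> {0..ms} \<Longrightarrow> PS1 s \<ge> 0" using PS1 by (auto simp: is_pmf_on_def)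
lemma PX1_sum: "(\<Sum>x\<in>{0..mx}. PX1 x) = 1" using PX1 by (auto simp: is_pmf_on_def)
lemma PS1_sum: "(\<Sum>s\<in>{0..ms}. PS1 s) = 1" using PS1 by (auto simp: is_pmf_on_def)

definition q_step :: "nat \<Rightarrow> int list \<Rightarrow> int \<Rightarrow> int list \<Rightarrow> int
    \<Rightarrow> int list \<Rightarrow> int \<Rightarrow> real" where
  "q_step n xs x ss s ys y = q (Suc n) (xs @ [x]) (ss @ [s]) ys y"

lemma q_step_pmf:
  assumes "xs \<in> LX n" "x \<in> {0..mx}" "ss \<in> LS n" "s \<in> {0..ms}" "ys \<in> LY n"
  shows "(\<forall>y\<in>{0..my}. q_step n xs x ss s ys y \<ge> 0) \<and> (\<Sum>y\<in>{0..my}. q_step n xs x ss s ys y) = 1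
      \<and> (\<Sum>y\<in>Yo my ms (s - x). q_step n xs x ss s ys y) = 1"
proof -
  have m: "xs @ [x] \<in> seqs (Suc n) {0..mx}" "ss @ [s] \<in> seqs (Suc n) {0..ms}" "ys \<in> seqs n {0..my}"
    using assms by (auto simp: snoc_in_seqs_iff)
  have P: "\<And>t xs ss ys. t \<ge> 1 \<Longrightarrow> xs \<in> seqs t {0..mx}
      \<Longrightarrow> ss \<in> seqs t {0..ms} \<Longrightarrow> ys \<in> seqs (t - 1) {0..my} \<Longrightarrow>
      (\<forall>y\<in>{0..my}. q t xs ss ys y \<ge> 0) \<and> (\<Sum>y\<in>{0..my}. q t xs ss ys y) = 1
      \<and> (\<Sum>y\<in>Yo my ms (last ss - last xs). q t xs ss ys y) = 1"
    using qpol unfolding policies_def by blast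
  have "(\<forall>y\<in>{0..my}. q (Suc n) (xs @ [x]) (ss @ [s]) ys y \<ge> 0)
      \<and> (\<Sum>y\<in>{0..my}. q (Suc n) (xs @ [x]) (ss @ [s]) ys y) = 1
      \<and> (\<Sum>y\<in>Yo my ms (last (ss @ [s]) - last (xs @ [x])). q (Suc n) (xs @ [x]) (ss @ [s]) ys y) = 1"
    using P[of "Suc n" "xs @ [x]" "ss @ [s]" ys] m by simp
  then show ?thesis by (simp add: q_step_def)
qed

lemma q_step_nonneg:
  assumes "xs \<in> LX n" "x \<in> {0..mx}" "ss \<in> LS n" "s \<in> {0..ms}" "ys \<in> LY n" "y \<in> {0..my}"
  shows "q_step n xs x ss s ys y \<ge> 0"
  using q_step_pmf[OF assms(1-5)] assms(6) by auto

lemma q_step_sum: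
  assumes "xs \<in> LX n" "x \<in> {0..mx}" "ss \<in> LS n" "s \<in> {0..ms}" "ys \<in> LY n"
  shows "(\<Sum>y\<in>{0..my}. q_step n xs x ss s ys y) = 1"
  using q_step_pmf[OF assms] by auto

lemma q_step_charge_in_range:
  assumes "xs \<in> LX n" "x \<in> {0..mx}" "ss \<in> LS n" "s \<in> {0..ms}" "ys \<in> LY n" "y \<in> {0..my}"
    and nz: "q_step n xs x ss s ys y \<noteq> 0"
  shows "s - x + y \<in> {0..ms}"
  using Yo_support[where my = my and ms = ms and g = "q_step n xs x ss s ys" and w = "s - x"] q_step_pmf[OF assms(1-5)] assms(6,7) by auto

definition joint_q :: "nat \<Rightarrow> int list \<Rightarrow> int list \<Rightarrow> int list \<Rightarrow> real" where
  "joint_q n xs ss ys = joint PX1 PS1 Q q n ss xs ys"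

definition step_kernel :: "int \<Rightarrow> int \<Rightarrow> int \<Rightarrow> int \<Rightarrow> int \<Rightarrow> real" where
  "step_kernel x s y x' s' = (if s' = s - x + y then 1 else 0) * Q x x'"

definition hist_weight :: "nat \<Rightarrow> int list \<Rightarrow> int \<Rightarrow> int list \<Rightarrow> int
    \<Rightarrow> int list \<Rightarrow> real" where
  "hist_weight n xs x ss s ys = (if n = 0 then PX1 x * PS1 s else joint_q n xs ss ys * step_kernel (last xs) (last ss) (last ys) x s)"

definition policy_prod :: "nat \<Rightarrow> int list \<Rightarrow> int list \<Rightarrow> int list \<Rightarrow> real" where
  "policy_prod n xs ss ys = (\<Prod>i<n. q (Suc i) (take (Suc i) xs) (take (Suc i) ss) (take i ys) (ys ! i))"

lemma joint_q_0: "joint_q 0 xs ss ys = 1" by (simp add: joint_q_def joint_def)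

lemma joint_q_Suc:
  assumes "length xs = n" "length ss = n" "length ys = n"
  shows "joint_q (Suc n) (xs @ [x]) (ss @ [s]) (ys @ [y]) = hist_weight n xs x ss s ys * q_step n xs x ss s ys y"
proof -
  define f where "f xs ss ys i = (if i = 0 then PS1 (ss ! 0) * PX1 (xs ! 0)
              else (if ss ! i = ss ! (i - 1) - xs ! (i - 1) + ys ! (i - 1) then 1 else 0)
                   * Q (xs ! (i - 1)) (xs ! i))
            * q (Suc i) (take (Suc i) xs) (take (Suc i) ss) (take i ys) (ys ! i)" for xs ss ys :: "int list" and i
  have Jf: "joint_q m xs' ss' ys' = (\<Prod>i<m. f xs' ss' ys' i)" for m xs' ss' ys'
    by (simp add: joint_q_def joint_def f_def)
  have eq: "f (xs @ [x]) (ss @ [s]) (ys @ [y]) i = f xs ss ys i" if "i < n" for i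
    using that assms by (auto simp: f_def nth_append)
  have "joint_q (Suc n) (xs @ [x]) (ss @ [s]) (ys @ [y]) = joint_q n xs ss ys * f (xs @ [x]) (ss @ [s]) (ys @ [y]) n"
    unfolding Jf by (simp add: eq)
  also have "f (xs @ [x]) (ss @ [s]) (ys @ [y]) n
      = (if n = 0 then PS1 s * PX1 x else step_kernel (last xs) (last ss) (last ys) x s) * q_step n xs x ss s ys y"
  proof (cases n)
    case 0 then show ?thesis using assms by (simp add: f_def q_step_def)
  next
    case (Suc m)
    have ne: "xs \<noteq> []" "ss \<noteq> []" "ys \<noteq> []" using assms Suc by auto
    have "last xs = xs ! m" "last ss = ss ! m" "last ys = ys ! m" using assms Suc ne by (simp_all add: last_conv_nth)
    then show ?thesis using assms Suc by (simp add: f_def nth_append step_kernel_def q_step_def)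
  qed
  finally show ?thesis by (cases "n = 0") (auto simp: hist_weight_def joint_q_0)
qed

lemma hist_weight_Suc:
  assumes "length xs = n" "length ss = n" "length ys = n"
  shows "hist_weight (Suc n) (xs @ [x]) x' (ss @ [s]) s' (ys @ [y]) = hist_weight n xs x ss s ys
      * q_step n xs x ss s ys y * step_kernel x s y x' s'"
  using joint_q_Suc[OF assms] by (simp add: hist_weight_def)

lemma policy_prod_0: "policy_prod 0 xs ss ys = 1" by (simp add: policy_prod_def)

lemma policy_prod_Suc:
  assumes "length xs = n" "length ss = n" "length ys = n"
  shows "policy_prod (Suc n) (xs @ [x]) (ss @ [s]) (ys @ [y]) = policy_prod n xs ss ys * q_step n xs x ss s ys y"
proof -
  define g where "g xs' ss' ys' i = q (Suc i) (take (Suc i) xs') (take (Suc i) ss') (take i ys') (ys' ! i)" for xs' ss' ys' i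
  have "g (xs @ [x]) (ss @ [s]) (ys @ [y]) i = g xs ss ys i" if "i < n" for i
    using that assms by (simp add: nth_append g_def)
  then have "(\<Prod>i<n. g (xs @ [x]) (ss @ [s]) (ys @ [y]) i) = (\<Prod>i<n. g xs ss ys i)" by (intro prod.cong) auto
  moreover have "g (xs @ [x]) (ss @ [s]) (ys @ [y]) n = q_step n xs x ss s ys y"
    using assms by (simp add: g_def q_step_def nth_append)
  ultimately show ?thesis unfolding policy_prod_def g_def[symmetric] by simp
qed

lemma step_kernel_nonneg: "x \<in> {0..mx} \<Longrightarrow> x' \<in> {0..mx} \<Longrightarrow> step_kernel x s y x' s' \<ge> 0"
  by (simp add: step_kernel_def Q_nonneg)

lemma step_kernel_sum:
  assumes "x \<in> {0..mx}" "s - x + y \<in> {0..ms}"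
  shows "(\<Sum>x'\<in>{0..mx}. \<Sum>s'\<in>{0..ms}. step_kernel x s y x' s') = 1"
proof -
  have "(\<Sum>s'\<in>{0..ms}. step_kernel x s y x' s') = Q x x'" for x'
    unfolding step_kernel_def using sum_indicator_mult[of "{0..ms}" "s - x + y" "\<lambda>_. Q x x'"] assms by simp
  then show ?thesis using Q_row_sum[OF assms(1)] by simp
qed

lemma joint_q_hist_weight_nonneg:
  "xs \<in> LX n \<Longrightarrow> ss \<in> LS n \<Longrightarrow> ys \<in> LY n \<Longrightarrow> joint_q n xs ss ys \<ge> 0
    \<and> (\<forall>x\<in>{0..mx}. \<forall>s\<in>{0..ms}. hist_weight n xs x ss s ys \<ge> 0)"
proof (induction n arbitrary: xs ss ys)
  case 0
  then show ?case by (auto simp: joint_q_0 hist_weight_def PX1_nonneg PS1_nonneg seqs_0)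
next
  case (Suc n)
  obtain xs0 x where xs: "xs = xs0 @ [x]" "xs0 \<in> LX n" "x \<in> {0..mx}" using Suc.prems(1) by (rule seqs_SucE)
  obtain ss0 s where ss: "ss = ss0 @ [s]" "ss0 \<in> LS n" "s \<in> {0..ms}" using Suc.prems(2) by (rule seqs_SucE)
  obtain ys0 y where ys: "ys = ys0 @ [y]" "ys0 \<in> LY n" "y \<in> {0..my}" using Suc.prems(3) by (rule seqs_SucE)
  have l: "length xs0 = n" "length ss0 = n" "length ys0 = n" using xs ss ys by (auto simp: seqs_def)
  have joint_q_nonneg: "joint_q (Suc n) xs ss ys \<ge> 0"
    unfolding xs ss ys joint_q_Suc[OF l] using Suc.IH[OF xs(2) ss(2) ys(2)] xs ss ys
    by (intro mult_nonneg_nonneg q_step_nonneg) auto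
  moreover have "\<forall>x'\<in>{0..mx}. \<forall>s'\<in>{0..ms}. hist_weight (Suc n) xs x' ss s' ys \<ge> 0"
    using joint_q_nonneg xs by (auto simp: hist_weight_def step_kernel_nonneg simp del: joint_q_Suc)
  ultimately show ?case by simp
qed

lemma joint_q_nonneg: "xs \<in> LX n \<Longrightarrow> ss \<in> LS n \<Longrightarrow> ys \<in> LY n
    \<Longrightarrow> joint_q n xs ss ys \<ge> 0"
  using joint_q_hist_weight_nonneg by blast

lemma hist_weight_nonneg: "xs \<in> LX n \<Longrightarrow> x \<in> {0..mx} \<Longrightarrow> ss \<in> LS n
    \<Longrightarrow> s \<in> {0..ms} \<Longrightarrow> ys \<in> LY n \<Longrightarrow> hist_weight n xs x ss s ys \<ge> 0"
  using joint_q_hist_weight_nonneg by blast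

lemma policy_prod_pos:
  "xs \<in> LX n \<Longrightarrow> x \<in> {0..mx} \<Longrightarrow> ss \<in> LS n
      \<Longrightarrow> s \<in> {0..ms} \<Longrightarrow> ys \<in> LY n
   \<Longrightarrow> hist_weight n xs x ss s ys \<noteq> 0 \<Longrightarrow> policy_prod n xs ss ys > 0"
proof (induction n arbitrary: xs x ss s ys)
  case 0 then show ?case by (simp add: policy_prod_0)
next
  case (Suc n)
  obtain xs0 x0 where xs: "xs = xs0 @ [x0]" "xs0 \<in> LX n" "x0 \<in> {0..mx}" using Suc.prems(1) by (rule seqs_SucE)
  obtain ss0 s0 where ss: "ss = ss0 @ [s0]" "ss0 \<in> LS n" "s0 \<in> {0..ms}" using Suc.prems(3) by (rule seqs_SucE)
  obtain ys0 y where ys: "ys = ys0 @ [y]" "ys0 \<in> LY n" "y \<in> {0..my}" using Suc.prems(5) by (rule seqs_SucE)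
  have l: "length xs0 = n" "length ss0 = n" "length ys0 = n" using xs ss ys by (auto simp: seqs_def)
  have nz: "hist_weight n xs0 x0 ss0 s0 ys0 \<noteq> 0" "q_step n xs0 x0 ss0 s0 ys0 y \<noteq> 0"
    using Suc.prems(6) unfolding xs ss ys hist_weight_Suc[OF l] by auto
  have "policy_prod n xs0 ss0 ys0 > 0" using Suc.IH[OF xs(2,3) ss(2,3) ys(2) nz(1)] .
  moreover have "q_step n xs0 x0 ss0 s0 ys0 y > 0" using nz(2) q_step_nonneg[OF xs(2,3) ss(2,3) ys(2,3)] by simp
  ultimately show ?case unfolding xs ss ys policy_prod_Suc[OF l] by simp
qed

text \<open>For histories xs, ss, ys of length n, hist_weight n xs x ss s ys is the probability that
  X^n = xs, S^n = ss, Y^n = ys and (X_(n+1), S_(n+1)) = (x, s).  Summing out X^n and S^n gives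
  bel_unnorm, the unnormalised belief, and bel_out additionally fixes Y_(n+1) = y.  The law
  induced_action n ys of Y_(n+1) given (X_(n+1), S_(n+1), Y^n) defaults to a_default where
  (x, s) has probability zero.\<close>

definition bel_unnorm :: "nat \<Rightarrow> int list \<Rightarrow> int \<Rightarrow> int \<Rightarrow> real" where
  "bel_unnorm n ys x s = (if x \<in> {0..mx}
      \<and> s \<in> {0..ms} then (\<Sum>xs\<in>LX n. \<Sum>ss\<in>LS n. hist_weight n xs x ss s ys) else 0)"

definition bel_out :: "nat \<Rightarrow> int list \<Rightarrow> int \<Rightarrow> int \<Rightarrow> int \<Rightarrow> real" where
  "bel_out n ys x s y = (\<Sum>xs\<in>LX n. \<Sum>ss\<in>LS n. hist_weight n xs x ss s ys * q_step n xs x ss s ys y)"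

definition prob_ys :: "nat \<Rightarrow> int list \<Rightarrow> real" where
  "prob_ys n ys = (\<Sum>x\<in>{0..mx}. \<Sum>s\<in>{0..ms}. bel_unnorm n ys x s)"

definition posterior :: "nat \<Rightarrow> int list \<Rightarrow> belief" where
  "posterior n ys = (\<lambda>x s. bel_unnorm n ys x s / prob_ys n ys)"

definition induced_action :: "nat \<Rightarrow> int list \<Rightarrow> action" where
  "induced_action n ys = (\<lambda>x s y. if bel_unnorm n ys x s = 0 then a_default x s y else bel_out n ys x s y / bel_unnorm n ys x s)"

lemma bel_unnorm_nonneg: "ys \<in> LY n \<Longrightarrow> bel_unnorm n ys x s \<ge> 0"
  unfolding bel_unnorm_def by (auto intro!: sum_nonneg hist_weight_nonneg)

lemma bel_out_nonneg: "ys \<in> LY n \<Longrightarrow> x \<in> {0..mx} \<Longrightarrow> s \<in> {0..ms}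
    \<Longrightarrow> y \<in> {0..my} \<Longrightarrow> bel_out n ys x s y \<ge> 0"
  unfolding bel_out_def by (auto intro!: sum_nonneg mult_nonneg_nonneg hist_weight_nonneg q_step_nonneg)

lemma bel_out_sum:
  assumes "ys \<in> LY n" "x \<in> {0..mx}" "s \<in> {0..ms}"
  shows "(\<Sum>y\<in>{0..my}. bel_out n ys x s y) = bel_unnorm n ys x s"
    and "(\<Sum>y\<in>Yo my ms (s - x). bel_out n ys x s y) = bel_unnorm n ys x s"
proof -
  have "(\<Sum>y\<in>{0..my}. bel_out n ys x s y)
      = (\<Sum>xs\<in>LX n. \<Sum>ss\<in>LS n. hist_weight n xs x ss s ys * (\<Sum>y\<in>{0..my}. q_step n xs x ss s ys y))"
    unfolding bel_out_def by (subst sum_swap3[symmetric]) (simp add: sum_distrib_left)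
  also have "\<dots> = bel_unnorm n ys x s" using assms q_step_pmf by (simp add: bel_unnorm_def)
  finally show "(\<Sum>y\<in>{0..my}. bel_out n ys x s y) = bel_unnorm n ys x s" .
  have "(\<Sum>y\<in>Yo my ms (s - x). bel_out n ys x s y)
      = (\<Sum>xs\<in>LX n. \<Sum>ss\<in>LS n. hist_weight n xs x ss s ys * (\<Sum>y\<in>Yo my ms (s - x). q_step n xs x ss s ys y))"
    unfolding bel_out_def by (subst sum_swap3[symmetric]) (simp add: sum_distrib_left)
  also have "\<dots> = bel_unnorm n ys x s" using assms q_step_pmf by (simp add: bel_unnorm_def)
  finally show "(\<Sum>y\<in>Yo my ms (s - x). bel_out n ys x s y) = bel_unnorm n ys x s" .
qed

lemma bel_out_zero:
  assumes "ys \<in> LY n" "x \<in> {0..mx}" "s \<in> {0..ms}" "y \<in> {0..my}" "bel_unnorm n ys x s = 0"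
  shows "bel_out n ys x s y = 0"
  by (rule sum_nonneg_eq_0D[of "{0..my}" "bel_out n ys x s"]) (use assms bel_out_nonneg bel_out_sum in auto)

lemma bel_out_charge_in_range:
  assumes "ys \<in> LY n" "x \<in> {0..mx}" "s \<in> {0..ms}" "y \<in> {0..my}" "bel_out n ys x s y \<noteq> 0"
  shows "s - x + y \<in> {0..ms}"
proof -
  obtain xs where xs: "xs \<in> LX n" and "(\<Sum>ss\<in>LS n. hist_weight n xs x ss s ys * q_step n xs x ss s ys y) \<noteq> 0"
    using assms(5) unfolding bel_out_def by (meson sum.neutral)
  then obtain ss where ss: "ss \<in> LS n" and "hist_weight n xs x ss s ys * q_step n xs x ss s ys y \<noteq> 0"
    by (meson sum.neutral)
  then show ?thesis using q_step_charge_in_range[OF xs assms(2) ss assms(3) assms(1) assms(4)] by auto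
qed

lemma induced_action_Aset: assumes "ys \<in> LY n" shows "induced_action n ys \<in> Aset mx my ms"
proof -
  have "(\<forall>y\<in>{0..my}. induced_action n ys x s y \<ge> 0) \<and> (\<Sum>y\<in>{0..my}. induced_action n ys x s y) = 1
      \<and> (\<Sum>y\<in>Yo my ms (s - x). induced_action n ys x s y) = 1" if xs: "x \<in> {0..mx}" "s \<in> {0..ms}" for x s
  proof (cases "bel_unnorm n ys x s = 0")
    case True
    then show ?thesis using a_default_Aset xs by (simp add: induced_action_def Aset_def)
  next
    case False
    then show ?thesis using bel_out_sum[OF assms xs] bel_out_nonneg[OF assms xs] bel_unnorm_nonneg[OF assms]
      by (simp add: induced_action_def sum_divide_distrib[symmetric])
  qed
  then show ?thesis by (simp add: Aset_def)
qed

lemma bel_unnorm_mult_induced_action: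
  assumes "ys \<in> LY n" "x \<in> {0..mx}" "s \<in> {0..ms}" "y \<in> {0..my}"
  shows "bel_unnorm n ys x s * induced_action n ys x s y = bel_out n ys x s y"
  using bel_out_zero[OF assms] by (cases "bel_unnorm n ys x s = 0") (auto simp: induced_action_def)

lemma bel_unnorm_Suc:
  assumes ys: "ys \<in> LY n" and y: "y \<in> {0..my}" and x': "x' \<in> {0..mx}" and s': "s' \<in> {0..ms}"
  shows "bel_unnorm (Suc n) (ys @ [y]) x' s' = (\<Sum>x\<in>{0..mx}. \<Sum>s\<in>{0..ms}. bel_out n ys x s y * step_kernel x s y x' s')"
proof -
  have ly: "length ys = n" using ys by (simp add: seqs_def)
  have "bel_unnorm (Suc n) (ys @ [y]) x' s' = (\<Sum>xs\<in>LX n. \<Sum>x\<in>{0..mx}. \<Sum>ss\<in>LS n. \<Sum>s\<in>{0..ms}.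
        hist_weight (Suc n) (xs @ [x]) x' (ss @ [s]) s' (ys @ [y]))"
    using x' s' by (simp add: bel_unnorm_def sum_seqs_Suc)
  also have "\<dots> = (\<Sum>xs\<in>LX n. \<Sum>x\<in>{0..mx}. \<Sum>ss\<in>LS n. \<Sum>s\<in>{0..ms}.
        hist_weight n xs x ss s ys * q_step n xs x ss s ys y * step_kernel x s y x' s')"
    using ly by (intro sum.cong refl) (simp add: hist_weight_Suc seqs_def)
  also have "\<dots> = (\<Sum>x\<in>{0..mx}. \<Sum>xs\<in>LX n. \<Sum>ss\<in>LS n. \<Sum>s\<in>{0..ms}.
        hist_weight n xs x ss s ys * q_step n xs x ss s ys y * step_kernel x s y x' s')"
    by (rule sum.swap)
  also have "\<dots> = (\<Sum>x\<in>{0..mx}. \<Sum>s\<in>{0..ms}. \<Sum>xs\<in>LX n. \<Sum>ss\<in>LS n.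
        hist_weight n xs x ss s ys * q_step n xs x ss s ys y * step_kernel x s y x' s')"
    by (rule sum.cong[OF refl], rule sum_swap3)
  also have "\<dots> = (\<Sum>x\<in>{0..mx}. \<Sum>s\<in>{0..ms}. bel_out n ys x s y * step_kernel x s y x' s')"
    unfolding bel_out_def by (simp add: sum_distrib_right)
  finally show ?thesis .
qed

lemma prob_ys_Suc:
  assumes ys: "ys \<in> LY n" and y: "y \<in> {0..my}"
  shows "prob_ys (Suc n) (ys @ [y]) = (\<Sum>x\<in>{0..mx}. \<Sum>s\<in>{0..ms}. bel_out n ys x s y)"
proof -
  have "prob_ys (Suc n) (ys @ [y])
      = (\<Sum>x'\<in>{0..mx}. \<Sum>s'\<in>{0..ms}. \<Sum>x\<in>{0..mx}. \<Sum>s\<in>{0..ms}. bel_out n ys x s y * step_kernel x s y x' s')"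
    unfolding prob_ys_def by (intro sum.cong refl bel_unnorm_Suc ys y) auto
  also have "\<dots> = (\<Sum>x\<in>{0..mx}. \<Sum>s\<in>{0..ms}. \<Sum>x'\<in>{0..mx}. \<Sum>s'\<in>{0..ms}.
      bel_out n ys x s y * step_kernel x s y x' s')"
    by (rule sum_swap4)
  also have "\<dots> = (\<Sum>x\<in>{0..mx}. \<Sum>s\<in>{0..ms}. bel_out n ys x s y
      * (\<Sum>x'\<in>{0..mx}. \<Sum>s'\<in>{0..ms}. step_kernel x s y x' s'))"
    by (simp add: sum_distrib_left)
  also have "\<dots> = (\<Sum>x\<in>{0..mx}. \<Sum>s\<in>{0..ms}. bel_out n ys x s y)"
  proof (intro sum.cong refl)
    fix x s assume xs: "x \<in> {0..mx}" "s \<in> {0..ms}"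
    show "bel_out n ys x s y * (\<Sum>x'\<in>{0..mx}. \<Sum>s'\<in>{0..ms}. step_kernel x s y x' s') = bel_out n ys x s y"
      using bel_out_charge_in_range[OF ys xs y] step_kernel_sum[OF xs(1)] by (cases "bel_out n ys x s y = 0") auto
  qed
  finally show ?thesis .
qed

lemma prob_ys_nonneg: "ys \<in> LY n \<Longrightarrow> prob_ys n ys \<ge> 0"
  unfolding prob_ys_def by (intro sum_nonneg bel_unnorm_nonneg)

lemma sum_prob_ys_snoc:
  assumes ys: "ys \<in> LY n"
  shows "(\<Sum>y\<in>{0..my}. prob_ys (Suc n) (ys @ [y])) = prob_ys n ys"
proof -
  have "(\<Sum>y\<in>{0..my}. prob_ys (Suc n) (ys @ [y])) = (\<Sum>y\<in>{0..my}. \<Sum>x\<in>{0..mx}. \<Sum>s\<in>{0..ms}. bel_out n ys x s y)"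
    by (intro sum.cong refl prob_ys_Suc ys) auto
  also have "\<dots> = (\<Sum>x\<in>{0..mx}. \<Sum>s\<in>{0..ms}. \<Sum>y\<in>{0..my}. bel_out n ys x s y)"
    by (rule sum_swap3[symmetric])
  also have "\<dots> = prob_ys n ys" unfolding prob_ys_def by (intro sum.cong refl bel_out_sum ys) auto
  finally show ?thesis .
qed

lemma prob_ys_snoc_le:
  assumes "ys \<in> LY n" "y \<in> {0..my}"
  shows "prob_ys (Suc n) (ys @ [y]) \<le> prob_ys n ys"
  unfolding sum_prob_ys_snoc[OF assms(1), symmetric] using assms
  by (intro member_le_sum[where f = "\<lambda>y. prob_ys (Suc n) (ys @ [y])"] prob_ys_nonneg)
    (auto simp: snoc_in_seqs_iff)

lemma bel_unnorm_le_prob_ys: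
  assumes "ys \<in> LY n"
  shows "bel_unnorm n ys x s \<le> prob_ys n ys"
proof (cases "x \<in> {0..mx} \<and> s \<in> {0..ms}")
  case True
  then show ?thesis unfolding prob_ys_def using assms
    by (intro member_le_sum2[where f = "bel_unnorm n ys"] bel_unnorm_nonneg) auto
next
  case False then show ?thesis using prob_ys_nonneg[OF assms] by (auto simp: bel_unnorm_def)
qed

lemma posterior_PXS:
  assumes "ys \<in> LY n" "prob_ys n ys > 0"
  shows "posterior n ys \<in> PXS mx ms"
proof -
  have "(\<Sum>x\<in>{0..mx}. \<Sum>s\<in>{0..ms}. posterior n ys x s)
      = (\<Sum>x\<in>{0..mx}. \<Sum>s\<in>{0..ms}. bel_unnorm n ys x s) / prob_ys n ys"
    by (simp add: posterior_def sum_divide_distrib)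
  then have "(\<Sum>x\<in>{0..mx}. \<Sum>s\<in>{0..ms}. posterior n ys x s) = 1" using assms by (simp add: prob_ys_def)
  moreover have "posterior n ys x s \<ge> 0" for x s using bel_unnorm_nonneg[OF assms(1)] assms(2) by (simp add: posterior_def)
  moreover have "posterior n ys x s = 0" if "(x, s) \<notin> {0..mx} \<times> {0..ms}" for x s using that
      by (auto simp: posterior_def bel_unnorm_def)
  ultimately show ?thesis by (simp add: PXS_def)
qed

lemma prob_ys_0: "prob_ys 0 [] = 1"
  by (simp add: prob_ys_def bel_unnorm_def seqs_0 hist_weight_def sum_distrib_left[symmetric] sum_distrib_right[symmetric] PX1_sum PS1_sum)

lemma posterior_0: "posterior 0 [] = pi1 mx ms PX1 PS1"
  by (simp add: posterior_def prob_ys_0 bel_unnorm_def seqs_0 hist_weight_def pi1_def fun_eq_iff)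

lemma prob_ys_mult_out_prob:
  assumes ys: "ys \<in> LY n" and y: "y \<in> {0..my}"
  shows "prob_ys n ys * out_prob (posterior n ys) (induced_action n ys) y = prob_ys (Suc n) (ys @ [y])"
proof (cases "prob_ys n ys = 0")
  case True
  then have "prob_ys (Suc n) (ys @ [y]) = 0"
    using prob_ys_snoc_le[OF ys y] prob_ys_nonneg[of "ys @ [y]" "Suc n"] ys y by (simp add: snoc_in_seqs_iff)
  then show ?thesis using True by simp
next
  case False
  have "prob_ys n ys * out_prob (posterior n ys) (induced_action n ys) y
      = (\<Sum>x\<in>{0..mx}. \<Sum>s\<in>{0..ms}. bel_unnorm n ys x s * induced_action n ys x s y)"
    unfolding out_prob_def posterior_def using False by (simp add: sum_distrib_left field_simps)
  also have "\<dots> = (\<Sum>x\<in>{0..mx}. \<Sum>s\<in>{0..ms}. bel_out n ys x s y)"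
    by (intro sum.cong refl bel_unnorm_mult_induced_action ys y) auto
  finally show ?thesis using prob_ys_Suc[OF ys y] by simp
qed

lemma posterior_snoc:
  assumes ys: "ys \<in> LY n" and y: "y \<in> {0..my}" and p: "prob_ys n ys > 0" and p': "prob_ys (Suc n) (ys @ [y]) > 0"
  shows "posterior (Suc n) (ys @ [y]) = filt mx ms Q (posterior n ys) y (induced_action n ys)"
proof -
  have Py: "out_prob (posterior n ys) (induced_action n ys) y = prob_ys (Suc n) (ys @ [y]) / prob_ys n ys"
    using prob_ys_mult_out_prob[OF ys y] p by (simp add: field_simps)
  have Pyn: "out_prob (posterior n ys) (induced_action n ys) y \<noteq> 0" using Py p p' by simp
  have "bel_unnorm (Suc n) (ys @ [y]) x' s' = filt_num (posterior n ys) (induced_action n ys) y x' s' * prob_ys n ys" for x' s'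
  proof (cases "x' \<in> {0..mx} \<and> s' \<in> {0..ms}")
    case True
    have "bel_unnorm (Suc n) (ys @ [y]) x' s' = (\<Sum>x\<in>{0..mx}. \<Sum>s\<in>{0..ms}. bel_out n ys x s y
        * ((if s' = s - x + y then 1 else 0) * Q x x'))"
      using bel_unnorm_Suc[OF ys y] True by (simp add: step_kernel_def)
    also have "\<dots> = (\<Sum>x\<in>{0..mx}. if s' + x - y \<in> {0..ms} then bel_out n ys x (s' + x - y) y * Q x x' else 0)"
      by (intro sum.cong refl sum_indicator_shift) simp
    also have "\<dots> = (\<Sum>x\<in>{0..mx}. (if s' + x - y \<in> {0..ms} then Q x x'
        * induced_action n ys x (s' + x - y) y * posterior n ys x (s' + x - y) else 0) * prob_ys n ys)"
    proof (intro sum.cong refl)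
      fix x assume x: "x \<in> {0..mx}"
      show "(if s' + x - y \<in> {0..ms} then bel_out n ys x (s' + x - y) y * Q x x' else 0)
          = (if s' + x - y \<in> {0..ms} then Q x x' * induced_action n ys x (s' + x - y) y
              * posterior n ys x (s' + x - y) else 0) * prob_ys n ys"
        using bel_unnorm_mult_induced_action[OF ys x _ y, of "s' + x - y"] p by (auto simp: posterior_def field_simps)
    qed
    also have "\<dots> = filt_num (posterior n ys) (induced_action n ys) y x' s' * prob_ys n ys"
      using True by (simp add: filt_num_def sum_distrib_right)
    finally show ?thesis .
  next
    case False then show ?thesis by (auto simp: bel_unnorm_def filt_num_def)
  qed
  then show ?thesis using Pyn Py p p' by (auto simp: filt_eq_normalized posterior_def fun_eq_iff field_simps)
qed

lemma prob_ys_mult_bellman: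
  assumes ys: "ys \<in> LY n"
  shows "prob_ys n ys * bellman mx my ms Q (induced_action n ys) V (posterior n ys)
     = prob_ys n ys * Ia mx my ms (induced_action n ys) (posterior n ys) + (\<Sum>y\<in>{0..my}. prob_ys (Suc n)
         (ys @ [y]) * V (posterior (Suc n) (ys @ [y])))"
proof (cases "prob_ys n ys = 0")
  case True
  have "prob_ys (Suc n) (ys @ [y]) = 0" if "y \<in> {0..my}" for y
    using prob_ys_snoc_le[OF ys that] prob_ys_nonneg[of "ys @ [y]" "Suc n"] True ys that
    by (simp add: snoc_in_seqs_iff)
  then show ?thesis using True by simp
next
  case False
  then have p: "prob_ys n ys > 0" using prob_ys_nonneg[OF ys] by simp
  have "prob_ys n ys * (\<Sum>y\<in>{0..my}. out_prob (posterior n ys) (induced_action n ys) y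
      * V (filt mx ms Q (posterior n ys) y (induced_action n ys)))
     = (\<Sum>y\<in>{0..my}. prob_ys (Suc n) (ys @ [y]) * V (posterior (Suc n) (ys @ [y])))"
    unfolding sum_distrib_left
  proof (intro sum.cong refl)
    fix y assume y: "y \<in> {0..my}"
    show "prob_ys n ys * (out_prob (posterior n ys) (induced_action n ys) y * V (filt mx ms Q (posterior n ys) y (induced_action n ys)))
       = prob_ys (Suc n) (ys @ [y]) * V (posterior (Suc n) (ys @ [y]))"
    proof (cases "prob_ys (Suc n) (ys @ [y]) = 0")
      case True then show ?thesis using prob_ys_mult_out_prob[OF ys y] by (simp add: mult.assoc[symmetric])
    next
      case False
      then have "prob_ys (Suc n) (ys @ [y]) > 0" using prob_ys_nonneg[of "ys @ [y]" "Suc n"] ys y by (simp add: snoc_in_seqs_iff)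
      then show ?thesis using prob_ys_mult_out_prob[OF ys y] posterior_snoc[OF ys y p] by (simp add: mult.assoc[symmetric])
    qed
  qed
  then show ?thesis unfolding bellman_eq_sum_out_prob by (simp add: distrib_left)
qed

section \<open>Chain rule for the leakage\<close>

definition hists :: "nat \<Rightarrow> (int list \<times> int \<times> int list \<times> int \<times> int list) set" where
  "hists n = LX n \<times> {0..mx} \<times> LS n \<times> {0..ms} \<times> LY n"

lemma sum_hists_Suc:
  "(\<Sum>h\<in>hists (Suc n). F h)
      = (\<Sum>(xs,x,ss,s,ys)\<in>hists n. \<Sum>y\<in>{0..my}. \<Sum>x'\<in>{0..mx}. \<Sum>s'\<in>{0..ms}.
          F (xs @ [x], x', ss @ [s], s', ys @ [y]))"
proof -
  define G where "G = (\<lambda>((xs::int list,x::int,ss::int list,s::int,ys::int list),y::int,x'::int,s'::int).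
      (xs @ [x], x', ss @ [s], s', ys @ [y]))"
  have inj: "inj_on G (hists n \<times> {0..my} \<times> {0..mx} \<times> {0..ms})" by (auto simp: inj_on_def G_def)
  have img: "G ` (hists n \<times> {0..my} \<times> {0..mx} \<times> {0..ms}) = hists (Suc n)"
  proof (intro set_eqI iffI)
    fix h assume "h \<in> G ` (hists n \<times> {0..my} \<times> {0..mx} \<times> {0..ms})"
    then show "h \<in> hists (Suc n)" by (auto simp: G_def hists_def snoc_in_seqs_iff)
  next
    fix h assume "h \<in> hists (Suc n)"
    then obtain xs' x' ss' s' ys' where h: "h = (xs', x', ss', s', ys')" "xs' \<in> LX (Suc n)" "x' \<in> {0..mx}"
      "ss' \<in> LS (Suc n)" "s' \<in> {0..ms}" "ys' \<in> LY (Suc n)" by (auto simp: hists_def)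
    obtain xs x where xs: "xs' = xs @ [x]" "xs \<in> LX n" "x \<in> {0..mx}" using h(2) by (rule seqs_SucE)
    obtain ss s where ss: "ss' = ss @ [s]" "ss \<in> LS n" "s \<in> {0..ms}" using h(4) by (rule seqs_SucE)
    obtain ys y where ys: "ys' = ys @ [y]" "ys \<in> LY n" "y \<in> {0..my}" using h(6) by (rule seqs_SucE)
    show "h \<in> G ` (hists n \<times> {0..my} \<times> {0..mx} \<times> {0..ms})"
      using h xs ss ys by (auto simp: G_def hists_def intro!: image_eqI[where x="((xs,x,ss,s,ys),y,x',s')"])
  qed
  have "(\<Sum>h\<in>hists (Suc n). F h) = (\<Sum>p\<in>hists n \<times> {0..my} \<times> {0..mx} \<times> {0..ms}. F (G p))"
    unfolding img[symmetric] by (rule sum.reindex[OF inj, unfolded o_def])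
  also have "\<dots> = (\<Sum>h\<in>hists n. \<Sum>y\<in>{0..my}. \<Sum>x'\<in>{0..mx}. \<Sum>s'\<in>{0..ms}. F (G (h, y, x', s')))"
    by (simp add: sum.cartesian_product split_beta)
  finally show ?thesis by (simp add: G_def split_beta)
qed

lemma sum_hists_regroup:
  "(\<Sum>(xs,x,ss,s,ys)\<in>hists n. F xs x ss s ys)
      = (\<Sum>ys\<in>LY n. \<Sum>x\<in>{0..mx}. \<Sum>s\<in>{0..ms}. \<Sum>xs\<in>LX n. \<Sum>ss\<in>LS n. F xs x ss s ys)"
proof -
  define G where "G = (\<lambda>(ys::int list,x::int,s::int,xs::int list,ss::int list). (xs,x,ss,s,ys))"
  have inj: "inj_on G (LY n \<times> {0..mx} \<times> {0..ms} \<times> LX n \<times> LS n)" by (auto simp: inj_on_def G_def)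
  have img: "G ` (LY n \<times> {0..mx} \<times> {0..ms} \<times> LX n \<times> LS n) = hists n"
    by (auto simp: G_def hists_def image_iff)
  have "(\<Sum>(xs,x,ss,s,ys)\<in>hists n. F xs x ss s ys)
      = (\<Sum>p\<in>LY n \<times> {0..mx} \<times> {0..ms} \<times> LX n \<times> LS n. (\<lambda>(xs,x,ss,s,ys). F xs x ss s ys) (G p))"
    unfolding img[symmetric] by (rule sum.reindex[OF inj, unfolded o_def])
  also have "\<dots> = (\<Sum>(ys,x,s,xs,ss)\<in>LY n \<times> {0..mx} \<times> {0..ms} \<times> LX n \<times> LS n. F xs x ss s ys)"
    by (rule sum.cong) (auto simp: G_def)
  also have "\<dots> = (\<Sum>ys\<in>LY n. \<Sum>x\<in>{0..mx}. \<Sum>s\<in>{0..ms}. \<Sum>xs\<in>LX n. \<Sum>ss\<in>LS n. F xs x ss s ys)"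
    by (rule sum_cartesian5)
  finally show ?thesis .
qed

definition cum_leak :: "nat \<Rightarrow> real" where
  "cum_leak n = (\<Sum>(xs,x,ss,s,ys)\<in>hists n.
      hist_weight n xs x ss s ys * (ln (policy_prod n xs ss ys) - ln (prob_ys n ys)))"

definition leak_incr :: "nat \<Rightarrow> real" where
  "leak_incr n = (\<Sum>(xs,x,ss,s,ys)\<in>hists n. \<Sum>y\<in>{0..my}.
      hist_weight n xs x ss s ys * q_step n xs x ss s ys y
      * (ln (q_step n xs x ss s ys y) - ln (prob_ys (Suc n) (ys @ [y])) + ln (prob_ys n ys)))"

lemma cum_leak_0: "cum_leak 0 = 0"
  unfolding cum_leak_def by (intro sum.neutral) (auto simp: hists_def seqs_0 policy_prod_0 prob_ys_0)

lemma cum_leak_term_snoc: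
  assumes h: "(xs, x, ss, s, ys) \<in> hists n" and y: "y \<in> {0..my}"
  shows "(\<Sum>x'\<in>{0..mx}. \<Sum>s'\<in>{0..ms}. hist_weight (Suc n) (xs @ [x]) x' (ss @ [s]) s' (ys @ [y])
            * (ln (policy_prod (Suc n) (xs @ [x]) (ss @ [s]) (ys @ [y])) - ln (prob_ys (Suc n) (ys @ [y]))))
       = hist_weight n xs x ss s ys * q_step n xs x ss s ys y * (ln (policy_prod n xs ss ys) - ln (prob_ys n ys))
         + hist_weight n xs x ss s ys * q_step n xs x ss s ys y
           * (ln (q_step n xs x ss s ys y) - ln (prob_ys (Suc n) (ys @ [y])) + ln (prob_ys n ys))"
proof -
  have hx: "xs \<in> LX n" "x \<in> {0..mx}" "ss \<in> LS n" "s \<in> {0..ms}" "ys \<in> LY n"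
    using h by (auto simp: hists_def)
  have l: "length xs = n" "length ss = n" "length ys = n" using hx by (auto simp: seqs_def)
  define K where "K = hist_weight n xs x ss s ys"
  define C where "C = policy_prod n xs ss ys"
  define c where "c = q_step n xs x ss s ys y"
  define P' where "P' = prob_ys (Suc n) (ys @ [y])"
  have "(\<Sum>x'\<in>{0..mx}. \<Sum>s'\<in>{0..ms}. hist_weight (Suc n) (xs @ [x]) x' (ss @ [s]) s' (ys @ [y])
            * (ln (policy_prod (Suc n) (xs @ [x]) (ss @ [s]) (ys @ [y])) - ln P'))
      = K * c * (ln (C * c) - ln P') * (\<Sum>x'\<in>{0..mx}. \<Sum>s'\<in>{0..ms}. step_kernel x s y x' s')"
    by (simp add: hist_weight_Suc[OF l] policy_prod_Suc[OF l] K_def C_def c_def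
        sum_distrib_left sum_distrib_right mult_ac)
  also have "\<dots> = K * c * (ln C - ln (prob_ys n ys)) + K * c * (ln c - ln P' + ln (prob_ys n ys))"
  proof (cases "K * c = 0")
    case False
    then have "c > 0" "C > 0"
      using q_step_nonneg[OF hx y] hist_weight_nonneg[OF hx] policy_prod_pos[OF hx]
      by (auto simp: K_def C_def c_def)
    moreover have "s - x + y \<in> {0..ms}"
      using False q_step_charge_in_range[OF hx y] by (auto simp: c_def)
    ultimately show ?thesis
      using step_kernel_sum[OF hx(2)] by (simp add: ln_mult algebra_simps)
  qed auto
  finally show ?thesis by (simp add: K_def C_def c_def P'_def)
qed

lemma cum_leak_Suc: "cum_leak (Suc n) = cum_leak n + leak_incr n"
proof -
  have "cum_leak (Suc n) = (\<Sum>(xs,x,ss,s,ys)\<in>hists n. \<Sum>y\<in>{0..my}.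
      hist_weight n xs x ss s ys * q_step n xs x ss s ys y * (ln (policy_prod n xs ss ys) - ln (prob_ys n ys))
      + hist_weight n xs x ss s ys * q_step n xs x ss s ys y
        * (ln (q_step n xs x ss s ys y) - ln (prob_ys (Suc n) (ys @ [y])) + ln (prob_ys n ys)))"
    unfolding cum_leak_def sum_hists_Suc
    by (intro sum.cong refl) (auto simp: cum_leak_term_snoc)
  also have "\<dots> = (\<Sum>(xs,x,ss,s,ys)\<in>hists n.
      hist_weight n xs x ss s ys * (ln (policy_prod n xs ss ys) - ln (prob_ys n ys))
      + (\<Sum>y\<in>{0..my}. hist_weight n xs x ss s ys * q_step n xs x ss s ys y
        * (ln (q_step n xs x ss s ys y) - ln (prob_ys (Suc n) (ys @ [y])) + ln (prob_ys n ys))))"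
  proof (intro sum.cong refl, clarify)
    fix xs x ss s ys assume "(xs, x, ss, s, ys) \<in> hists n"
    then have "(\<Sum>y\<in>{0..my}. q_step n xs x ss s ys y) = 1"
      by (intro q_step_sum) (auto simp: hists_def)
    then show "(\<Sum>y\<in>{0..my}.
        hist_weight n xs x ss s ys * q_step n xs x ss s ys y * (ln (policy_prod n xs ss ys) - ln (prob_ys n ys))
      + hist_weight n xs x ss s ys * q_step n xs x ss s ys y
        * (ln (q_step n xs x ss s ys y) - ln (prob_ys (Suc n) (ys @ [y])) + ln (prob_ys n ys)))
      = hist_weight n xs x ss s ys * (ln (policy_prod n xs ss ys) - ln (prob_ys n ys))
      + (\<Sum>y\<in>{0..my}. hist_weight n xs x ss s ys * q_step n xs x ss s ys y
        * (ln (q_step n xs x ss s ys y) - ln (prob_ys (Suc n) (ys @ [y])) + ln (prob_ys n ys)))"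
      by (simp add: sum.distrib flip: sum_distrib_left sum_distrib_right)
  qed
  also have "\<dots> = cum_leak n + leak_incr n"
    by (simp add: cum_leak_def leak_incr_def sum.distrib split_beta)
  finally show ?thesis .
qed

lemma cum_leak_eq_sum: "cum_leak n = (\<Sum>i<n. leak_incr i)"
  by (induction n) (simp_all add: cum_leak_0 cum_leak_Suc)

definition kl_gap :: "nat \<Rightarrow> real" where
  "kl_gap n = (\<Sum>ys\<in>LY n. \<Sum>x\<in>{0..mx}. \<Sum>s\<in>{0..ms}. \<Sum>y\<in>{0..my}. \<Sum>xs\<in>LX n. \<Sum>ss\<in>LS n.
     hist_weight n xs x ss s ys * q_step n xs x ss s ys y * (ln (q_step n xs x ss s ys y) - ln (induced_action n ys x s y)))"

definition info_gain :: "nat \<Rightarrow> real" where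
  "info_gain n = (\<Sum>ys\<in>LY n. \<Sum>x\<in>{0..mx}. \<Sum>s\<in>{0..ms}. \<Sum>y\<in>{0..my}.
     bel_out n ys x s y * (ln (induced_action n ys x s y) - ln (prob_ys (Suc n) (ys @ [y])) + ln (prob_ys n ys)))"

lemma leak_incr_eq: "leak_incr n = kl_gap n + info_gain n"
proof -
  have "leak_incr n = (\<Sum>ys\<in>LY n. \<Sum>x\<in>{0..mx}. \<Sum>s\<in>{0..ms}. \<Sum>xs\<in>LX n. \<Sum>ss\<in>LS n. \<Sum>y\<in>{0..my}.
      hist_weight n xs x ss s ys * q_step n xs x ss s ys y
          * (ln (q_step n xs x ss s ys y) - ln (prob_ys (Suc n) (ys @ [y])) + ln (prob_ys n ys)))"
    unfolding leak_incr_def by (rule sum_hists_regroup)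
  also have "\<dots> = (\<Sum>ys\<in>LY n. \<Sum>x\<in>{0..mx}. \<Sum>s\<in>{0..ms}. \<Sum>y\<in>{0..my}. \<Sum>xs\<in>LX n. \<Sum>ss\<in>LS n.
      hist_weight n xs x ss s ys * q_step n xs x ss s ys y
          * (ln (q_step n xs x ss s ys y) - ln (prob_ys (Suc n) (ys @ [y])) + ln (prob_ys n ys)))"
    by (intro sum.cong refl sum_swap3)
  also have "\<dots> = (\<Sum>ys\<in>LY n. \<Sum>x\<in>{0..mx}. \<Sum>s\<in>{0..ms}. \<Sum>y\<in>{0..my}. \<Sum>xs\<in>LX n. \<Sum>ss\<in>LS n.
      hist_weight n xs x ss s ys * q_step n xs x ss s ys y * (ln (q_step n xs x ss s ys y) - ln (induced_action n ys x s y))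
      + hist_weight n xs x ss s ys * q_step n xs x ss s ys y
          * (ln (induced_action n ys x s y) - ln (prob_ys (Suc n) (ys @ [y])) + ln (prob_ys n ys)))"
    by (intro sum.cong refl) (simp add: algebra_simps)
  also have "\<dots> = kl_gap n + info_gain n"
    unfolding kl_gap_def info_gain_def bel_out_def by (simp add: sum.distrib sum_distrib_right)
  finally show ?thesis .
qed

lemma bel_out_le_prob_ys_snoc:
  assumes ys: "ys \<in> LY n" and "x \<in> {0..mx}" "s \<in> {0..ms}" and y: "y \<in> {0..my}"
  shows "bel_out n ys x s y \<le> prob_ys (Suc n) (ys @ [y])"
  unfolding prob_ys_Suc[OF ys y] using assms
  by (intro member_le_sum2[where f = "\<lambda>x s. bel_out n ys x s y"] bel_out_nonneg) auto

lemma prob_ys_mult_info_term: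
  assumes ys: "ys \<in> LY n" and p: "prob_ys n ys > 0"
    and xs: "x \<in> {0..mx}" "s \<in> {0..ms}" and y: "y \<in> {0..my}"
  shows "prob_ys n ys * info_term (posterior n ys) (induced_action n ys) x s y
    = bel_out n ys x s y * (ln (induced_action n ys x s y) - ln (prob_ys (Suc n) (ys @ [y])) + ln (prob_ys n ys))"
proof -
  have em: "induced_action n ys x s y * posterior n ys x s = bel_out n ys x s y / prob_ys n ys"
    using bel_unnorm_mult_induced_action[OF ys xs y] by (simp add: posterior_def field_simps)
  have Py: "out_prob (posterior n ys) (induced_action n ys) y = prob_ys (Suc n) (ys @ [y]) / prob_ys n ys"
    using prob_ys_mult_out_prob[OF ys y] p by (simp add: field_simps)
  show ?thesis
  proof (cases "bel_out n ys x s y = 0")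
    case False
    then have "bel_out n ys x s y > 0" using bel_out_nonneg[OF ys xs y] by simp
    then have p': "prob_ys (Suc n) (ys @ [y]) > 0" using bel_out_le_prob_ys_snoc[OF ys xs y] by simp
    have "induced_action n ys x s y * posterior n ys x s \<noteq> 0" using em False p by simp
    then show ?thesis using p p' by (simp add: info_term_def em Py ln_div)
  qed (simp add: info_term_def em)
qed

lemma info_gain_eq: "info_gain n = (\<Sum>ys\<in>LY n. prob_ys n ys * Ia mx my ms (induced_action n ys) (posterior n ys))"
  unfolding info_gain_def
proof (intro sum.cong refl)
  fix ys assume ys: "ys \<in> LY n"
  show "(\<Sum>x\<in>{0..mx}. \<Sum>s\<in>{0..ms}. \<Sum>y\<in>{0..my}. bel_out n ys x s y
        * (ln (induced_action n ys x s y) - ln (prob_ys (Suc n) (ys @ [y])) + ln (prob_ys n ys)))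
     = prob_ys n ys * Ia mx my ms (induced_action n ys) (posterior n ys)"
  proof (cases "prob_ys n ys = 0")
    case True
    then have "bel_unnorm n ys x s = 0" for x s
      using bel_unnorm_le_prob_ys[OF ys, of x s] bel_unnorm_nonneg[OF ys, of x s] by simp
    then have "bel_out n ys x s y = 0" if "x \<in> {0..mx}" "s \<in> {0..ms}" "y \<in> {0..my}" for x s y
      using bel_out_zero[OF ys that] by simp
    then show ?thesis using True by simp
  next
    case False
    then have p: "prob_ys n ys > 0" using prob_ys_nonneg[OF ys] by simp
    show ?thesis
      unfolding Ia_eq_sum_info_term[OF posterior_PXS[OF ys p] induced_action_Aset[OF ys]]
      by (simp add: sum_distrib_left prob_ys_mult_info_term[OF ys p])
  qed
qed

lemma hist_weight_le_bel_unnorm: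
  assumes "(xs, x, ss, s, ys) \<in> hists n"
  shows "hist_weight n xs x ss s ys \<le> bel_unnorm n ys x s"
  using assms unfolding hists_def bel_unnorm_def
  by (auto intro!: member_le_sum2 hist_weight_nonneg simp: finite_seqs)

lemma hist_weight_q_step_le_bel_out:
  assumes "(xs, x, ss, s, ys) \<in> hists n" "y \<in> {0..my}"
  shows "hist_weight n xs x ss s ys * q_step n xs x ss s ys y \<le> bel_out n ys x s y"
  using assms unfolding hists_def bel_out_def
  by (auto intro!: member_le_sum2 mult_nonneg_nonneg hist_weight_nonneg q_step_nonneg simp: finite_seqs)

lemma kl_term_ge:
  assumes h: "(xs, x, ss, s, ys) \<in> hists n" and y: "y \<in> {0..my}" and "bel_unnorm n ys x s \<noteq> 0"
  shows "hist_weight n xs x ss s ys * (q_step n xs x ss s ys y - induced_action n ys x s y)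
    \<le> hist_weight n xs x ss s ys * q_step n xs x ss s ys y
      * (ln (q_step n xs x ss s ys y) - ln (induced_action n ys x s y))"
proof -
  have hx: "xs \<in> LX n" "x \<in> {0..mx}" "ss \<in> LS n" "s \<in> {0..ms}" "ys \<in> LY n"
    using h by (auto simp: hists_def)
  define K where "K = hist_weight n xs x ss s ys"
  define c where "c = q_step n xs x ss s ys y"
  define e where "e = induced_action n ys x s y"
  have K0: "K \<ge> 0" using hist_weight_nonneg[OF hx] by (simp add: K_def)
  have c0: "c \<ge> 0" using q_step_nonneg[OF hx y] by (simp add: c_def)
  have e0: "e \<ge> 0" using Aset_nonneg[OF induced_action_Aset[OF hx(5)] hx(2,4) y] by (simp add: e_def)
  have "K * (c - e) \<le> K * c * (ln c - ln e)"
  proof (cases "K * c = 0")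
    case False
    then have "K > 0" "c > 0" using K0 c0 by auto
    then have "bel_out n ys x s y > 0"
      using hist_weight_q_step_le_bel_out[OF h y] by (simp add: K_def c_def) (smt (verit) mult_pos_pos)
    moreover have "bel_unnorm n ys x s > 0"
      using assms(3) bel_unnorm_nonneg[OF hx(5), of x s] by simp
    ultimately have "e > 0" by (simp add: e_def induced_action_def)
    then have "c - e \<le> c * (ln c - ln e)" using c0 by (intro diff_le_mult_ln_diff)
    then show ?thesis using K0 by (simp add: mult.assoc mult_left_mono)
  qed (use K0 e0 in auto)
  then show ?thesis by (simp add: K_def c_def e_def)
qed

lemma kl_gap_nonneg: "kl_gap n \<ge> 0"
  unfolding kl_gap_def
proof (rule sum_nonneg, rule sum_nonneg, rule sum_nonneg)
  fix ys x s assume h: "ys \<in> LY n" "x \<in> {0..mx}" "s \<in> {0..ms}"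
  show "0 \<le> (\<Sum>y\<in>{0..my}. \<Sum>xs\<in>LX n. \<Sum>ss\<in>LS n. hist_weight n xs x ss s ys * q_step n xs x ss s ys y
      * (ln (q_step n xs x ss s ys y) - ln (induced_action n ys x s y)))"
  proof (cases "bel_unnorm n ys x s = 0")
    case True
    then have "hist_weight n xs x ss s ys = 0" if "xs \<in> LX n" "ss \<in> LS n" for xs ss
      using hist_weight_le_bel_unnorm[of xs x ss s ys n] hist_weight_nonneg[OF that(1) h(2) that(2) h(3,1)]
        h that by (simp add: hists_def)
    then show ?thesis by simp
  next
    case False
    have "(\<Sum>y\<in>{0..my}. \<Sum>xs\<in>LX n. \<Sum>ss\<in>LS n.
        hist_weight n xs x ss s ys * (q_step n xs x ss s ys y - induced_action n ys x s y))
      = (\<Sum>xs\<in>LX n. \<Sum>ss\<in>LS n. hist_weight n xs x ss s ys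
          * ((\<Sum>y\<in>{0..my}. q_step n xs x ss s ys y) - (\<Sum>y\<in>{0..my}. induced_action n ys x s y)))"
      by (subst sum_swap3[symmetric]) (simp add: sum_distrib_left sum_subtractf right_diff_distrib)
    also have "\<dots> = 0"
      using q_step_sum[OF _ h(2) _ h(3,1)] Aset_sum[OF induced_action_Aset[OF h(1)] h(2,3)] by simp
    moreover have "(\<Sum>y\<in>{0..my}. \<Sum>xs\<in>LX n. \<Sum>ss\<in>LS n.
        hist_weight n xs x ss s ys * (q_step n xs x ss s ys y - induced_action n ys x s y))
      \<le> (\<Sum>y\<in>{0..my}. \<Sum>xs\<in>LX n. \<Sum>ss\<in>LS n. hist_weight n xs x ss s ys * q_step n xs x ss s ys y
          * (ln (q_step n xs x ss s ys y) - ln (induced_action n ys x s y)))"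
      using h False by (intro sum_mono kl_term_ge) (auto simp: hists_def)
    ultimately show ?thesis by simp
  qed
qed

lemma kl_gap_eq_0:
  assumes "\<And>xs x ss s ys y. (xs, x, ss, s, ys) \<in> hists n \<Longrightarrow> y \<in> {0..my}
      \<Longrightarrow> hist_weight n xs x ss s ys \<noteq> 0 \<Longrightarrow>
      q_step n xs x ss s ys y = induced_action n ys x s y"
  shows "kl_gap n = 0"
  unfolding kl_gap_def
proof (intro sum.neutral ballI)
  fix ys x s y xs ss assume h: "ys \<in> LY n" "x \<in> {0..mx}" "s \<in> {0..ms}" "y \<in> {0..my}" "xs \<in> LX n" "ss \<in> LS n"
  show "hist_weight n xs x ss s ys * q_step n xs x ss s ys y * (ln (q_step n xs x ss s ys y) - ln (induced_action n ys x s y)) = 0"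
  proof (cases "hist_weight n xs x ss s ys = 0")
    case False
    then have "q_step n xs x ss s ys y = induced_action n ys x s y" using assms[of xs x ss s ys y] h by (auto simp: hists_def)
    then show ?thesis by simp
  qed simp
qed

section \<open>Dynamic programming bound\<close>

definition value_to_go :: "nat \<Rightarrow> nat \<Rightarrow> real" where
  "value_to_go T n = (\<Sum>ys\<in>LY n. prob_ys n ys * W (T - n) (posterior n ys))"

lemma sum_prob_ys_mult_bellman:
  "(\<Sum>ys\<in>LY n. prob_ys n ys * bellman mx my ms Q (induced_action n ys) (W k) (posterior n ys))
   = info_gain n + (\<Sum>ys\<in>LY (Suc n). prob_ys (Suc n) ys * W k (posterior (Suc n) ys))"
proof -
  have "(\<Sum>ys\<in>LY n. prob_ys n ys * bellman mx my ms Q (induced_action n ys) (W k) (posterior n ys))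
    = (\<Sum>ys\<in>LY n. prob_ys n ys * Ia mx my ms (induced_action n ys) (posterior n ys)
        + (\<Sum>y\<in>{0..my}. prob_ys (Suc n) (ys @ [y]) * W k (posterior (Suc n) (ys @ [y]))))"
    by (intro sum.cong refl prob_ys_mult_bellman)
  then show ?thesis by (simp add: sum.distrib info_gain_eq sum_seqs_Suc)
qed

lemma prob_ys_mult_W_le_bellman:
  assumes "ys \<in> LY n"
  shows "prob_ys n ys * W (Suc k) (posterior n ys)
    \<le> prob_ys n ys * bellman mx my ms Q (induced_action n ys) (W k) (posterior n ys)"
proof (cases "prob_ys n ys = 0")
  case False
  then have "prob_ys n ys > 0" using prob_ys_nonneg[OF assms] by simp
  then show ?thesis
    using W_le_bellman[OF posterior_PXS[OF assms] induced_action_Aset[OF assms]]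
    by (intro mult_left_mono) auto
qed simp

lemma value_to_go_le:
  assumes "n < T"
  shows "value_to_go T n \<le> info_gain n + value_to_go T (Suc n)"
proof -
  have "T - n = Suc (T - Suc n)" using assms by simp
  then have "value_to_go T n
      \<le> (\<Sum>ys\<in>LY n. prob_ys n ys * bellman mx my ms Q (induced_action n ys) (W (T - Suc n)) (posterior n ys))"
    unfolding value_to_go_def by (metis (no_types, lifting) sum_mono prob_ys_mult_W_le_bellman)
  then show ?thesis by (simp add: sum_prob_ys_mult_bellman value_to_go_def)
qed

lemma value_to_go_eq:
  assumes "\<forall>ys\<in>LY n. prob_ys n ys > 0 \<longrightarrow>
      bellman mx my ms Q (induced_action n ys) (W (T - Suc n)) (posterior n ys) = W (T - n) (posterior n ys)"
  shows "value_to_go T n = info_gain n + value_to_go T (Suc n)"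
proof -
  have "value_to_go T n
      = (\<Sum>ys\<in>LY n. prob_ys n ys * bellman mx my ms Q (induced_action n ys) (W (T - Suc n)) (posterior n ys))"
    unfolding value_to_go_def
  proof (intro sum.cong refl)
    fix ys assume "ys \<in> LY n"
    then have "prob_ys n ys = 0 \<or> prob_ys n ys > 0" using prob_ys_nonneg by force
    then show "prob_ys n ys * W (T - n) (posterior n ys)
      = prob_ys n ys * bellman mx my ms Q (induced_action n ys) (W (T - Suc n)) (posterior n ys)"
      using assms \<open>ys \<in> LY n\<close> by auto
  qed
  then show ?thesis by (simp add: sum_prob_ys_mult_bellman value_to_go_def)
qed

lemma W_eq_value_to_go_telescope:
  "W T (pi1 mx ms PX1 PS1) = (\<Sum>n<T. value_to_go T n - value_to_go T (Suc n))"
  unfolding sum_lessThan_telescope' by (simp add: value_to_go_def seqs_0 prob_ys_0 posterior_0)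

lemma W_le_cum_leak: "W T (pi1 mx ms PX1 PS1) \<le> cum_leak T"
proof -
  have "W T (pi1 mx ms PX1 PS1) \<le> (\<Sum>n<T. info_gain n)"
    unfolding W_eq_value_to_go_telescope by (intro sum_mono) (auto dest: value_to_go_le)
  also have "\<dots> \<le> (\<Sum>n<T. leak_incr n)"
    using leak_incr_eq kl_gap_nonneg by (intro sum_mono) (simp add: add_increasing)
  finally show ?thesis by (simp add: cum_leak_eq_sum)
qed

lemma W_eq_cum_leak:
  assumes "\<And>n. n < T \<Longrightarrow> \<forall>ys\<in>LY n. prob_ys n ys > 0 \<longrightarrow>
      bellman mx my ms Q (induced_action n ys) (W (T - Suc n)) (posterior n ys) = W (T - n) (posterior n ys)"
    and "\<And>n. n < T \<Longrightarrow> kl_gap n = 0"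
  shows "W T (pi1 mx ms PX1 PS1) = cum_leak T"
proof -
  have "W T (pi1 mx ms PX1 PS1) = (\<Sum>n<T. info_gain n)"
    unfolding W_eq_value_to_go_telescope by (intro sum.cong) (simp_all add: value_to_go_eq assms(1))
  also have "\<dots> = (\<Sum>n<T. leak_incr n)"
    using leak_incr_eq assms(2) by (intro sum.cong) auto
  finally show ?thesis by (simp add: cum_leak_eq_sum)
qed

definition demand_prob :: "nat \<Rightarrow> int list \<Rightarrow> real" where
  "demand_prob n xs = (\<Prod>i<n. if i = 0 then PX1 (xs ! 0) else Q (xs ! (i - 1)) (xs ! i))"

lemma demand_prob_Suc:
  assumes "length xs = n"
  shows "demand_prob (Suc n) (xs @ [x]) = (if n = 0 then PX1 x else demand_prob n xs * Q (last xs) x)"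
proof -
  define g where "g xs' i = (if i = 0 then PX1 (xs' ! 0) else Q (xs' ! (i - 1)) (xs' ! i))" for xs' i
  have "g (xs @ [x]) i = g xs i" if "i < n" for i using that assms by (auto simp: g_def nth_append)
  then have "(\<Prod>i<n. g (xs @ [x]) i) = (\<Prod>i<n. g xs i)" by (intro prod.cong) auto
  moreover have "g (xs @ [x]) n = (if n = 0 then PX1 x else Q (last xs) x)"
  proof -
    have lst: "last xs = xs ! k" if "n = Suc k" for k
      using assms that by (metis diff_Suc_1 last_conv_nth length_greater_0_conv zero_less_Suc)
    show ?thesis using assms by (cases n) (auto simp: g_def nth_append lst)
  qed
  ultimately show ?thesis unfolding demand_prob_def g_def[symmetric] by (cases "n = 0") auto
qed

lemma demand_prob_nonneg: "xs \<in> LX n \<Longrightarrow> demand_prob n xs \<ge> 0"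
  unfolding demand_prob_def by (intro prod_nonneg) (auto intro!: PX1_nonneg Q_nonneg seqs_nth)

lemma joint_q_Suc_Suc:
  assumes "length xs = Suc m" "length ss = Suc m" "length ys = Suc m"
  shows "joint_q (Suc (Suc m)) (xs @ [x]) (ss @ [s]) (ys @ [y])
       = joint_q (Suc m) xs ss ys * step_kernel (last xs) (last ss) (last ys) x s * q_step (Suc m) xs x ss s ys y"
  using joint_q_Suc[OF assms] by (simp add: hist_weight_def)

lemma joint_q_1: "joint_q (Suc 0) [x] [s] [y] = PX1 x * PS1 s * q_step 0 [] x [] s [] y"
  using joint_q_Suc[of "[]" 0 "[]" "[]" x s y] by (simp add: hist_weight_def)

lemma joint_q_charge_in_range:
  assumes "xs \<in> LX (Suc m)" "ss \<in> LS (Suc m)" "ys \<in> LY (Suc m)" "joint_q (Suc m) xs ss ys \<noteq> 0"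
  shows "last ss - last xs + last ys \<in> {0..ms}"
proof -
  obtain xs0 x where xs: "xs = xs0 @ [x]" "xs0 \<in> LX m" "x \<in> {0..mx}" using assms(1) by (rule seqs_SucE)
  obtain ss0 s where ss: "ss = ss0 @ [s]" "ss0 \<in> LS m" "s \<in> {0..ms}" using assms(2) by (rule seqs_SucE)
  obtain ys0 y where ys: "ys = ys0 @ [y]" "ys0 \<in> LY m" "y \<in> {0..my}" using assms(3) by (rule seqs_SucE)
  have l: "length xs0 = m" "length ss0 = m" "length ys0 = m" using xs ss ys by (auto simp: seqs_def)
  have "q_step m xs0 x ss0 s ys0 y \<noteq> 0" using assms(4) unfolding xs ss ys joint_q_Suc[OF l] by auto
  then show ?thesis using q_step_charge_in_range[OF xs(2,3) ss(2,3) ys(2,3)] xs ss ys by simp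
qed

lemma joint_q_factor:
  "xs \<in> LX (Suc m) \<Longrightarrow> ss \<in> LS (Suc m) \<Longrightarrow> ys \<in> LY (Suc m)
      \<Longrightarrow> joint_q (Suc m) xs ss ys \<noteq> 0 \<Longrightarrow>
   joint_q (Suc m) xs ss ys = demand_prob (Suc m) xs * PS1 (ss ! 0) * policy_prod (Suc m) xs ss ys"
proof (induction m arbitrary: xs ss ys)
  case 0
  obtain xs0 x where xs: "xs = xs0 @ [x]" "xs0 \<in> LX 0" using 0(1) by (rule seqs_SucE)
  obtain ss0 s where ss: "ss = ss0 @ [s]" "ss0 \<in> LS 0" using 0(2) by (rule seqs_SucE)
  obtain ys0 y where ys: "ys = ys0 @ [y]" "ys0 \<in> LY 0" using 0(3) by (rule seqs_SucE)
  have "xs0 = []" "ss0 = []" "ys0 = []" using xs ss ys by (auto simp: seqs_0)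
  then show ?case using xs ss ys joint_q_1[of x s y] demand_prob_Suc[of "[]" 0 x] policy_prod_Suc[of "[]" 0 "[]" "[]" x s y]
    by (simp add: policy_prod_0)
next
  case (Suc m)
  obtain xs0 x where xs: "xs = xs0 @ [x]" "xs0 \<in> LX (Suc m)" "x \<in> {0..mx}" using Suc.prems(1) by (rule seqs_SucE)
  obtain ss0 s where ss: "ss = ss0 @ [s]" "ss0 \<in> LS (Suc m)" "s \<in> {0..ms}" using Suc.prems(2) by (rule seqs_SucE)
  obtain ys0 y where ys: "ys = ys0 @ [y]" "ys0 \<in> LY (Suc m)" "y \<in> {0..my}" using Suc.prems(3) by (rule seqs_SucE)
  have l: "length xs0 = Suc m" "length ss0 = Suc m" "length ys0 = Suc m" using xs ss ys by (auto simp: seqs_def)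
  have nz: "joint_q (Suc m) xs0 ss0 ys0 \<noteq> 0" "step_kernel (last xs0) (last ss0) (last ys0) x s \<noteq> 0"
    using Suc.prems(4) unfolding xs ss ys joint_q_Suc_Suc[OF l] by auto
  have iq: "step_kernel (last xs0) (last ss0) (last ys0) x s = Q (last xs0) x" using nz(2) by (auto simp: step_kernel_def split: if_splits)
  have IH: "joint_q (Suc m) xs0 ss0 ys0 = demand_prob (Suc m) xs0 * PS1 (ss0 ! 0) * policy_prod (Suc m) xs0 ss0 ys0"
    using Suc.IH[OF xs(2) ss(2) ys(2) nz(1)] .
  have s0: "(ss0 @ [s]) ! 0 = ss0 ! 0" using l by (simp add: nth_append)
  show ?case unfolding xs ss ys joint_q_Suc_Suc[OF l] policy_prod_Suc[OF l] demand_prob_Suc[OF l(1)] s0 iq IH by simp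
qed

lemma joint_q_charge_path_unique:
  "xs \<in> LX (Suc m) \<Longrightarrow> ss \<in> LS (Suc m) \<Longrightarrow> ss' \<in> LS (Suc m)
      \<Longrightarrow> ys \<in> LY (Suc m) \<Longrightarrow>
   joint_q (Suc m) xs ss ys \<noteq> 0 \<Longrightarrow> joint_q (Suc m) xs ss' ys \<noteq> 0
       \<Longrightarrow> ss ! 0 = ss' ! 0 \<Longrightarrow> ss = ss'"
proof (induction m arbitrary: xs ss ss' ys)
  case 0
  obtain ss0 s where ss: "ss = ss0 @ [s]" "ss0 \<in> LS 0" using 0(2) by (rule seqs_SucE)
  obtain ss0' s' where ss': "ss' = ss0' @ [s']" "ss0' \<in> LS 0" using 0(3) by (rule seqs_SucE)
  then show ?case using ss 0(7) by (auto simp: seqs_0)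
next
  case (Suc m)
  obtain xs0 x where xs: "xs = xs0 @ [x]" "xs0 \<in> LX (Suc m)" "x \<in> {0..mx}" using Suc.prems(1) by (rule seqs_SucE)
  obtain ss0 s where ss: "ss = ss0 @ [s]" "ss0 \<in> LS (Suc m)" "s \<in> {0..ms}" using Suc.prems(2) by (rule seqs_SucE)
  obtain ss0' s' where ss': "ss' = ss0' @ [s']" "ss0' \<in> LS (Suc m)" "s' \<in> {0..ms}" using Suc.prems(3) by (rule seqs_SucE)
  obtain ys0 y where ys: "ys = ys0 @ [y]" "ys0 \<in> LY (Suc m)" "y \<in> {0..my}" using Suc.prems(4) by (rule seqs_SucE)
  have l: "length xs0 = Suc m" "length ss0 = Suc m" "length ys0 = Suc m" "length ss0' = Suc m"
    using xs ss ss' ys by (auto simp: seqs_def)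
  have nz: "joint_q (Suc m) xs0 ss0 ys0 \<noteq> 0" "step_kernel (last xs0) (last ss0) (last ys0) x s \<noteq> 0"
    using Suc.prems(5) unfolding xs ss ys joint_q_Suc_Suc[OF l(1-3)] by auto
  have nz': "joint_q (Suc m) xs0 ss0' ys0 \<noteq> 0" "step_kernel (last xs0) (last ss0') (last ys0) x s' \<noteq> 0"
    using Suc.prems(6) unfolding xs ss' ys joint_q_Suc_Suc[OF l(1) l(4) l(3)] by auto
  have h0: "ss0 ! 0 = ss0' ! 0" using Suc.prems(7) l unfolding ss ss' by (simp add: nth_append)
  have "ss0 = ss0'" using Suc.IH[OF xs(2) ss(2) ss'(2) ys(2) nz(1) nz'(1) h0] .
  moreover have "s = last ss0 - last xs0 + last ys0" "s' = last ss0' - last xs0 + last ys0"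
    using nz(2) nz'(2) by (auto simp: step_kernel_def split: if_splits)
  ultimately show ?case using ss ss' by simp
qed

lemma sum_joint_q_snoc:
  assumes xs: "xs \<in> LX (Suc m)" "x \<in> {0..mx}" and ss: "ss \<in> LS (Suc m)" and ys: "ys \<in> LY (Suc m)"
  shows "(\<Sum>s\<in>{0..ms}. \<Sum>y\<in>{0..my}. joint_q (Suc (Suc m)) (xs @ [x]) (ss @ [s]) (ys @ [y]))
    = joint_q (Suc m) xs ss ys * Q (last xs) x"
proof -
  have l: "length xs = Suc m" "length ss = Suc m" "length ys = Suc m"
    using xs ss ys by (auto simp: seqs_def)
  have "(\<Sum>s\<in>{0..ms}. \<Sum>y\<in>{0..my}. joint_q (Suc (Suc m)) (xs @ [x]) (ss @ [s]) (ys @ [y]))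
      = (\<Sum>s\<in>{0..ms}. joint_q (Suc m) xs ss ys * step_kernel (last xs) (last ss) (last ys) x s
           * (\<Sum>y\<in>{0..my}. q_step (Suc m) xs x ss s ys y))"
    unfolding joint_q_Suc_Suc[OF l] by (simp add: sum_distrib_left)
  also have "\<dots> = (\<Sum>s\<in>{0..ms}. joint_q (Suc m) xs ss ys * step_kernel (last xs) (last ss) (last ys) x s)"
    using q_step_sum[OF xs ss _ ys] by simp
  also have "\<dots> = joint_q (Suc m) xs ss ys * Q (last xs) x"
  proof (cases "joint_q (Suc m) xs ss ys = 0")
    case False
    then have "last ss - last xs + last ys \<in> {0..ms}" by (rule joint_q_charge_in_range[OF xs(1) ss ys])
    then show ?thesis unfolding sum_distrib_left[symmetric] step_kernel_def
      using sum_indicator_mult[of "{0..ms}" "last ss - last xs + last ys" "\<lambda>_. Q (last xs) x"] by simp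
  qed simp
  finally show ?thesis .
qed

lemma sum_joint_q_initial_charge:
  "xs \<in> LX (Suc m) \<Longrightarrow> s1 \<in> {0..ms} \<Longrightarrow>
   (\<Sum>ys\<in>LY (Suc m). \<Sum>ss\<in>LS (Suc m). if ss ! 0 = s1 then joint_q (Suc m) xs ss ys else 0)
   = demand_prob (Suc m) xs * PS1 s1"
proof (induction m arbitrary: xs)
  case 0
  then obtain x where xs: "xs = [x]" "x \<in> {0..mx}" by (auto elim: seqs_SucE simp: seqs_0)
  have "(\<Sum>ys\<in>LY (Suc 0). \<Sum>ss\<in>LS (Suc 0). if ss ! 0 = s1 then joint_q (Suc 0) xs ss ys else 0)
     = (\<Sum>y\<in>{0..my}. PX1 x * PS1 s1 * q_step 0 [] x [] s1 [] y)"
    using 0(2) by (simp add: xs sum_seqs_1 joint_q_1 sum.delta)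
  also have "\<dots> = PX1 x * PS1 s1"
    using q_step_sum[of "[]" 0 x "[]" s1 "[]"] 0(2) xs(2) by (simp add: sum_distrib_left[symmetric] seqs_0)
  finally show ?case by (simp add: xs demand_prob_def)
next
  case (Suc m)
  obtain xs0 x where xs: "xs = xs0 @ [x]" "xs0 \<in> LX (Suc m)" "x \<in> {0..mx}"
    using Suc.prems(1) by (rule seqs_SucE)
  have l: "length xs0 = Suc m" using xs by (simp add: seqs_def)
  have inner: "(\<Sum>s\<in>{0..ms}. \<Sum>y\<in>{0..my}. if (ss @ [s]) ! 0 = s1 then joint_q (Suc (Suc m)) xs (ss @ [s]) (ys @ [y]) else 0)
      = (if ss ! 0 = s1 then joint_q (Suc m) xs0 ss ys else 0) * Q (last xs0) x"
    if "ss \<in> LS (Suc m)" "ys \<in> LY (Suc m)" for ss ys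
    using that sum_joint_q_snoc[OF xs(2,3) that] by (auto simp: xs(1) nth_append seqs_def)
  have "(\<Sum>ys\<in>LY (Suc (Suc m)). \<Sum>ss\<in>LS (Suc (Suc m)). if ss ! 0 = s1 then joint_q (Suc (Suc m)) xs ss ys else 0)
     = (\<Sum>ys\<in>LY (Suc m). \<Sum>y\<in>{0..my}. \<Sum>ss\<in>LS (Suc m). \<Sum>s\<in>{0..ms}.
          if (ss @ [s]) ! 0 = s1 then joint_q (Suc (Suc m)) xs (ss @ [s]) (ys @ [y]) else 0)"
    by (simp only: sum_seqs_Suc[where n="Suc m"] finite_atLeastAtMost_int)
  also have "\<dots> = (\<Sum>ys\<in>LY (Suc m). \<Sum>ss\<in>LS (Suc m). \<Sum>s\<in>{0..ms}. \<Sum>y\<in>{0..my}.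
          if (ss @ [s]) ! 0 = s1 then joint_q (Suc (Suc m)) xs (ss @ [s]) (ys @ [y]) else 0)"
    by (intro sum.cong refl sum_swap3[symmetric])
  also have "\<dots> = (\<Sum>ys\<in>LY (Suc m). \<Sum>ss\<in>LS (Suc m).
      (if ss ! 0 = s1 then joint_q (Suc m) xs0 ss ys else 0) * Q (last xs0) x)"
    by (intro sum.cong refl inner) auto
  also have "\<dots> = demand_prob (Suc m) xs0 * PS1 s1 * Q (last xs0) x"
    using Suc.IH[OF xs(2) Suc.prems(2)] by (simp add: sum_distrib_right[symmetric])
  finally show ?case by (simp add: xs demand_prob_Suc[OF l] mult_ac)
qed

lemma joint_q_mult_sum_step_kernel:
  assumes h: "xs \<in> LX (Suc m)" "ss \<in> LS (Suc m)" "ys \<in> LY (Suc m)"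
  shows "joint_q (Suc m) xs ss ys * (\<Sum>x\<in>{0..mx}. \<Sum>s\<in>{0..ms}. step_kernel (last xs) (last ss) (last ys) x s)
    = joint_q (Suc m) xs ss ys"
  using step_kernel_sum[OF seqs_last[OF h(1)] joint_q_charge_in_range[OF h]]
  by (cases "joint_q (Suc m) xs ss ys = 0") auto

lemma prob_ys_eq_sum_joint_q:
  assumes ys: "ys \<in> LY (Suc m)"
  shows "prob_ys (Suc m) ys = (\<Sum>xs\<in>LX (Suc m). \<Sum>ss\<in>LS (Suc m). joint_q (Suc m) xs ss ys)"
proof -
  have "prob_ys (Suc m) ys = (\<Sum>x\<in>{0..mx}. \<Sum>s\<in>{0..ms}. \<Sum>xs\<in>LX (Suc m). \<Sum>ss\<in>LS (Suc m).
      joint_q (Suc m) xs ss ys * step_kernel (last xs) (last ss) (last ys) x s)"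
    unfolding prob_ys_def bel_unnorm_def by (intro sum.cong refl) (simp add: hist_weight_def)
  also have "\<dots> = (\<Sum>xs\<in>LX (Suc m). \<Sum>ss\<in>LS (Suc m).
      joint_q (Suc m) xs ss ys * (\<Sum>x\<in>{0..mx}. \<Sum>s\<in>{0..ms}. step_kernel (last xs) (last ss) (last ys) x s))"
    by (subst sum_swap4) (simp add: sum_distrib_left)
  finally show ?thesis using ys by (simp add: joint_q_mult_sum_step_kernel)
qed

lemma cum_leak_eq_sum_joint_q: "cum_leak (Suc m) = (\<Sum>ys\<in>LY (Suc m). \<Sum>xs\<in>LX (Suc m). \<Sum>ss\<in>LS (Suc m).
    joint_q (Suc m) xs ss ys * (ln (policy_prod (Suc m) xs ss ys) - ln (prob_ys (Suc m) ys)))"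
proof -
  have "cum_leak (Suc m) = (\<Sum>ys\<in>LY (Suc m). \<Sum>x\<in>{0..mx}. \<Sum>s\<in>{0..ms}. \<Sum>xs\<in>LX (Suc m). \<Sum>ss\<in>LS (Suc m).
      joint_q (Suc m) xs ss ys * step_kernel (last xs) (last ss) (last ys) x s
      * (ln (policy_prod (Suc m) xs ss ys) - ln (prob_ys (Suc m) ys)))"
    unfolding cum_leak_def by (subst sum_hists_regroup) (simp add: hist_weight_def)
  also have "\<dots> = (\<Sum>ys\<in>LY (Suc m). \<Sum>xs\<in>LX (Suc m). \<Sum>ss\<in>LS (Suc m).
      joint_q (Suc m) xs ss ys * (\<Sum>x\<in>{0..mx}. \<Sum>s\<in>{0..ms}. step_kernel (last xs) (last ss) (last ys) x s)
      * (ln (policy_prod (Suc m) xs ss ys) - ln (prob_ys (Suc m) ys)))"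
    by (intro sum.cong refl, subst sum_swap4) (simp add: sum_distrib_left sum_distrib_right mult_ac)
  finally show ?thesis by (simp add: joint_q_mult_sum_step_kernel cong: sum.cong)
qed

definition joint_q_init :: "nat \<Rightarrow> int list \<times> int \<Rightarrow> int list \<Rightarrow> real" where
  "joint_q_init n = (\<lambda>(xs, s1) ys. \<Sum>ss\<in>{ss \<in> LS n. ss ! 0 = s1}. joint_q n xs ss ys)"

lemma leakage_eq_mutinf:
  "real (Suc m) * leakage mx my ms PX1 PS1 Q (Suc m) q = mutinf (LX (Suc m) \<times> {0..ms}) (LY (Suc m)) (joint_q_init (Suc m))"
  by (simp add: leakage_def joint_q_init_def joint_q_def del: of_nat_Suc)

lemma sum_joint_q_init_ys:
  assumes "xs \<in> LX (Suc m)" "s1 \<in> {0..ms}"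
  shows "(\<Sum>ys\<in>LY (Suc m). joint_q_init (Suc m) (xs, s1) ys) = demand_prob (Suc m) xs * PS1 s1"
  using sum_joint_q_initial_charge[OF assms]
  by (simp add: joint_q_init_def sum.inter_filter finite_seqs)

lemma sum_joint_q_init_xs_s1:
  assumes "ys \<in> LY (Suc m)"
  shows "(\<Sum>u\<in>LX (Suc m) \<times> {0..ms}. joint_q_init (Suc m) u ys) = prob_ys (Suc m) ys"
proof -
  have "(\<Sum>u\<in>LX (Suc m) \<times> {0..ms}. joint_q_init (Suc m) u ys)
      = (\<Sum>xs\<in>LX (Suc m). \<Sum>s1\<in>{0..ms}. \<Sum>ss\<in>{ss \<in> LS (Suc m). ss ! 0 = s1}. joint_q (Suc m) xs ss ys)"
    by (simp add: sum.cartesian_product joint_q_init_def split_beta)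
  also have "\<dots> = prob_ys (Suc m) ys"
    by (simp add: sum_seqs_group_first prob_ys_eq_sum_joint_q[OF assms])
  finally show ?thesis .
qed

lemma joint_q_le_prob_ys:
  assumes "xs \<in> LX (Suc m)" "ss \<in> LS (Suc m)" "ys \<in> LY (Suc m)"
  shows "joint_q (Suc m) xs ss ys \<le> prob_ys (Suc m) ys"
proof -
  have "joint_q (Suc m) xs ss ys \<le> (\<Sum>ss'\<in>LS (Suc m). joint_q (Suc m) xs ss' ys)"
    using assms by (intro member_le_sum) (auto simp: finite_seqs intro!: joint_q_nonneg)
  also have "\<dots> \<le> (\<Sum>xs'\<in>LX (Suc m). \<Sum>ss'\<in>LS (Suc m). joint_q (Suc m) xs' ss' ys)"
    using assms by (intro member_le_sum[where f="\<lambda>xs'. \<Sum>ss'\<in>LS (Suc m). joint_q (Suc m) xs' ss' ys"])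
      (auto simp: finite_seqs intro!: sum_nonneg joint_q_nonneg)
  finally show ?thesis using prob_ys_eq_sum_joint_q[OF assms(3)] by simp
qed

lemma xlog_ratio_joint_q:
  assumes h: "xs \<in> LX (Suc m)" "ss \<in> LS (Suc m)" "ys \<in> LY (Suc m)"
  shows "xlog_ratio (joint_q (Suc m) xs ss ys) (demand_prob (Suc m) xs * PS1 (ss ! 0) * prob_ys (Suc m) ys)
    = joint_q (Suc m) xs ss ys * (ln (policy_prod (Suc m) xs ss ys) - ln (prob_ys (Suc m) ys))"
proof (cases "joint_q (Suc m) xs ss ys = 0")
  case False
  then have J: "joint_q (Suc m) xs ss ys > 0" using joint_q_nonneg[OF h] by simp
  have fac: "joint_q (Suc m) xs ss ys = demand_prob (Suc m) xs * PS1 (ss ! 0) * policy_prod (Suc m) xs ss ys"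
    using joint_q_factor[OF h False] .
  have "demand_prob (Suc m) xs * PS1 (ss ! 0) \<ge> 0"
    using demand_prob_nonneg[OF h(1)] PS1_nonneg seqs_nth[OF h(2)] by simp
  then have D: "demand_prob (Suc m) xs * PS1 (ss ! 0) > 0" using fac False by (auto simp: less_le)
  then have C: "policy_prod (Suc m) xs ss ys > 0" using J fac by (metis zero_less_mult_pos)
  have P: "prob_ys (Suc m) ys > 0" using J joint_q_le_prob_ys[OF h] by simp
  show ?thesis using D C P by (subst (1 2) fac) (simp add: xlog_ratio_def ln_div ln_mult)
qed (simp add: xlog_ratio_def)

lemma leakage_eq_cum_leak: "real (Suc m) * leakage mx my ms PX1 PS1 Q (Suc m) q = cum_leak (Suc m)"
proof -
  let ?T = "Suc m"
  let ?w = "\<lambda>xs ss ys. demand_prob ?T xs * PS1 (ss ! 0) * prob_ys ?T ys"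
  have "mutinf (LX ?T \<times> {0..ms}) (LY ?T) (joint_q_init ?T)
     = (\<Sum>(xs, s1)\<in>LX ?T \<times> {0..ms}. \<Sum>ys\<in>LY ?T. xlog_ratio (joint_q_init ?T (xs, s1) ys)
         (demand_prob ?T xs * PS1 s1 * prob_ys ?T ys))"
    unfolding mutinf_eq_sum_xlog_ratio
    by (intro sum.cong refl) (auto simp: sum_joint_q_init_ys sum_joint_q_init_xs_s1)
  also have "\<dots> = (\<Sum>xs\<in>LX ?T. \<Sum>s1\<in>{0..ms}. \<Sum>ys\<in>LY ?T. \<Sum>ss\<in>{ss \<in> LS ?T.
      ss ! 0 = s1}. xlog_ratio (joint_q ?T xs ss ys) (?w xs ss ys))"
    unfolding sum.cartesian_product[symmetric]
  proof (intro sum.cong refl)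
    fix xs s1 ys assume h: "xs \<in> LX ?T" "s1 \<in> {0..ms}" "ys \<in> LY ?T"
    have "xlog_ratio (joint_q_init ?T (xs, s1) ys) (demand_prob ?T xs * PS1 s1 * prob_ys ?T ys)
        = (\<Sum>ss\<in>{ss \<in> LS ?T. ss ! 0 = s1}. xlog_ratio (joint_q ?T xs ss ys) (demand_prob ?T xs * PS1 s1 * prob_ys ?T ys))"
      unfolding joint_q_init_def prod.case using joint_q_charge_path_unique[OF h(1) _ _ h(3)]
      by (intro sum_single_nonzero_apply) (auto simp: finite_seqs xlog_ratio_def)
    then show "xlog_ratio (joint_q_init ?T (xs, s1) ys) (demand_prob ?T xs * PS1 s1 * prob_ys ?T ys)
        = (\<Sum>ss\<in>{ss \<in> LS ?T. ss ! 0 = s1}. xlog_ratio (joint_q ?T xs ss ys) (?w xs ss ys))"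
      by simp
  qed
  also have "\<dots> = (\<Sum>xs\<in>LX ?T. \<Sum>s1\<in>{0..ms}. \<Sum>ss\<in>{ss \<in> LS ?T. ss ! 0 = s1}.
      \<Sum>ys\<in>LY ?T. xlog_ratio (joint_q ?T xs ss ys) (?w xs ss ys))"
    by (intro sum.cong refl sum.swap)
  also have "\<dots> = (\<Sum>xs\<in>LX ?T. \<Sum>ss\<in>LS ?T. \<Sum>ys\<in>LY ?T. xlog_ratio (joint_q ?T xs ss ys) (?w xs ss ys))"
    by (intro sum.cong refl sum_seqs_group_first) simp
  also have "\<dots> = (\<Sum>xs\<in>LX ?T. \<Sum>ss\<in>LS ?T. \<Sum>ys\<in>LY ?T.
      joint_q ?T xs ss ys * (ln (policy_prod ?T xs ss ys) - ln (prob_ys ?T ys)))"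
    by (intro sum.cong refl xlog_ratio_joint_q)
  also have "\<dots> = (\<Sum>ys\<in>LY ?T. \<Sum>xs\<in>LX ?T. \<Sum>ss\<in>LS ?T.
      joint_q ?T xs ss ys * (ln (policy_prod ?T xs ss ys) - ln (prob_ys ?T ys)))"
    by (rule sum_swap3)
  also have "\<dots> = cum_leak ?T" by (rule cum_leak_eq_sum_joint_q[symmetric])
  finally show ?thesis by (simp only: leakage_eq_mutinf)
qed

lemma W_le_leakage:
  assumes "T \<ge> 1"
  shows "W T (pi1 mx ms PX1 PS1) / real T \<le> leakage mx my ms PX1 PS1 Q T q"
proof -
  obtain m where T: "T = Suc m" using assms by (cases T) auto
  have "W T (pi1 mx ms PX1 PS1) \<le> real T * leakage mx my ms PX1 PS1 Q T q"
    using W_le_cum_leak[of T] leakage_eq_cum_leak[of m] T by simp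
  then show ?thesis using assms by (simp add: field_simps)
qed

end

section \<open>The policy built from minimisers\<close>

locale smart_meter_selector = smart_meter +
  fixes PX1 PS1 :: "int \<Rightarrow> real" and T :: nat and f :: "nat \<Rightarrow> belief \<Rightarrow> action"
  assumes PX1: "is_pmf_on {0..mx} PX1" and PS1: "is_pmf_on {0..ms} PS1" and T1: "T \<ge> 1"
    and fcond: "\<And>t p. t \<in> {1..T} \<Longrightarrow> p \<in> PXS mx ms \<Longrightarrow> f t p \<in> Aset mx my ms
        \<and> bellman mx my ms Q (f t p) (Vfun mx my ms Q T (t + 1)) p = Vfun mx my ms Q T t p"
begin

abbreviation "p1 \<equiv> pi1 mx ms PX1 PS1"
abbreviation "bel \<equiv> beliefs mx ms Q f p1"
abbreviation "qopt \<equiv> qstar mx ms Q T f p1"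

lemma pi1_PXS: "p1 \<in> PXS mx ms"
proof -
  have "(\<Sum>x\<in>{0..mx}. \<Sum>s\<in>{0..ms}. PX1 x * PS1 s) = 1"
    using PX1 PS1 by (simp add: is_pmf_on_def sum_distrib_left[symmetric] sum_distrib_right[symmetric])
  then show ?thesis using PX1 PS1 by (auto simp: PXS_def pi1_def is_pmf_on_def)
qed

lemma f_Aset: "Suc n \<le> T \<Longrightarrow> p \<in> PXS mx ms \<Longrightarrow> f (Suc n) p \<in> Aset mx my ms"
  using fcond[of "Suc n" p] by auto

lemma f_bellman: "Suc n \<le> T \<Longrightarrow> p \<in> PXS mx ms
    \<Longrightarrow> bellman mx my ms Q (f (Suc n) p) (W (T - Suc n)) p = W (T - n) p"
  using fcond[of "Suc n" p] by (auto simp: Vfun_def Suc_diff_le)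

lemma beliefs_append: "n \<le> length ys \<Longrightarrow> bel (ys @ zs) n = bel ys n"
  by (induction n) (auto simp: nth_append)

lemma beliefs_PXS: "n \<le> T \<Longrightarrow> n \<le> length ys \<Longrightarrow> set ys \<subseteq> {0..my}
    \<Longrightarrow> bel ys n \<in> PXS mx ms"
proof (induction n)
  case 0 then show ?case using pi1_PXS by simp
next
  case (Suc n)
  have ih: "bel ys n \<in> PXS mx ms" using Suc by auto
  have "ys ! n \<in> set ys" using Suc.prems(2) by simp
  then have y: "ys ! n \<in> {0..my}" using Suc.prems(3) by blast
  show ?case using filt_PXS[OF ih f_Aset[OF Suc.prems(1) ih] y] by simp
qed

lemma qopt_policy: "qopt \<in> policies mx my ms"
  unfolding policies_def
proof (intro CollectI allI impI ballI)
  fix t xs ss ys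
  assume t: "t \<ge> 1" and xs: "xs \<in> seqs t {0..mx}" and ss: "ss \<in> seqs t {0..ms}"
    and ys: "ys \<in> seqs (t - 1) {0..my}"
  obtain n where n: "t = Suc n" using t by (cases t) auto
  have lx: "last xs \<in> {0..mx}" using seqs_last[of xs n "{0..mx}"] xs n by simp
  have ls: "last ss \<in> {0..ms}" using seqs_last[of ss n "{0..ms}"] ss n by simp
  define a where "a = (if t \<le> T then f t (bel ys (t - 1)) else a_default)"
  have aA: "a \<in> Aset mx my ms"
  proof (cases "t \<le> T")
    case True
    have "bel ys n \<in> PXS mx ms" using ys n True by (intro beliefs_PXS) (auto simp: seqs_def)
    then show ?thesis using True f_Aset n by (simp add: a_def)
  qed (simp add: a_def a_default_Aset)
  have "qopt t xs ss ys = a (last xs) (last ss)" by (simp add: qstar_def a_def fun_eq_iff)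
  then show "(\<forall>y\<in>{0..my}. 0 \<le> qopt t xs ss ys y) \<and> (\<Sum>y\<in>{0..my}. qopt t xs ss ys y) = 1
      \<and> (\<Sum>y\<in>Yo my ms (last ss - last xs). qopt t xs ss ys y) = 1"
    using aA lx ls by (simp add: Aset_def)
qed

end

sublocale smart_meter_selector \<subseteq> P: smart_meter_policy mx my ms Q PX1 PS1 qopt
  by unfold_locales (use PX1 PS1 qopt_policy in auto)

context smart_meter_selector begin

lemma q_step_qopt: "Suc n \<le> T \<Longrightarrow> P.q_step n xs x ss s ys y = f (Suc n) (bel ys n) x s y"
  by (simp add: P.q_step_def qstar_def)

lemma bel_out_qopt:
  assumes "Suc n \<le> T" "x \<in> {0..mx}" "s \<in> {0..ms}"
  shows "P.bel_out n ys x s y = P.bel_unnorm n ys x s * f (Suc n) (bel ys n) x s y"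
  using assms by (simp add: P.bel_out_def P.bel_unnorm_def q_step_qopt sum_distrib_right)

lemma induced_action_qopt:
  assumes "Suc n \<le> T" "x \<in> {0..mx}" "s \<in> {0..ms}" "P.bel_unnorm n ys x s \<noteq> 0"
  shows "P.induced_action n ys x s y = f (Suc n) (bel ys n) x s y"
  using assms bel_out_qopt[OF assms(1-3)] by (simp add: P.induced_action_def)

lemma induced_action_mult_posterior_qopt:
  assumes "Suc n \<le> T" "x \<in> {0..mx}" "s \<in> {0..ms}"
  shows "P.induced_action n ys x s y * P.posterior n ys x s = f (Suc n) (bel ys n) x s y * P.posterior n ys x s"
  using induced_action_qopt[OF assms] by (cases "P.bel_unnorm n ys x s = 0") (simp_all add: P.posterior_def)

lemma kl_gap_qopt: "Suc n \<le> T \<Longrightarrow> P.kl_gap n = 0"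
proof (rule P.kl_gap_eq_0)
  fix xs x ss s ys y assume n: "Suc n \<le> T" and h: "(xs, x, ss, s, ys) \<in> P.hists n" and y: "y \<in> {0..my}"
    and K: "P.hist_weight n xs x ss s ys \<noteq> 0"
  have hx: "x \<in> {0..mx}" "s \<in> {0..ms}" "ys \<in> P.LY n" "xs \<in> P.LX n" "ss \<in> P.LS n" using h by (auto simp: P.hists_def)
  have "P.hist_weight n xs x ss s ys \<ge> 0" using P.hist_weight_nonneg hx by auto
  then have "P.bel_unnorm n ys x s \<noteq> 0" using K P.hist_weight_le_bel_unnorm[OF h] by auto
  then show "P.q_step n xs x ss s ys y = P.induced_action n ys x s y" using induced_action_qopt[OF n hx(1,2)] q_step_qopt[OF n] by simp
qed

lemma posterior_eq_beliefs: "n \<le> T \<Longrightarrow> ys \<in> P.LY n \<Longrightarrow> P.prob_ys n ys > 0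
    \<Longrightarrow> P.posterior n ys = bel ys n"
proof (induction n arbitrary: ys)
  case 0 then show ?case by (simp add: seqs_0 P.posterior_0)
next
  case (Suc n)
  obtain ys0 y where ys: "ys = ys0 @ [y]" "ys0 \<in> P.LY n" "y \<in> {0..my}" using Suc.prems(2) by (rule seqs_SucE)
  have l: "length ys0 = n" using ys by (simp add: seqs_def)
  have p0: "P.prob_ys n ys0 > 0" using P.prob_ys_snoc_le[OF ys(2,3)] Suc.prems(3) ys by simp
  have ih: "P.posterior n ys0 = bel ys0 n" using Suc.IH[OF _ ys(2) p0] Suc.prems(1) by simp
  have "P.posterior (Suc n) ys = filt mx ms Q (P.posterior n ys0) y (P.induced_action n ys0)"
    using P.posterior_snoc[OF ys(2,3) p0] Suc.prems(3) ys by simp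
  also have "\<dots> = filt mx ms Q (P.posterior n ys0) y (f (Suc n) (bel ys0 n))"
    by (rule filt_supp_cong) (rule induced_action_mult_posterior_qopt[OF Suc.prems(1)])
  also have "\<dots> = bel ys (Suc n)" using ih l ys by (simp add: beliefs_append nth_append)
  finally show ?case .
qed

lemma bellman_induced_action_qopt:
  assumes n: "n < T" and ys: "ys \<in> P.LY n" and p: "P.prob_ys n ys > 0"
  shows "bellman mx my ms Q (P.induced_action n ys) (W (T - Suc n)) (P.posterior n ys) = W (T - n) (P.posterior n ys)"
proof -
  have n': "Suc n \<le> T" using n by simp
  have pb: "P.posterior n ys = bel ys n" using posterior_eq_beliefs[OF _ ys p] n by simp
  have piP: "P.posterior n ys \<in> PXS mx ms" by (rule P.posterior_PXS[OF ys p])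
  have "bellman mx my ms Q (P.induced_action n ys) (W (T - Suc n)) (P.posterior n ys)
      = bellman mx my ms Q (f (Suc n) (P.posterior n ys)) (W (T - Suc n)) (P.posterior n ys)"
    by (intro bellman_supp_cong) (simp add: induced_action_mult_posterior_qopt[OF n'] pb[symmetric])
  also have "\<dots> = W (T - n) (P.posterior n ys)" by (rule f_bellman[OF n' piP])
  finally show ?thesis .
qed

lemma leakage_qopt: "leakage mx my ms PX1 PS1 Q T qopt = W T p1 / real T"
proof -
  obtain m where T: "T = Suc m" using T1 by (cases T) auto
  have "W T p1 = P.cum_leak T"
    by (rule P.W_eq_cum_leak) (use bellman_induced_action_qopt kl_gap_qopt in auto)
  then show ?thesis using P.leakage_eq_cum_leak[of m] T by (simp add: field_simps)
qed

end

context smart_meter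
begin

lemma Vfun_eq_W:
  assumes "t \<le> T"
  shows "Vfun mx my ms Q T t = W (Suc (T - t))" and "Vfun mx my ms Q T (t + 1) = W (T - t)"
  using assms by (simp_all add: Vfun_def Suc_diff_le)

lemma Vfun_continuous_concave_attained:
  assumes "t \<in> {1..T}"
  shows "continuous_on (PXS mx ms) (Vfun mx my ms Q T t)
    \<and> concave_fun_on (PXS mx ms) (Vfun mx my ms Q T t)
    \<and> (\<forall>p\<in>PXS mx ms. \<exists>a\<in>Aset mx my ms.
          bellman mx my ms Q a (Vfun mx my ms Q T (t + 1)) p = Vfun mx my ms Q T t p)"
proof -
  have "t \<le> T" using assms by simp
  then show ?thesis unfolding Vfun_eq_W[OF \<open>t \<le> T\<close>] using W_continuous W_concave W_attained by blast
qed

lemma optimal_selector_exists: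
  "\<exists>f. \<forall>t\<in>{1..T}. \<forall>p\<in>PXS mx ms. f t p \<in> Aset mx my ms
     \<and> bellman mx my ms Q (f t p) (Vfun mx my ms Q T (t + 1)) p = Vfun mx my ms Q T t p"
proof -
  define f where "f t p = (SOME a. a \<in> Aset mx my ms
      \<and> bellman mx my ms Q a (Vfun mx my ms Q T (t + 1)) p = Vfun mx my ms Q T t p)" for t p
  have "\<forall>t\<in>{1..T}. \<forall>p\<in>PXS mx ms. f t p \<in> Aset mx my ms
     \<and> bellman mx my ms Q (f t p) (Vfun mx my ms Q T (t + 1)) p = Vfun mx my ms Q T t p"
  proof (intro ballI)
    fix t p assume "t \<in> {1..T}" "p \<in> PXS mx ms"
    then have "\<exists>a. a \<in> Aset mx my ms \<and> bellman mx my ms Q a (Vfun mx my ms Q T (t + 1)) p = Vfun mx my ms Q T t p"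
      using conjunct2[OF conjunct2[OF Vfun_continuous_concave_attained]] by blast
    then show "f t p \<in> Aset mx my ms \<and> bellman mx my ms Q (f t p) (Vfun mx my ms Q T (t + 1)) p = Vfun mx my ms Q T t p"
      unfolding f_def by (rule someI_ex)
  qed
  then show ?thesis by (rule exI[of _ f])
qed

lemma Vfun_le_leakage:
  assumes "is_pmf_on {0..mx} PX1" "is_pmf_on {0..ms} PS1" "T \<ge> 1" "q \<in> policies mx my ms"
  shows "Vfun mx my ms Q T 1 (pi1 mx ms PX1 PS1) / real T \<le> leakage mx my ms PX1 PS1 Q T q"
proof -
  interpret smart_meter_policy mx my ms Q PX1 PS1 q
    using assms mx0 mxy ms0 stoch by unfold_locales auto
  show ?thesis using W_le_leakage[OF assms(3)] by (simp add: Vfun_def)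
qed

lemma qstar_optimal:
  assumes "is_pmf_on {0..mx} PX1" "is_pmf_on {0..ms} PS1" "T \<ge> 1"
    and "\<forall>t\<in>{1..T}. \<forall>p\<in>PXS mx ms. f t p \<in> Aset mx my ms
           \<and> bellman mx my ms Q (f t p) (Vfun mx my ms Q T (t + 1)) p = Vfun mx my ms Q T t p"
  shows "qstar mx ms Q T f (pi1 mx ms PX1 PS1) \<in> policies mx my ms"
    and "leakage mx my ms PX1 PS1 Q T (qstar mx ms Q T f (pi1 mx ms PX1 PS1))
       = Vfun mx my ms Q T 1 (pi1 mx ms PX1 PS1) / real T"
proof -
  interpret smart_meter_selector mx my ms Q PX1 PS1 T f
    using assms mx0 mxy ms0 stoch by unfold_locales auto
  show "qopt \<in> policies mx my ms" by (rule qopt_policy)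
  show "leakage mx my ms PX1 PS1 Q T qopt = Vfun mx my ms Q T 1 p1 / real T"
    using leakage_qopt by (simp add: Vfun_def)
qed

end

theorem theorem1:
  fixes mx my ms :: int and Q :: "int \<Rightarrow> int \<Rightarrow> real"
    and PX1 PS1 :: "int \<Rightarrow> real" and T :: nat
  assumes "0 \<le> mx" and "mx \<le> my" and "0 \<le> ms"
    and "stochastic mx Q" and "irreducible_chain mx Q" and "aperiodic_chain mx Q"
    and "is_pmf_on {0..mx} PX1" and "is_pmf_on {0..ms} PS1"
    and "T \<ge> 1"
  shows
    "(\<forall>t\<in>{1..T}.
        continuous_on (PXS mx ms) (Vfun mx my ms Q T t)
      \<and> concave_fun_on (PXS mx ms) (Vfun mx my ms Q T t)
      \<and> (\<forall>p\<in>PXS mx ms. \<exists>a\<in>Aset mx my ms.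
            bellman mx my ms Q a (Vfun mx my ms Q T (t + 1)) p = Vfun mx my ms Q T t p))
   \<and> (\<forall>f. (\<forall>t\<in>{1..T}. \<forall>p\<in>PXS mx ms. f t p \<in> Aset mx my ms
              \<and> bellman mx my ms Q (f t p) (Vfun mx my ms Q T (t + 1)) p = Vfun mx my ms Q T t p)
          \<longrightarrow> qstar mx ms Q T f (pi1 mx ms PX1 PS1) \<in> policies mx my ms
            \<and> (\<forall>q\<in>policies mx my ms.
                 leakage mx my ms PX1 PS1 Q T (qstar mx ms Q T f (pi1 mx ms PX1 PS1))
                 \<le> leakage mx my ms PX1 PS1 Q T q))
   \<and> (\<exists>q\<in>policies mx my ms.
        leakage mx my ms PX1 PS1 Q T q = Vfun mx my ms Q T 1 (pi1 mx ms PX1 PS1) / real T)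
   \<and> (\<forall>q\<in>policies mx my ms.
        Vfun mx my ms Q T 1 (pi1 mx ms PX1 PS1) / real T \<le> leakage mx my ms PX1 PS1 Q T q)"
proof -
  interpret smart_meter mx my ms Q using assms by unfold_locales
  note pmfs = assms(7-9)
  obtain f0 where f0: "\<forall>t\<in>{1..T}. \<forall>p\<in>PXS mx ms. f0 t p \<in> Aset mx my ms
      \<and> bellman mx my ms Q (f0 t p) (Vfun mx my ms Q T (t + 1)) p = Vfun mx my ms Q T t p"
    using optimal_selector_exists by blast
  show ?thesis
    using Vfun_continuous_concave_attained qstar_optimal[OF pmfs] qstar_optimal[OF pmfs f0]
      Vfun_le_leakage[OF pmfs]
    by (intro conjI) (simp_all, blast)
qed

end
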